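(* Let $A\subseteq\Sigma^{**}$ and let $F\colon A\to\mathcal B$. Then $F$ is $A$-restricted polynomial-time computable if and only if $F$ is $A$-restricted strongly polynomial-time computable.
   Context: $\Sigma=\{0,1\}$, $\mathcal B=(\Sigma^* )^{\Sigma^*}$ is the set of total string functions; $\Sigma^{**}$ is the set of length-monotone $\varphi\in\mathcal B$, i.e. $|\mathbf a|\le|\mathbf b|\Rightarrow|\varphi(\mathbf a)|\le|\varphi(\mathbf b)|$. An oracle Turing machine $M^?$ with oracle $\varphi$ replaces, upon entering its query state, the query-tape content $\mathbf b$ by $\varphi(\mathbf b)$ in one time step; $\operatorname{time}_{M^\varphi}(\mathbf a)\in\mathbb N\cup\{\infty\}$ is its number of steps on input $\mathbf a$. $M^?$ computes $F\colon A\to\mathcal B$ if $M^\varphi=F(\varphi)$ for all $\varphi\in A$. Size function: $|\varphi|(n)=\max\{|\varphi(\mathbf a)|:|\mathbf a|\le n\}$. Second-order polynomials: smallest class of functions $\mathbb N^{\mathbb N}\times\mathbb N\to\mathbb N$ containing $(l,n)\mapsto p(n)$ for polynomials $p$ with natural coefficients, closed under pointwise sum, product and $P\mapsto P^+$, $P^+(l,n)=l(P(l,n))$. $F$ is $A$-restricted polynomial-time computable if some machine computing $F$ satisfies $\operatorname{time}_{M^\varphi}(\mathbf a)\le P(|\varphi|,|\mathbf a|)$ for all $\varphi\in A$, $\mathbf a$, for some second-order polynomial $P$. Length revision function: with $\mathbf b_k$ the oracle answer tape content at step $k$, $o_{\varphi,\mathbf a}(0)=|\mathbf a|$, $o_{\varphi,\mathbf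 a}(n+1)=\max\{o_{\varphi,\mathbf a}(n),|\mathbf b_{n+1}|\}$. $F$ is $A$-restricted strongly polynomial-time computable if some machine $M^?$ computing $F$ admits a polynomial $t$ and $N\in\mathbb N$ such that for all $\varphi\in A$, $\mathbf a\in\Sigma^*$: $n\le t(o_{\varphi,\mathbf a}(n))$ for every $n\le\operatorname{time}_{M^\varphi}(\mathbf a)$, and $\#o_{\varphi,\mathbf a}(\mathbb N)\le N$. *)

theory Defs
  imports "HOL-Computational_Algebra.Polynomial" "HOL-Library.Extended_Nat"
begin

text \<open>Sigma = {0,1} is modelled by bool (False = 0, True = 1); Sigma* is bool list.
  The set B of total string functions is bool list => bool list.\<close>

type_synonym bstr = "bool list"
type_synonym sfun = "bstr \<Rightarrow> bstr"

definition length_monotone :: "sfun set" where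
  "length_monotone = {\<phi>. \<forall>a b. length a \<le> length b \<longrightarrow> length (\<phi> a) \<le> length (\<phi> b)}"

definition size_fn :: "sfun \<Rightarrow> nat \<Rightarrow> nat" where
  "size_fn \<phi> n = Max ((\<lambda>a. length (\<phi> a)) ` {a. length a \<le> n})"

inductive_set sopoly :: "((nat \<Rightarrow> nat) \<Rightarrow> nat \<Rightarrow> nat) set" where
  sp_poly: "(\<lambda>l n. poly p n) \<in> sopoly" for p :: "nat poly"
| sp_add: "P \<in> sopoly \<Longrightarrow> Q \<in> sopoly \<Longrightarrow> (\<lambda>l n. P l n + Q l n) \<in> sopoly"
| sp_mult: "P \<in> sopoly \<Longrightarrow> Q \<in> sopoly \<Longrightarrow> (\<lambda>l n. P l n * Q l n) \<in> sopoly"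
| sp_app: "P \<in> sopoly \<Longrightarrow> (\<lambda>l n. l (P l n)) \<in> sopoly"

text \<open>Tape symbols are natural numbers: 0 = blank, 1 = the bit 0, 2 = the bit 1
  (further symbols below otm_nsyms are allowed as auxiliary work symbols).
  Tapes: 0 = input, 1 = output, 2 = oracle query tape, 3 = oracle answer tape
  (read-only for the machine), 4.. = work tapes.\<close>

type_synonym tape = "(nat \<Rightarrow> nat) \<times> nat"
type_synonym config = "nat \<times> tape list"

definition sym_of :: "bool \<Rightarrow> nat" where
  "sym_of b = (if b then 2 else 1)"

definition tape_of_string :: "bstr \<Rightarrow> tape" where
  "tape_of_string w = ((\<lambda>i. if i < length w then sym_of (w ! i) else 0), 0)"

definition blank_tape :: tape where
  "blank_tape = ((\<lambda>_. 0), 0)"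

definition string_of_cells :: "(nat \<Rightarrow> nat) \<Rightarrow> bstr" where
  "string_of_cells c = (if \<exists>i. c i \<notin> {1,2}
      then map (\<lambda>i. c i = 2) [0..<(LEAST i. c i \<notin> {1,2})] else [])"

record otm =
  otm_ntapes :: nat
  otm_nstates :: nat
  otm_nsyms :: nat
  otm_start :: nat
  otm_halt :: nat
  otm_query :: nat
  otm_after_query :: nat
  otm_delta :: "nat \<Rightarrow> nat list \<Rightarrow> nat \<times> (nat \<times> nat) list"

text \<open>Well-formedness: finitely many states and symbols, transition function
  stays within them; moves 0 = left, 1 = stay, 2 = right.\<close>
definition wf_otm :: "otm \<Rightarrow> bool" where
  "wf_otm M \<longleftrightarrow> 4 \<le> otm_ntapes M \<and> 3 \<le> otm_nsyms M \<and>
     otm_start M < otm_nstates M \<and> otm_halt M < otm_nstates M \<and>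
     otm_query M < otm_nstates M \<and> otm_after_query M < otm_nstates M \<and>
     (\<forall>q < otm_nstates M. \<forall>ss. length ss = otm_ntapes M \<and> (\<forall>s\<in>set ss. s < otm_nsyms M) \<longrightarrow>
        (case otm_delta M q ss of (q', acts) \<Rightarrow>
           q' < otm_nstates M \<and> length acts = otm_ntapes M \<and>
           (\<forall>(w, m)\<in>set acts. w < otm_nsyms M \<and> m \<le> 2)))"

definition move_head :: "nat \<Rightarrow> nat \<Rightarrow> nat" where
  "move_head h m = (if m = 0 then h - 1 else if m = 1 then h else h + 1)"

definition apply_act :: "nat \<Rightarrow> tape \<Rightarrow> nat \<times> nat \<Rightarrow> tape" where
  "apply_act i t a = (case t of (c, h) \<Rightarrow> case a of (w, m) \<Rightarrow>
     if i = 3 then (c, move_head h m) else (c(h := w), move_head h m))"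

definition otm_step :: "otm \<Rightarrow> sfun \<Rightarrow> config \<Rightarrow> config" where
  "otm_step M \<phi> cfg = (case cfg of (q, ts) \<Rightarrow>
     if q = otm_halt M then (q, ts)
     else if q = otm_query M then
       (otm_after_query M,
        ts[2 := blank_tape, 3 := tape_of_string (\<phi> (string_of_cells (fst (ts ! 2))))])
     else (case otm_delta M q (map (\<lambda>(c, h). c h) ts) of (q', acts) \<Rightarrow>
       (q', map (\<lambda>(i, t, a). apply_act i t a) (zip [0..<length ts] (zip ts acts)))))"

definition otm_init :: "otm \<Rightarrow> bstr \<Rightarrow> config" where
  "otm_init M a = (otm_start M, tape_of_string a # replicate (otm_ntapes M - 1) blank_tape)"

definition otm_run :: "otm \<Rightarrow> sfun \<Rightarrow> bstr \<Rightarrow> nat \<Rightarrow> config" where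
  "otm_run M \<phi> a n = (otm_step M \<phi> ^^ n) (otm_init M a)"

definition otm_halted :: "otm \<Rightarrow> sfun \<Rightarrow> bstr \<Rightarrow> nat \<Rightarrow> bool" where
  "otm_halted M \<phi> a n \<longleftrightarrow> fst (otm_run M \<phi> a n) = otm_halt M"

definition otm_time :: "otm \<Rightarrow> sfun \<Rightarrow> bstr \<Rightarrow> enat" where
  "otm_time M \<phi> a = (if \<exists>n. otm_halted M \<phi> a n
      then enat (LEAST n. otm_halted M \<phi> a n) else \<infinity>)"

definition otm_output :: "otm \<Rightarrow> sfun \<Rightarrow> bstr \<Rightarrow> bstr" where
  "otm_output M \<phi> a = string_of_cells (fst (snd (otm_run M \<phi> a (LEAST n. otm_halted M \<phi> a n)) ! 1))"

definition otm_computes :: "otm \<Rightarrow> (sfun \<Rightarrow> sfun) \<Rightarrow> sfun set \<Rightarrow> bool" where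
  "otm_computes M F A \<longleftrightarrow> wf_otm M \<and>
     (\<forall>\<phi>\<in>A. \<forall>a. otm_time M \<phi> a \<noteq> \<infinity> \<and> otm_output M \<phi> a = F \<phi> a)"

definition poly_time_computable :: "sfun set \<Rightarrow> (sfun \<Rightarrow> sfun) \<Rightarrow> bool" where
  "poly_time_computable A F \<longleftrightarrow> (\<exists>M. otm_computes M F A \<and>
     (\<exists>P\<in>sopoly. \<forall>\<phi>\<in>A. \<forall>a. otm_time M \<phi> a \<le> enat (P (size_fn \<phi>) (length a))))"

definition answer_len :: "otm \<Rightarrow> sfun \<Rightarrow> bstr \<Rightarrow> nat \<Rightarrow> nat" where
  "answer_len M \<phi> a k = length (string_of_cells (fst (snd (otm_run M \<phi> a k) ! 3)))"

primrec length_revision :: "otm \<Rightarrow> sfun \<Rightarrow> bstr \<Rightarrow> nat \<Rightarrow> nat" where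
  "length_revision M \<phi> a 0 = length a"
| "length_revision M \<phi> a (Suc n) = max (length_revision M \<phi> a n) (answer_len M \<phi> a (Suc n))"

definition strongly_poly_time_computable :: "sfun set \<Rightarrow> (sfun \<Rightarrow> sfun) \<Rightarrow> bool" where
  "strongly_poly_time_computable A F \<longleftrightarrow> (\<exists>M. otm_computes M F A \<and>
     (\<exists>(t :: nat poly) (N :: nat). \<forall>\<phi>\<in>A. \<forall>a.
        (\<forall>n. enat n \<le> otm_time M \<phi> a \<longrightarrow> n \<le> poly t (length_revision M \<phi> a n)) \<and>
        finite (range (length_revision M \<phi> a)) \<and>
        card (range (length_revision M \<phi> a)) \<le> N))"

end

theory Submission
  imports Defs "HOL-Library.Nat_Bijection"
begin

text \<open>
  If a machine runs in strongly polynomial time, then between two changes of its length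
  revision it makes at most \<open>t(o)\<close> steps, where \<open>o\<close> is the current value, and the next value is
  the length of an answer to a query of length at most \<open>t(o) + 1\<close>, hence at most \<open>|\<phi>|(t(o) + 1)\<close>.
  Iterating this \<open>N\<close> times yields a second-order polynomial bound on the running time.

  Conversely, let \<open>M\<close> run in time \<open>P(|\<phi>|, n)\<close>. For length-monotone \<open>\<phi>\<close> the size function is
  \<open>|\<phi>|(K) = |\<phi>(1\<^sup>K)|\<close>, and \<open>P\<close> is dominated by an iterated budget \<open>K\<^sub>0, \<dots>, K\<^sub>d\<close> built from
  squaring and from \<open>|\<phi>|\<close>. The clocked machine first computes this budget: it squares a unary
  counter and queries the unary string of length \<open>K\<^sub>r\<close> to learn \<open>|\<phi>|(K\<^sub>r)\<close>, so that during round \<open>r\<close> its running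
  time is polynomial in the current length revision. Then it simulates \<open>M\<close>, which halts within
  \<open>K\<^sub>d\<close> steps and therefore never receives an answer longer than \<open>|\<phi>|(K\<^sub>d)\<close>: the length
  revision no longer changes, and it takes at most \<open>d + 2\<close> values overall.
\<close>


lemma finite_strings_length_le: "finite {a::bstr. length a \<le> n}"
proof -
  have "{a::bstr. length a \<le> n} = {xs. set xs \<subseteq> UNIV \<and> length xs \<le> n}" by auto
  thus ?thesis using finite_lists_length_le[of "UNIV::bool set" n] by simp
qed

lemma length_le_size_fn: "length b \<le> n \<Longrightarrow> length (\<phi> b) \<le> size_fn \<phi> n"
  unfolding size_fn_def by (rule Max_ge) (use finite_strings_length_le in auto)

lemma size_fn_mono: "n \<le> m \<Longrightarrow> size_fn \<phi> n \<le> size_fn \<phi> m"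
  unfolding size_fn_def
  by (rule Max_mono) (use finite_strings_length_le in \<open>auto intro: exI[of _ "[]"]\<close>)

lemma mono_size_fn: "mono (size_fn \<phi>)"
  by (simp add: monoI size_fn_mono)

lemma size_fn_length_monotone: assumes "\<phi> \<in> length_monotone"
  shows "size_fn \<phi> n = length (\<phi> (replicate n True))"
proof -
  have fin: "finite ((\<lambda>a. length (\<phi> a)) ` {a. length a \<le> n})" using finite_strings_length_le by auto
  have "size_fn \<phi> n \<le> length (\<phi> (replicate n True))"
    unfolding size_fn_def
    apply (rule Max.boundedI[OF fin])
    using assms unfolding length_monotone_def by (auto intro: exI[of _ "[]"])
  moreover have "length (\<phi> (replicate n True)) \<le> size_fn \<phi> n" by (rule length_le_size_fn) simp
  ultimately show ?thesis by simp
qed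

lemma string_of_tape_of_string: "string_of_cells (fst (tape_of_string w)) = w"
proof -
  let ?c = "fst (tape_of_string w)"
  have c: "?c = (\<lambda>i. if i < length w then sym_of (w ! i) else 0)" by (simp add: tape_of_string_def)
  have L: "(LEAST i. ?c i \<notin> {1,2}) = length w"
    by (rule Least_equality) (auto simp: c sym_of_def not_less split: if_splits)
  have ex: "\<exists>i. ?c i \<notin> {1,2}" by (rule exI[of _ "length w"]) (simp add: c)
  show ?thesis unfolding string_of_cells_def using ex L
    by (auto simp: c sym_of_def intro!: nth_equalityI)
qed

lemma length_string_of_cells_le: assumes "\<forall>i\<ge>k. c i = 0" shows "length (string_of_cells c) \<le> k"
proof -
  have ex: "\<exists>i. c i \<notin> {1,2}" using assms by (intro exI[of _ k]) auto
  have "(LEAST i. c i \<notin> {1,2}) \<le> k" by (rule Least_le) (use assms in auto)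
  thus ?thesis unfolding string_of_cells_def using ex by simp
qed

lemma string_of_cells_blank: "string_of_cells (\<lambda>_. 0) = []"
  using length_string_of_cells_le[of 0 "\<lambda>_. 0"] by simp

lemma string_of_cells_unary: "string_of_cells (\<lambda>i. if i < L then 2 else 0) = replicate L True"
proof -
  let ?c = "(\<lambda>i. if i < L then 2 else (0::nat))"
  have L: "(LEAST i. ?c i \<notin> {1,2}) = L"
    by (rule Least_equality) (auto simp: not_less split: if_splits)
  have ex: "\<exists>i. ?c i \<notin> {1,2}" by (rule exI[of _ L]) simp
  show ?thesis unfolding string_of_cells_def using ex L
    by (auto intro!: nth_equalityI)
qed

lemma otm_run_Suc: "otm_run M \<phi> a (Suc n) = otm_step M \<phi> (otm_run M \<phi> a n)"
  by (simp add: otm_run_def)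

lemma otm_run_add: "otm_run M \<phi> a (n + m) = (otm_step M \<phi> ^^ m) (otm_run M \<phi> a n)"
  by (simp add: otm_run_def funpow_add add.commute)

lemma otm_run_0: "otm_run M \<phi> a 0 = otm_init M a"
  by (simp add: otm_run_def)

lemma otm_step_halted: "fst c = otm_halt M \<Longrightarrow> otm_step M \<phi> c = c"
  by (cases c) (simp add: otm_step_def)

lemma otm_halted_Suc: "otm_halted M \<phi> a n \<Longrightarrow> otm_halted M \<phi> a (Suc n)"
  unfolding otm_halted_def by (simp add: otm_run_Suc otm_step_halted)

lemma otm_halted_mono: "otm_halted M \<phi> a n \<Longrightarrow> n \<le> m \<Longrightarrow> otm_halted M \<phi> a m"
  by (induction m) (auto simp: le_Suc_eq otm_halted_Suc)

lemma otm_run_halted_const: "otm_halted M \<phi> a n \<Longrightarrow> n \<le> m \<Longrightarrow> otm_run M \<phi> a m = otm_run M \<phi> a n"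
proof (induction m)
  case (Suc m)
  then show ?case
    by (cases "n = Suc m") (auto simp: le_Suc_eq otm_run_Suc otm_step_halted otm_halted_def)
qed simp

lemma otm_time_eqI:
  assumes "otm_halted M \<phi> a N" "\<And>n. n < N \<Longrightarrow> \<not> otm_halted M \<phi> a n"
  shows "otm_time M \<phi> a = enat N" "(LEAST n. otm_halted M \<phi> a n) = N"
proof -
  show L: "(LEAST n. otm_halted M \<phi> a n) = N"
    by (rule Least_equality) (use assms in \<open>auto simp: not_le[symmetric]\<close>)
  show "otm_time M \<phi> a = enat N" unfolding otm_time_def using assms L by auto
qed

lemma otm_time_first_halt:
  assumes "otm_halted M \<phi> a N" "N = 0 \<or> \<not> otm_halted M \<phi> a (N - 1)"
  shows "otm_time M \<phi> a = enat N" "(LEAST n. otm_halted M \<phi> a n) = N"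
proof -
  have "\<And>n. n < N \<Longrightarrow> \<not> otm_halted M \<phi> a n"
    using assms(2) otm_halted_mono[of M \<phi> a _ "N - 1"] by fastforce
  thus "otm_time M \<phi> a = enat N" "(LEAST n. otm_halted M \<phi> a n) = N"
    using otm_time_eqI assms(1) by blast+
qed

lemma otm_time_enatD:
  assumes "otm_time M \<phi> a = enat T"
  shows "otm_halted M \<phi> a T" "\<forall>j<T. \<not> otm_halted M \<phi> a j" "(LEAST n. otm_halted M \<phi> a n) = T"
proof -
  have ex: "\<exists>n. otm_halted M \<phi> a n" using assms by (auto simp: otm_time_def split: if_splits)
  then have L: "(LEAST n. otm_halted M \<phi> a n) = T" using assms by (simp add: otm_time_def)
  show "otm_halted M \<phi> a T" using LeastI_ex[OF ex] L by simp
  show "\<forall>j<T. \<not> otm_halted M \<phi> a j" using not_less_Least L by blast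
  show "(LEAST n. otm_halted M \<phi> a n) = T" by (rule L)
qed

lemma otm_step_transition:
  assumes "q \<noteq> otm_halt M" "q \<noteq> otm_query M"
    "otm_delta M q (map (\<lambda>(c, h). c h) ts) = (q', acts)" "length acts = length ts"
  shows "otm_step M \<phi> (q, ts) = (q', map (\<lambda>i. apply_act i (ts ! i) (acts ! i)) [0..<length ts])"
  using assms by (auto simp: otm_step_def intro!: nth_equalityI)

lemma otm_step_query:
  assumes "q \<noteq> otm_halt M" "q = otm_query M"
  shows "otm_step M \<phi> (q, ts) = (otm_after_query M,
        ts[2 := blank_tape, 3 := tape_of_string (\<phi> (string_of_cells (fst (ts ! 2))))])"
  using assms by (auto simp: otm_step_def)


definition run_inv :: "otm \<Rightarrow> sfun \<Rightarrow> nat \<Rightarrow> config \<Rightarrow> bool" where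
  "run_inv M \<phi> k c \<longleftrightarrow> fst c < otm_nstates M \<and> length (snd c) = otm_ntapes M \<and>
    (\<forall>t\<in>set (snd c). \<forall>i. fst t i < otm_nsyms M) \<and>
    (\<forall>i\<ge>k. fst (snd c ! 2) i = 0) \<and> snd (snd c ! 2) \<le> k \<and>
    (fst (snd c ! 3) = (\<lambda>_. 0) \<or> (\<exists>b. length b \<le> k \<and> fst (snd c ! 3) = fst (tape_of_string (\<phi> b))))"

lemma wf_otmD: assumes "wf_otm M"
  shows "4 \<le> otm_ntapes M \<and> 3 \<le> otm_nsyms M \<and>
     otm_start M < otm_nstates M \<and> otm_halt M < otm_nstates M \<and>
     otm_query M < otm_nstates M \<and> otm_after_query M < otm_nstates M"
    "\<forall>q < otm_nstates M. \<forall>ss. length ss = otm_ntapes M \<and> (\<forall>s\<in>set ss. s < otm_nsyms M) \<longrightarrow>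
        (case otm_delta M q ss of (q', acts) \<Rightarrow>
           q' < otm_nstates M \<and> length acts = otm_ntapes M \<and>
           (\<forall>(w, m)\<in>set acts. w < otm_nsyms M \<and> m \<le> 2))"
  using assms unfolding wf_otm_def by simp_all

lemma wf_otm_basic: assumes "wf_otm M"
  shows "4 \<le> otm_ntapes M" "3 \<le> otm_nsyms M" "otm_start M < otm_nstates M" "otm_halt M < otm_nstates M"
    "otm_query M < otm_nstates M" "otm_after_query M < otm_nstates M"
  using wf_otmD(1)[OF assms] by simp_all

lemma wf_otm_delta:
  assumes "wf_otm M" "q < otm_nstates M" "length ss = otm_ntapes M" "\<forall>s\<in>set ss. s < otm_nsyms M"
    "otm_delta M q ss = (q', acts)"
  shows "q' < otm_nstates M" "length acts = otm_ntapes M" "\<And>i. i < length acts \<Longrightarrow> fst (acts ! i) < otm_nsyms M \<and> snd (acts ! i) \<le> 2"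
proof -
  have C: "case otm_delta M q ss of (q', acts) \<Rightarrow>
           q' < otm_nstates M \<and> length acts = otm_ntapes M \<and>
           (\<forall>(w, m)\<in>set acts. w < otm_nsyms M \<and> m \<le> 2)"
    by (rule wf_otmD(2)[OF assms(1), rule_format, OF assms(2) conjI[OF assms(3,4)]])
  have H: "q' < otm_nstates M \<and> length acts = otm_ntapes M \<and> (\<forall>(w, m)\<in>set acts. w < otm_nsyms M \<and> m \<le> 2)"
    using C unfolding assms(5) by simp
  show "q' < otm_nstates M" "length acts = otm_ntapes M" using H by auto
  fix i assume "i < length acts"
  then have "acts ! i \<in> set acts" by simp
  moreover obtain w m where wm: "acts ! i = (w, m)" by fastforce
  ultimately have "(w, m) \<in> set acts" by simp
  then have "w < otm_nsyms M \<and> m \<le> 2" using H by fastforce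
  then show "fst (acts ! i) < otm_nsyms M \<and> snd (acts ! i) \<le> 2" using wm by simp
qed

lemma tape_of_string_syms: "fst (tape_of_string w) i \<le> 2"
  by (simp add: tape_of_string_def sym_of_def)

lemma move_head_le: "move_head h m \<le> Suc h"
  unfolding move_head_def by auto

lemma run_inv_query_step:
  assumes wf: "wf_otm M" and I: "run_inv M \<phi> k (q, ts)"
    and nh: "q \<noteq> otm_halt M" and qq: "q = otm_query M"
  shows "run_inv M \<phi> (Suc k) (otm_step M \<phi> (q, ts))"
proof -
  have wf4: "4 \<le> otm_ntapes M" "3 \<le> otm_nsyms M" and wfs: "otm_after_query M < otm_nstates M"
    using wf_otm_basic[OF wf] by auto
  from I have len: "length ts = otm_ntapes M" and syms: "\<forall>t\<in>set ts. \<forall>i. fst t i < otm_nsyms M"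
    and qt: "\<forall>i\<ge>k. fst (ts ! 2) i = 0"
    by (auto simp: run_inv_def)
  let ?b = "string_of_cells (fst (ts ! 2))"
  have lb: "length ?b \<le> k" by (rule length_string_of_cells_le) (use qt in auto)
  have st: "otm_step M \<phi> (q, ts) = (otm_after_query M, ts[2 := blank_tape, 3 := tape_of_string (\<phi> ?b)])"
    using otm_step_query[OF nh qq] by simp
  have "\<forall>t\<in>set (ts[2 := blank_tape, 3 := tape_of_string (\<phi> ?b)]). \<forall>i. fst t i < otm_nsyms M"
  proof (intro ballI allI)
    fix t i assume "t \<in> set (ts[2 := blank_tape, 3 := tape_of_string (\<phi> ?b)])"
    then have "t \<in> set ts \<or> t = blank_tape \<or> t = tape_of_string (\<phi> ?b)"
      using set_update_subset_insert[of "ts[2 := blank_tape]" 3] set_update_subset_insert[of ts 2] by blast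
    then show "fst t i < otm_nsyms M"
      using syms wf4 tape_of_string_syms[of "\<phi> ?b" i] by (auto simp: blank_tape_def)
  qed
  then show ?thesis using st wfs len wf4 lb
    by (auto simp: run_inv_def nth_list_update blank_tape_def intro: exI[of _ ?b])
qed

lemma run_inv_transition_step:
  assumes wf: "wf_otm M" and I: "run_inv M \<phi> k (q, ts)"
    and nh: "q \<noteq> otm_halt M" and nq: "q \<noteq> otm_query M"
  shows "run_inv M \<phi> (Suc k) (otm_step M \<phi> (q, ts))"
proof -
  have wf4: "4 \<le> otm_ntapes M" using wf_otm_basic[OF wf] by auto
  from I have q: "q < otm_nstates M" and len: "length ts = otm_ntapes M"
    and syms: "\<forall>t\<in>set ts. \<forall>i. fst t i < otm_nsyms M"
    and qt: "\<forall>i\<ge>k. fst (ts ! 2) i = 0" "snd (ts ! 2) \<le> k"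
    and at: "fst (ts ! 3) = (\<lambda>_. 0) \<or> (\<exists>b. length b \<le> k \<and> fst (ts ! 3) = fst (tape_of_string (\<phi> b)))"
    by (auto simp: run_inv_def)
  obtain q' acts where d: "otm_delta M q (map (\<lambda>(c, h). c h) ts) = (q', acts)" by fastforce
  have ssl: "length (map (\<lambda>(c, h). c h) ts) = otm_ntapes M" using len by simp
  have sss: "\<forall>s\<in>set (map (\<lambda>(c, h). c h) ts). s < otm_nsyms M" using syms by auto
  note W = wf_otm_delta[OF wf q ssl sss d]
  have st: "otm_step M \<phi> (q, ts) = (q', map (\<lambda>i. apply_act i (ts ! i) (acts ! i)) [0..<length ts])"
    using otm_step_transition[OF nh nq d] W len by simp
  let ?ts' = "map (\<lambda>i. apply_act i (ts ! i) (acts ! i)) [0..<length ts]"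
  have nth': "\<And>i. i < length ts \<Longrightarrow> ?ts' ! i = apply_act i (ts ! i) (acts ! i)" by simp
  have A: "\<And>i j. i < length ts \<Longrightarrow> fst (?ts' ! i) j < otm_nsyms M"
  proof -
    fix i j assume i: "i < length ts"
    obtain cc h where t: "ts ! i = (cc, h)" by fastforce
    obtain w m where a: "acts ! i = (w, m)" by fastforce
    have "ts ! i \<in> set ts" using i by simp
    then have "\<forall>j. fst (ts ! i) j < otm_nsyms M" using syms by blast
    then have "\<forall>j. cc j < otm_nsyms M" using t by simp
    moreover have "w < otm_nsyms M" using W(3)[of i] a i len W(2) by auto
    ultimately show "fst (?ts' ! i) j < otm_nsyms M"
      using i t a by (auto simp: apply_act_def)
  qed
  obtain c2 h2 where t2: "ts ! 2 = (c2, h2)" by fastforce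
  obtain w2 m2 where a2: "acts ! 2 = (w2, m2)" by fastforce
  obtain c3 h3 where t3: "ts ! 3 = (c3, h3)" by fastforce
  obtain w3 m3 where a3: "acts ! 3 = (w3, m3)" by fastforce
  have l2: "2 < length ts" "3 < length ts" using len wf4 by auto
  have q2: "?ts' ! 2 = (c2(h2 := w2), move_head h2 m2)" using nth'[OF l2(1)] t2 a2 by (simp add: apply_act_def)
  have q3: "?ts' ! 3 = (c3, move_head h3 m3)" using nth'[OF l2(2)] t3 a3 by (simp add: apply_act_def)
  have "\<forall>i\<ge>Suc k. fst (?ts' ! 2) i = 0" using q2 qt t2 by auto
  moreover have "snd (?ts' ! 2) \<le> Suc k" using q2 qt t2 move_head_le[of h2 m2] by auto
  moreover have "fst (?ts' ! 3) = (\<lambda>_. 0) \<or> (\<exists>b. length b \<le> Suc k \<and> fst (?ts' ! 3) = fst (tape_of_string (\<phi> b)))"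
    using q3 at t3 by (auto intro: le_SucI)
  moreover have "\<forall>t\<in>set ?ts'. \<forall>i. fst t i < otm_nsyms M"
  proof (intro ballI allI)
    fix t j assume "t \<in> set ?ts'"
    then obtain i where "i < length ts" "t = ?ts' ! i" by (auto simp: in_set_conv_nth)
    with A show "fst t j < otm_nsyms M" by simp
  qed
  ultimately show ?thesis using st W len by (auto simp: run_inv_def)
qed

lemma run_inv_step:
  assumes wf: "wf_otm M" and I: "run_inv M \<phi> k c"
  shows "run_inv M \<phi> (Suc k) (otm_step M \<phi> c)"
proof -
  obtain q ts where c: "c = (q, ts)" by (cases c)
  consider "q = otm_halt M" | "q \<noteq> otm_halt M" "q = otm_query M" | "q \<noteq> otm_halt M" "q \<noteq> otm_query M"
    by blast
  then show ?thesis
  proof cases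
    case 1
    then show ?thesis using I c by (auto simp: otm_step_halted run_inv_def c) (use le_SucI in blast)+
  next
    case 2
    then show ?thesis using run_inv_query_step[OF wf] I c by simp
  next
    case 3
    then show ?thesis using run_inv_transition_step[OF wf] I c by simp
  qed
qed

lemma run_inv_init: "wf_otm M \<Longrightarrow> run_inv M \<phi> 0 (otm_init M a)"
proof -
  assume wf: "wf_otm M"
  have wf4: "4 \<le> otm_ntapes M" "3 \<le> otm_nsyms M" "otm_start M < otm_nstates M"
    using wf_otm_basic[OF wf] by auto
  have "\<forall>t\<in>set (tape_of_string a # replicate (otm_ntapes M - 1) blank_tape). \<forall>i. fst t i < otm_nsyms M"
    proof (intro ballI allI)
    fix t i assume "t \<in> set (tape_of_string a # replicate (otm_ntapes M - 1) blank_tape)"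
    then have "t = tape_of_string a \<or> t = blank_tape" by auto
    then show "fst t i < otm_nsyms M" using wf4 tape_of_string_syms[of a i]
      by (auto simp: blank_tape_def)
  qed
  moreover have "(tape_of_string a # replicate (otm_ntapes M - 1) blank_tape) ! 2 = blank_tape"
    "(tape_of_string a # replicate (otm_ntapes M - 1) blank_tape) ! 3 = blank_tape"
    using wf4 by (auto simp: nth_Cons')
  ultimately show ?thesis using wf4 by (auto simp: run_inv_def otm_init_def blank_tape_def)
qed

lemma run_inv_run: "wf_otm M \<Longrightarrow> run_inv M \<phi> k (otm_run M \<phi> a k)"
  by (induction k) (auto simp: otm_run_0 otm_run_Suc run_inv_init run_inv_step)

lemma answer_len_le_size_fn: assumes "wf_otm M" shows "answer_len M \<phi> a k \<le> size_fn \<phi> k"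
proof -
  have I: "run_inv M \<phi> k (otm_run M \<phi> a k)" by (rule run_inv_run[OF assms])
  then consider "fst (snd (otm_run M \<phi> a k) ! 3) = (\<lambda>_. 0)"
    | b where "length b \<le> k" "fst (snd (otm_run M \<phi> a k) ! 3) = fst (tape_of_string (\<phi> b))"
    unfolding run_inv_def by blast
  then show ?thesis
  proof cases
    case 1 then show ?thesis by (simp add: answer_len_def string_of_cells_blank)
  next
    case 2 then show ?thesis by (simp add: answer_len_def string_of_tape_of_string length_le_size_fn)
  qed
qed


section \<open>Strongly polynomial time implies polynomial time\<close>

lemma poly_mono_nat: "x \<le> y \<Longrightarrow> poly (p::nat poly) x \<le> poly p y"
proof (induction p rule: pCons_induct)
  case (pCons a p)
  then show ?case by (simp add: mult_mono)
qed simp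

lemma sopoly_const: "(\<lambda>l n. c) \<in> sopoly"
proof -
  have "(\<lambda>l::nat\<Rightarrow>nat. poly [:c:]) = (\<lambda>l n. c)" by (intro ext) simp
  then show ?thesis using sp_poly[of "[:c:]"] by simp
qed

lemma sopoly_id: "(\<lambda>l n. n) \<in> sopoly"
proof -
  have "(\<lambda>l::nat\<Rightarrow>nat. poly [:0, 1::nat:]) = (\<lambda>l n. n)" by (intro ext) simp
  then show ?thesis using sp_poly[of "[:0, 1:]"] by simp
qed

lemma sopoly_comp_poly: "P \<in> sopoly \<Longrightarrow> (\<lambda>l n. poly t (P l n)) \<in> sopoly"
proof (induction t rule: pCons_induct)
  case 0
  then show ?case using sopoly_const[of 0] by simp
next
  case (pCons a p)
  have "(\<lambda>l n. (\<lambda>l n. a) l n + (\<lambda>l n. P l n * poly p (P l n)) l n) \<in> sopoly"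
    by (rule sp_add[OF sopoly_const sp_mult[OF pCons(3) pCons(2)[OF pCons(3)]]])
  then show ?case by simp
qed

fun revision_bound :: "nat poly \<Rightarrow> nat \<Rightarrow> (nat \<Rightarrow> nat) \<Rightarrow> nat \<Rightarrow> nat" where
  "revision_bound t 0 l n = n"
| "revision_bound t (Suc i) l n = revision_bound t i l n + l (poly t (revision_bound t i l n) + 1)"

lemma revision_bound_sopoly: "(\<lambda>l n. revision_bound t i l n) \<in> sopoly"
proof (induction i)
  case 0 then show ?case using sopoly_id by simp
next
  case (Suc i)
  have "(\<lambda>l n. poly t (revision_bound t i l n) + 1) \<in> sopoly"
    using sp_add[OF sopoly_comp_poly[OF Suc] sopoly_const[of 1]] by simp
  from sp_add[OF Suc sp_app[OF this]] show ?case by simp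
qed

lemma revision_bound_mono: "i \<le> j \<Longrightarrow> revision_bound t i l n \<le> revision_bound t j l n"
  by (induction j) (auto simp: le_Suc_eq intro: le_trans)

lemma length_revision_mono: "n \<le> m \<Longrightarrow> length_revision M \<phi> a n \<le> length_revision M \<phi> a m"
  by (induction m) (auto simp: le_Suc_eq intro: le_trans)

lemma length_revision_le_revision_bound:
  assumes wf: "wf_otm M"
    and H1: "\<And>n. n \<le> T \<Longrightarrow> n \<le> poly t (length_revision M \<phi> a n)"
    and n: "n \<le> T"
  shows "length_revision M \<phi> a n
    \<le> revision_bound t (card (length_revision M \<phi> a ` {0..n}) - 1) (size_fn \<phi>) (length a)"
  using n
proof (induction n)
  case 0 then show ?case by simp
next
  case (Suc n)
  let ?o = "length_revision M \<phi> a"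
  let ?l = "size_fn \<phi>"
  let ?c = "card (?o ` {0..n})"
  have IH: "?o n \<le> revision_bound t (?c - 1) ?l (length a)" using Suc by simp
  have c1: "?c \<ge> 1" by (simp add: Suc_leI card_gt_0_iff)
  show ?case
  proof (cases "answer_len M \<phi> a (Suc n) \<le> ?o n")
    case True
    then have e: "?o (Suc n) = ?o n" by simp
    have "?o ` {0..Suc n} = ?o ` {0..n}"
      using e by (auto simp: atLeast0_atMost_Suc)
    then show ?thesis using IH e by simp
  next
    case False
    then have e: "?o (Suc n) = answer_len M \<phi> a (Suc n)" by simp
    have notin: "?o (Suc n) \<notin> ?o ` {0..n}"
    proof
      assume "?o (Suc n) \<in> ?o ` {0..n}"
      then obtain j where "j \<le> n" "?o (Suc n) = ?o j" by auto
      then show False using False e length_revision_mono[of j n M \<phi> a] by simp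
    qed
    have card: "card (?o ` {0..Suc n}) = Suc ?c"
      using notin by (simp add: atLeast0_atMost_Suc)
    have "n \<le> poly t (?o n)" using H1 Suc by simp
    also have "\<dots> \<le> poly t (revision_bound t (?c - 1) ?l (length a))" by (rule poly_mono_nat[OF IH])
    finally have "Suc n \<le> poly t (revision_bound t (?c - 1) ?l (length a)) + 1" by simp
    then have "?l (Suc n) \<le> ?l (poly t (revision_bound t (?c - 1) ?l (length a)) + 1)" by (rule size_fn_mono)
    moreover have "answer_len M \<phi> a (Suc n) \<le> ?l (Suc n)" by (rule answer_len_le_size_fn[OF wf])
    ultimately have "?o (Suc n) \<le> revision_bound t (Suc (?c - 1)) ?l (length a)" using e by simp
    then show ?thesis using card c1 by simp
  qed
qed

lemma time_le_revision_bound: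
  assumes wf: "wf_otm M"
    and H1: "\<And>n. n \<le> T \<Longrightarrow> n \<le> poly t (length_revision M \<phi> a n)"
    and fin: "finite (range (length_revision M \<phi> a))"
    and cardN: "card (range (length_revision M \<phi> a)) \<le> N"
  shows "T \<le> poly t (revision_bound t N (size_fn \<phi>) (length a))"
proof -
  let ?o = "length_revision M \<phi> a"
  have "card (?o ` {0..T}) \<le> card (range ?o)" by (rule card_mono[OF fin]) auto
  then have "card (?o ` {0..T}) - 1 \<le> N" using cardN by simp
  then have "revision_bound t (card (?o ` {0..T}) - 1) (size_fn \<phi>) (length a)
      \<le> revision_bound t N (size_fn \<phi>) (length a)"
    by (rule revision_bound_mono)
  with length_revision_le_revision_bound[OF wf H1 order_refl]
  have "?o T \<le> revision_bound t N (size_fn \<phi>) (length a)" by (rule le_trans)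
  then have "poly t (?o T) \<le> poly t (revision_bound t N (size_fn \<phi>) (length a))" by (rule poly_mono_nat)
  then show ?thesis using H1[of T] by simp
qed

theorem strongly_poly_time_imp_poly_time:
  assumes "strongly_poly_time_computable A F"
  shows "poly_time_computable A F"
proof -
  obtain M t N where comp: "otm_computes M F A" and
    H: "\<forall>\<phi>\<in>A. \<forall>a. (\<forall>n. enat n \<le> otm_time M \<phi> a \<longrightarrow> n \<le> poly t (length_revision M \<phi> a n)) \<and>
        finite (range (length_revision M \<phi> a)) \<and>
        card (range (length_revision M \<phi> a)) \<le> N"
    using assms unfolding strongly_poly_time_computable_def by blast
  have wf: "wf_otm M" using comp by (simp add: otm_computes_def)
  let ?P = "\<lambda>l n. poly t (revision_bound t N l n)"
  have P: "?P \<in> sopoly" by (rule sopoly_comp_poly[OF revision_bound_sopoly])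
  have "\<forall>\<phi>\<in>A. \<forall>a. otm_time M \<phi> a \<le> enat (?P (size_fn \<phi>) (length a))"
  proof (intro ballI allI)
    fix \<phi> a assume "\<phi> \<in> A"
    then have fin: "otm_time M \<phi> a \<noteq> \<infinity>" and Hp: "(\<forall>n. enat n \<le> otm_time M \<phi> a \<longrightarrow> n \<le> poly t (length_revision M \<phi> a n))"
      "finite (range (length_revision M \<phi> a))" "card (range (length_revision M \<phi> a)) \<le> N"
      using comp H unfolding otm_computes_def by auto
    obtain T where T: "otm_time M \<phi> a = enat T" using fin by auto
    have "T \<le> ?P (size_fn \<phi>) (length a)"
      by (rule time_le_revision_bound[OF wf _ Hp(2) Hp(3)]) (use Hp(1) T in auto)
    then show "otm_time M \<phi> a \<le> enat (?P (size_fn \<phi>) (length a))" using T by simp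
  qed
  then show ?thesis using comp P unfolding poly_time_computable_def
    by (intro exI[of _ M] conjI bexI[of _ ?P])
qed


section \<open>Budgets dominating second-order polynomials\<close>

text \<open>The budget is shaped after what a machine can compute: \<open>e\<close> squarings of a unary
  counter per round, and one oracle query on the unary string \<open>1\<^sup>K\<close> between rounds.\<close>

fun budget :: "nat \<Rightarrow> nat \<Rightarrow> (nat \<Rightarrow> nat) \<Rightarrow> nat \<Rightarrow> nat" where
  "budget e 0 l n = (n + 2) ^ (2 ^ e)"
| "budget e (Suc r) l n = (budget e r l n + l (budget e r l n) + 2) ^ (2 ^ e)"

lemma budget_ge2: "2 \<le> budget e r l n"
proof (induction r)
  case 0
  have "n + 2 \<le> (n + 2) ^ (2 ^ e)" by (rule self_le_power) simp_all
  then show ?case by simp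
next
  case (Suc r)
  let ?K = "budget e r l n"
  have "?K + l ?K + 2 \<le> (?K + l ?K + 2) ^ (2 ^ e)" by (rule self_le_power) simp_all
  then show ?case by simp
qed

lemma budget_le_Suc: "budget e r l n \<le> budget e (Suc r) l n"
proof -
  let ?K = "budget e r l n"
  have "?K + l ?K + 2 \<le> (?K + l ?K + 2) ^ (2 ^ e)" by (rule self_le_power) simp_all
  then show ?thesis by simp
qed

lemma budget_mono_r: "r \<le> r' \<Longrightarrow> budget e r l n \<le> budget e r' l n"
  by (induction r') (auto simp: le_Suc_eq simp del: budget.simps intro: le_trans[OF _ budget_le_Suc])

lemma budget_mono_e: assumes "mono l" shows "e \<le> e' \<Longrightarrow> budget e r l n \<le> budget e' r l n"
proof (induction r)
  case 0
  then show ?case by (simp add: power_increasing)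
next
  case (Suc r)
  let ?K = "budget e r l n" and ?K' = "budget e' r l n"
  have "l ?K \<le> l ?K'" using Suc assms by (simp add: monoD)
  then have b: "?K + l ?K + 2 \<le> ?K' + l ?K' + 2" using Suc by simp
  have "(?K + l ?K + 2) ^ (2 ^ e) \<le> (?K + l ?K + 2) ^ (2 ^ e')"
    by (rule power_increasing) (use Suc in simp_all)
  also have "\<dots> \<le> (?K' + l ?K' + 2) ^ (2 ^ e')" by (rule power_mono[OF b]) simp
  finally show ?case by simp
qed

lemma power_two_power_Suc: "(x::nat) ^ (2 ^ Suc e) = (x ^ (2 ^ e)) * (x ^ (2 ^ e))"
proof -
  have "x ^ (2 ^ Suc e) = x ^ (2 ^ e * 2)" by (simp add: mult.commute)
  also have "\<dots> = (x ^ (2 ^ e)) ^ 2" by (rule power_mult)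
  finally show ?thesis by (simp add: power2_eq_square)
qed

lemma budget_sq: assumes "mono l" shows "budget e r l n * budget e r l n \<le> budget (Suc e) r l n"
proof (induction r)
  case 0 then show ?case by (simp only: budget.simps power_two_power_Suc order_refl)
next
  case (Suc r)
  let ?K = "budget e r l n" and ?K' = "budget (Suc e) r l n"
  have KK: "?K \<le> ?K'"
  proof -
    have "?K \<le> ?K * ?K" using budget_ge2[of e r l n] by simp
    then show ?thesis using Suc.IH by (rule le_trans)
  qed
  have "l ?K \<le> l ?K'" using KK assms by (simp add: monoD)
  then have b: "?K + l ?K + 2 \<le> ?K' + l ?K' + 2" using KK by simp
  have "budget e (Suc r) l n * budget e (Suc r) l n = (?K + l ?K + 2) ^ (2 ^ Suc e)" by (simp only: budget.simps power_two_power_Suc)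
  also have "\<dots> \<le> (?K' + l ?K' + 2) ^ (2 ^ Suc e)" by (rule power_mono[OF b]) simp
  finally show ?case by simp
qed

lemma budget_app: assumes "mono l" shows "l (budget e r l n) \<le> budget e (Suc r) l n"
proof -
  let ?K = "budget e r l n"
  have "?K + l ?K + 2 \<le> (?K + l ?K + 2) ^ (2 ^ e)" by (rule self_le_power) simp_all
  then show ?thesis by simp
qed

lemma poly_le_shifted_power: "\<exists>m. \<forall>n. poly (p::nat poly) n \<le> (n + 2) ^ m"
proof (induction p rule: pCons_induct)
  case 0 then show ?case by simp
next
  case (pCons a p)
  then obtain m where m: "\<And>n. poly p n \<le> (n + 2) ^ m" by blast
  have "poly (pCons a p) n \<le> (n + 2) ^ (m + 1 + a)" for n
  proof -
    have "a \<le> 2 ^ a" by (rule less_imp_le[OF less_exp])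
    also have "\<dots> \<le> (n + 2) ^ a" by (rule power_mono) simp_all
    finally have a: "a \<le> (n + 2) ^ a" .
    have "poly (pCons a p) n = a + n * poly p n" by simp
    also have "\<dots> \<le> a + n * (n + 2) ^ m" using m[of n] by simp
    also have "\<dots> \<le> (n + 2) ^ a * (n + 2) ^ m + n * (n + 2) ^ m"
    proof -
      have "1 \<le> (n + 2) ^ m" by simp
      then have "a \<le> (n + 2) ^ a * (n + 2) ^ m" using a by (metis mult_le_mono mult.right_neutral)
      then show ?thesis by simp
    qed
    also have "\<dots> \<le> (n + 2) ^ a * (n + 2) ^ m + n * ((n + 2) ^ a * (n + 2) ^ m)"
    proof -
      have "1 \<le> (n + 2) ^ a" by simp
      then have "(n + 2) ^ m \<le> (n + 2) ^ a * (n + 2) ^ m" by simp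
      then show ?thesis by simp
    qed
    also have "\<dots> = (n + 1) * ((n + 2) ^ a * (n + 2) ^ m)" by (simp add: algebra_simps)
    also have "\<dots> \<le> (n + 2) * ((n + 2) ^ a * (n + 2) ^ m)" by simp
    also have "\<dots> = (n + 2) ^ (m + 1 + a)" by (simp add: power_add algebra_simps)
    finally show ?thesis .
  qed
  then show ?case by blast
qed

lemma sopoly_le_budget: "P \<in> sopoly \<Longrightarrow> \<exists>e r. \<forall>l. mono l \<longrightarrow> (\<forall>n. P l n \<le> budget e r l n)"
proof (induction rule: sopoly.induct)
  case (sp_poly p)
  obtain m where m: "\<And>n. poly p n \<le> (n + 2) ^ m" using poly_le_shifted_power by blast
  have B: "((n::nat) + 2) ^ m \<le> (n + 2) ^ (2 ^ m)" for n
    by (rule power_increasing) (simp_all add: less_imp_le[OF less_exp])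
  have "poly p n \<le> budget m 0 l n" for l n using le_trans[OF m[of n] B[of n]] by simp
  then have "\<forall>l. mono l \<longrightarrow> (\<forall>n. poly p n \<le> budget m 0 l n)" by blast
  then show ?case by blast
next
  case (sp_add P Q)
  then obtain e1 r1 e2 r2 where P: "\<forall>l. mono l \<longrightarrow> (\<forall>n. P l n \<le> budget e1 r1 l n)" and Q: "\<forall>l. mono l \<longrightarrow> (\<forall>n. Q l n \<le> budget e2 r2 l n)" by blast
  let ?e = "max e1 e2" and ?r = "max r1 r2"
  have "P l n + Q l n \<le> budget (Suc ?e) ?r l n" if l: "mono l" for l n
  proof -
    have "P l n \<le> budget ?e ?r l n"
      using P l budget_mono_e[OF l, of e1 ?e r1 n] budget_mono_r[of r1 ?r ?e l n] by (meson le_trans max.cobounded1)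
    moreover have "Q l n \<le> budget ?e ?r l n"
      using Q l budget_mono_e[OF l, of e2 ?e r2 n] budget_mono_r[of r2 ?r ?e l n] by (meson le_trans max.cobounded2)
    moreover have "budget ?e ?r l n + budget ?e ?r l n \<le> budget ?e ?r l n * budget ?e ?r l n"
      using budget_ge2[of ?e ?r l n] by (metis mult_2 mult_le_mono1)
    ultimately show ?thesis using budget_sq[OF l, of ?e ?r n] by linarith
  qed
  then show ?case by blast
next
  case (sp_mult P Q)
  then obtain e1 r1 e2 r2 where P: "\<forall>l. mono l \<longrightarrow> (\<forall>n. P l n \<le> budget e1 r1 l n)" and Q: "\<forall>l. mono l \<longrightarrow> (\<forall>n. Q l n \<le> budget e2 r2 l n)" by blast
  let ?e = "max e1 e2" and ?r = "max r1 r2"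
  have "P l n * Q l n \<le> budget (Suc ?e) ?r l n" if l: "mono l" for l n
  proof -
    have "P l n \<le> budget ?e ?r l n"
      using P l budget_mono_e[OF l, of e1 ?e r1 n] budget_mono_r[of r1 ?r ?e l n] by (meson le_trans max.cobounded1)
    moreover have "Q l n \<le> budget ?e ?r l n"
      using Q l budget_mono_e[OF l, of e2 ?e r2 n] budget_mono_r[of r2 ?r ?e l n] by (meson le_trans max.cobounded2)
    ultimately have "P l n * Q l n \<le> budget ?e ?r l n * budget ?e ?r l n" by (rule mult_le_mono)
    then show ?thesis using budget_sq[OF l, of ?e ?r n] by linarith
  qed
  then show ?case by blast
next
  case (sp_app P)
  then obtain e r where P: "\<forall>l. mono l \<longrightarrow> (\<forall>n. P l n \<le> budget e r l n)" by blast
  have "l (P l n) \<le> budget e (Suc r) l n" if l: "mono l" for l n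
    using P l budget_app[OF l, of e r n] monoD[OF l] by (meson le_trans)
  then show ?case by blast
qed


section \<open>The clocked machine\<close>

text \<open>
  The clocked machine \<open>clocked M e d\<close> has the tapes of \<open>M\<close> followed by two copies \<open>C\<^sub>1, C\<^sub>2\<close>
  of a unary counter, a scratch counter \<open>D\<close> and a one-cell round marker \<open>E\<close>; counters carry
  the marker symbol 3 in cell 0. Its control states are triples \<open>(t, r, j)\<close>, encoded into \<open>nat\<close>:
  \<^item> 0--4: set the counter to \<open>|a| + 2\<close> and rewind;
  \<^item> 8--16: in round \<open>r\<close>, the \<open>j\<close>-th squaring of the counter (via \<open>D\<close>);
  \<^item> 17: write the counter in unary onto the query tape and record \<open>r\<close> in \<open>E\<close>;
  \<^item> 5, 6: query and after-query state;
  \<^item> 18--21: after a round \<open>r < d\<close>, add the answer length plus 2 to the counter;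
  \<^item> 22: simulate state \<open>r\<close> of \<open>M\<close>; while \<open>j = 1\<close>, that is, before the first query of \<open>M\<close>,
    the answer tape, which still holds the last clock answer, is read as blank;
  \<^item> 7: halt.
\<close>

definition encode_state :: "nat \<times> nat \<times> nat \<Rightarrow> nat" where
  "encode_state s = prod_encode (fst s, prod_encode (snd s))"

definition decode_state :: "nat \<Rightarrow> nat \<times> nat \<times> nat" where
  "decode_state q = (fst (prod_decode q), prod_decode (snd (prod_decode q)))"

lemma decode_encode_state[simp]: "decode_state (encode_state s) = s"
  by (simp add: encode_state_def decode_state_def)

lemma encode_state_eq[simp]: "encode_state s = encode_state s' \<longleftrightarrow> s = s'"
  by (metis decode_encode_state)

lemma triangle_mono: "a \<le> b \<Longrightarrow> triangle a \<le> triangle b"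
  by (induction b) (auto simp: le_Suc_eq)

lemma prod_encode_mono: "a \<le> a' \<Longrightarrow> b \<le> b' \<Longrightarrow> prod_encode (a, b) \<le> prod_encode (a', b')"
  unfolding prod_encode_def using triangle_mono[of "a + b" "a' + b'"] by simp

definition in_box :: "nat \<Rightarrow> nat \<times> nat \<times> nat \<Rightarrow> bool" where
  "in_box B s \<longleftrightarrow> fst s \<le> B \<and> fst (snd s) \<le> B \<and> snd (snd s) \<le> B"

lemma encode_state_le_bound: "in_box B s \<Longrightarrow> encode_state s \<le> encode_state (B, B, B)"
  unfolding in_box_def encode_state_def by (cases s) (auto intro!: prod_encode_mono)

definition square_start :: "nat \<Rightarrow> nat \<Rightarrow> nat \<times> nat \<times> nat" where
  "square_start e r = (if 0 < e then (8, r, 0) else (17, r, 0))"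

definition square_next :: "nat \<Rightarrow> nat \<Rightarrow> nat \<Rightarrow> nat \<times> nat \<times> nat" where
  "square_next e r j = (if Suc j < e then (8, r, Suc j) else (17, r, 0))"

definition sim_state :: "otm \<Rightarrow> nat \<Rightarrow> nat \<Rightarrow> nat \<times> nat \<times> nat" where
  "sim_state M q f = (if q = otm_halt M then (7, 0, 0) else if q = otm_query M then (5, 0, 0)
     else if q < otm_nstates M then (22, q, f) else (7, 0, 0))"

text \<open>\<open>wf_otm M\<close> only constrains the transitions of \<open>M\<close> on its own alphabet; sanitizing
  keeps the clocked machine well-formed on all inputs.\<close>

definition sanitize_act :: "otm \<Rightarrow> nat \<times> nat \<Rightarrow> nat \<times> nat" where
  "sanitize_act M a = (if fst a < otm_nsyms M then fst a else 0, if snd a \<le> 2 then snd a else 1)"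

definition sim_delta :: "otm \<Rightarrow> nat \<Rightarrow> nat \<Rightarrow> nat list \<Rightarrow> (nat \<times> nat \<times> nat) \<times> (nat \<Rightarrow> nat \<times> nat)" where
  "sim_delta M q f ss = (let k = otm_ntapes M; ssM = take k ss;
      ssM' = (if f \<noteq> 0 then ssM[3 := 0] else ssM) in
      case otm_delta M q ssM' of (q2, aM) \<Rightarrow>
        (sim_state M q2 f, (\<lambda>i. if i < k then sanitize_act M (aM ! i) else (ss ! i, 1))))"

definition clocked_delta :: "otm \<Rightarrow> nat \<Rightarrow> nat \<Rightarrow> nat \<times> nat \<times> nat \<Rightarrow> nat list \<Rightarrow> (nat \<times> nat \<times> nat) \<times> (nat \<Rightarrow> nat \<times> nat)" where
  "clocked_delta M e d s ss = (case s of (t, x, y) \<Rightarrow>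
     let k = otm_ntapes M; c1 = k; c2 = Suc k; dd = k + 2; ee = k + 3; st = (\<lambda>i. (ss ! i, 1::nat)) in
     if t = 0 then ((1,0,0), st(c1 := (3,2), c2 := (3,2), dd := (3,2)))
     else if t = 1 then (if ss ! 0 = 1 \<or> ss ! 0 = 2 then ((1,0,0), st(0 := (ss ! 0, 2), c1 := (2,2), c2 := (2,2))) else ((2,0,0), st))
     else if t = 2 then ((3,0,0), st(c1 := (2,2), c2 := (2,2)))
     else if t = 3 then ((4,0,0), st(c1 := (2,2), c2 := (2,2)))
     else if t = 4 then (if ss ! c1 \<noteq> 3 then ((4,0,0), st(0 := (ss ! 0, 0), c1 := (ss ! c1, 0), c2 := (ss ! c2, 0)))
                         else (square_start e 0, st(c1 := (ss ! c1, 2), c2 := (ss ! c2, 2))))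
     else if t = 8 then ((9,x,y), st(dd := (2,2), c2 := (ss ! c2, 2)))
     else if t = 9 then (if ss ! c2 = 2 then ((8,x,y), st) else ((10,x,y), st(c2 := (ss ! c2, 0))))
     else if t = 10 then (if ss ! c2 \<noteq> 3 then ((10,x,y), st(c2 := (ss ! c2, 0))) else ((11,x,y), st(c2 := (ss ! c2, 2))))
     else if t = 11 then ((12,x,y), st(c1 := (ss ! c1, 2)))
     else if t = 12 then (if ss ! c1 = 2 then ((8,x,y), st) else ((13,x,y), st(c1 := (ss ! c1, 0))))
     else if t = 13 then (if ss ! c1 \<noteq> 3 then ((13,x,y), st(c1 := (ss ! c1, 0))) else ((14,x,y), st(c1 := (ss ! c1, 2))))
     else if t = 14 then (if ss ! dd \<noteq> 3 then ((14,x,y), st(dd := (ss ! dd, 0))) else ((15,x,y), st(dd := (ss ! dd, 2))))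
     else if t = 15 then (if ss ! dd = 2 then ((15,x,y), st(dd := (0,2), c1 := (2,2), c2 := (2,2))) else ((16,x,y), st))
     else if t = 16 then (if ss ! c1 \<noteq> 3 then ((16,x,y), st(c1 := (ss ! c1, 0), c2 := (ss ! c2, 0), dd := (ss ! dd, 0)))
                          else (square_next e x y, st(c1 := (ss ! c1, 2), c2 := (ss ! c2, 2), dd := (ss ! dd, 2))))
     else if t = 17 then (if ss ! c1 = 2 then ((17,x,0), st(2 := (2,2), c1 := (ss ! c1, 2), c2 := (ss ! c2, 2)))
                          else ((5,0,0), st(ee := (4 + min x d, 1))))
     else if t = 6 then (if ss ! ee = 3 then (sim_state M (otm_after_query M) 0, st)
                         else if 4 \<le> ss ! ee \<and> ss ! ee - 4 < d then ((18, ss ! ee - 4, 0), st)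
                         else if ss ! ee = 4 + d then (sim_state M (otm_start M) 1, st(ee := (3, 1)))
                         else ((7,0,0), st))
     else if t = 18 then (if ss ! 3 = 1 \<or> ss ! 3 = 2 then ((18,x,y), st(3 := (ss ! 3, 2), c1 := (2,2), c2 := (2,2))) else ((19,x,y), st))
     else if t = 19 then ((20,x,y), st(c1 := (2,2), c2 := (2,2)))
     else if t = 20 then ((21,x,y), st(c1 := (2,2), c2 := (2,2)))
     else if t = 21 then (if ss ! c1 \<noteq> 3 then ((21,x,y), st(c1 := (ss ! c1, 0), c2 := (ss ! c2, 0)))
                          else (if x < d then square_start e (Suc x) else (7,0,0), st(c1 := (ss ! c1, 2), c2 := (ss ! c2, 2))))
     else if t = 22 then sim_delta M x y ss
     else ((7,0,0), st))"

definition state_bound :: "otm \<Rightarrow> nat \<Rightarrow> nat \<Rightarrow> nat" where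
  "state_bound M e d = max 22 (max d (max e (otm_nstates M)))"

definition clocked :: "otm \<Rightarrow> nat \<Rightarrow> nat \<Rightarrow> otm" where
  "clocked M e d = \<lparr> otm_ntapes = otm_ntapes M + 4,
     otm_nstates = Suc (encode_state (state_bound M e d, state_bound M e d, state_bound M e d)),
     otm_nsyms = max (otm_nsyms M) (5 + d),
     otm_start = encode_state (0,0,0), otm_halt = encode_state (7,0,0), otm_query = encode_state (5,0,0),
     otm_after_query = encode_state (6,0,0),
     otm_delta = (\<lambda>q ss. if in_box (state_bound M e d) (decode_state q) then
        (case clocked_delta M e d (decode_state q) ss of (s', f) \<Rightarrow>
          (encode_state (if in_box (state_bound M e d) s' then s' else (7,0,0)), map f [0..<otm_ntapes M + 4]))
        else (encode_state (7,0,0), map (\<lambda>i. (0, 1)) [0..<otm_ntapes M + 4])) \<rparr>"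

lemma clocked_delta_acts:
  assumes len: "length ss = otm_ntapes M + 4" and syms: "\<forall>x\<in>set ss. x < max (otm_nsyms M) (5 + d)"
    and i: "i < otm_ntapes M + 4"
  shows "fst (snd (clocked_delta M e d s ss) i) < max (otm_nsyms M) (5 + d) \<and> snd (snd (clocked_delta M e d s ss) i) \<le> 2"
proof -
  have ssi: "\<And>j. j < otm_ntapes M + 4 \<Longrightarrow> ss ! j < max (otm_nsyms M) (5 + d)"
    using syms len by (metis nth_mem)
  note si = ssi[OF i]
  obtain t x y where s: "s = (t, x, y)" by (cases s) auto
  have sim: "fst (snd (sim_delta M x y ss) i) < max (otm_nsyms M) (5 + d) \<and> snd (snd (sim_delta M x y ss) i) \<le> 2"
    unfolding sim_delta_def Let_def
    by (auto split: prod.splits simp: sanitize_act_def si)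
  let ?ns = "max (otm_nsyms M) (5 + d)"
  have k: "otm_ntapes M < otm_ntapes M + 4" "Suc (otm_ntapes M) < otm_ntapes M + 4"
    "otm_ntapes M + 2 < otm_ntapes M + 4" "otm_ntapes M + 3 < otm_ntapes M + 4" "0 < otm_ntapes M + 4" by auto
  have r: "ss ! otm_ntapes M < ?ns" "ss ! Suc (otm_ntapes M) < ?ns" "ss ! (otm_ntapes M + 2) < ?ns"
    "ss ! (otm_ntapes M + 3) < ?ns" "ss ! 0 < ?ns" using ssi k by auto
  have c: "2 < ?ns" "3 < ?ns" "4 + min x d < ?ns" "0 < ?ns" by auto
  show ?thesis
  proof (cases "t \<in> {0,1,2,3,4,6,8,9,10,11,12,13,14,15,16,17,18,19,20,21}")
    case True
    then show ?thesis unfolding s clocked_delta_def Let_def using si r c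
      by (elim insertE emptyE) (simp_all add: fun_upd_apply)
  next
    case False
    then show ?thesis unfolding s clocked_delta_def Let_def using si sim by (cases "t = 22") simp_all
  qed
qed

lemma state_bound_ge: "22 \<le> state_bound M e d" "d \<le> state_bound M e d" "e \<le> state_bound M e d" "otm_nstates M \<le> state_bound M e d"
  by (auto simp: state_bound_def)

lemma in_box_small: "t \<le> 22 \<Longrightarrow> in_box (state_bound M e d) (t, 0, 0)"
  using state_bound_ge(1)[of M e d] by (simp add: in_box_def)

lemma clocked_simps:
  "otm_ntapes (clocked M e d) = otm_ntapes M + 4"
  "otm_nstates (clocked M e d) = Suc (encode_state (state_bound M e d, state_bound M e d, state_bound M e d))"
  "otm_nsyms (clocked M e d) = max (otm_nsyms M) (5 + d)"
  "otm_start (clocked M e d) = encode_state (0,0,0)" "otm_halt (clocked M e d) = encode_state (7,0,0)"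
  "otm_query (clocked M e d) = encode_state (5,0,0)" "otm_after_query (clocked M e d) = encode_state (6,0,0)"
  by (simp_all add: clocked_def)

lemma wf_clocked: "wf_otm (clocked M e d)"
proof -
  let ?B = "state_bound M e d"
  have st: "encode_state (t, 0, 0) < Suc (encode_state (?B, ?B, ?B))" if "t \<le> 22" for t
    using encode_state_le_bound[OF in_box_small[OF that, of M e d]] by simp
  have D: "case otm_delta (clocked M e d) q ss of (q', acts) \<Rightarrow>
           q' < otm_nstates (clocked M e d) \<and> length acts = otm_ntapes (clocked M e d) \<and>
           (\<forall>(w, m)\<in>set acts. w < otm_nsyms (clocked M e d) \<and> m \<le> 2)"
    if ss: "length ss = otm_ntapes (clocked M e d)" "\<forall>s\<in>set ss. s < otm_nsyms (clocked M e d)" for q ss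
  proof (cases "in_box ?B (decode_state q)")
    case True
    obtain s' f where d: "clocked_delta M e d (decode_state q) ss = (s', f)" by fastforce
    have A: "\<And>i. i < otm_ntapes M + 4 \<Longrightarrow> fst (f i) < max (otm_nsyms M) (5 + d) \<and> snd (f i) \<le> 2"
      using clocked_delta_acts[of ss M d _ e "decode_state q"] ss d by (simp add: clocked_simps)
    have S: "encode_state (if in_box ?B s' then s' else (7,0,0)) < Suc (encode_state (?B, ?B, ?B))"
      using encode_state_le_bound[of ?B s'] st[of 7] by auto
    have "\<forall>(w, m)\<in>set (map f [0..<otm_ntapes M + 4]). w < max (otm_nsyms M) (5 + d) \<and> m \<le> 2"
    proof
      fix wm assume "wm \<in> set (map f [0..<otm_ntapes M + 4])"
      then obtain i where "i < otm_ntapes M + 4" "wm = f i" by auto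
      then show "case wm of (w, m) \<Rightarrow> w < max (otm_nsyms M) (5 + d) \<and> m \<le> 2"
        using A by (cases wm) force
    qed
    then show ?thesis using True d S by (simp add: clocked_def)
  next
    case False
    then show ?thesis using st[of 7] by (auto simp: clocked_def)
  qed
  show ?thesis unfolding wf_otm_def
    using D st[of 0] st[of 5] st[of 6] st[of 7] by (auto simp: clocked_simps)
qed


definition head_sym :: "tape \<Rightarrow> nat" where "head_sym t = fst t (snd t)"

definition layout :: "nat \<Rightarrow> tape \<Rightarrow> tape \<Rightarrow> tape \<Rightarrow> tape \<Rightarrow> tape \<Rightarrow> tape \<Rightarrow> tape \<Rightarrow> nat \<Rightarrow> tape" where
  "layout k In Q X C1 C2 D E i = (if i = 0 then In else if i = 2 then Q else if i = 3 then X
     else if i = k then C1 else if i = Suc k then C2 else if i = k + 2 then D else if i = k + 3 then E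
     else blank_tape)"

lemma layout_at:
  "layout k In Q X C1 C2 D E 0 = In"
  "layout k In Q X C1 C2 D E 2 = Q"
  "layout k In Q X C1 C2 D E 3 = X"
  "4 \<le> k \<Longrightarrow> layout k In Q X C1 C2 D E 1 = blank_tape"
  "4 \<le> k \<Longrightarrow> layout k In Q X C1 C2 D E k = C1"
  "4 \<le> k \<Longrightarrow> layout k In Q X C1 C2 D E (Suc k) = C2"
  "4 \<le> k \<Longrightarrow> layout k In Q X C1 C2 D E (k + 2) = D"
  "4 \<le> k \<Longrightarrow> layout k In Q X C1 C2 D E (k + 3) = E"
  "4 \<le> i \<Longrightarrow> i < k \<Longrightarrow> layout k In Q X C1 C2 D E i = blank_tape"
  by (auto simp: layout_def)

definition reaches :: "otm \<Rightarrow> sfun \<Rightarrow> config \<Rightarrow> config \<Rightarrow> nat \<Rightarrow> bool" where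
  "reaches M \<phi> c c' B \<longleftrightarrow> (\<exists>n\<le>B. (otm_step M \<phi> ^^ n) c = c' \<and>
     (\<forall>i<n. fst ((otm_step M \<phi> ^^ i) c) \<noteq> otm_query M \<and> fst ((otm_step M \<phi> ^^ i) c) \<noteq> otm_halt M))"

lemma reaches_refl: "reaches M \<phi> c c B"
  unfolding reaches_def by (intro exI[of _ 0]) auto

lemma reaches_mono: "reaches M \<phi> c c' B \<Longrightarrow> B \<le> B' \<Longrightarrow> reaches M \<phi> c c' B'"
  unfolding reaches_def using le_trans by blast

lemma reaches_trans: assumes "reaches M \<phi> c c' B" "reaches M \<phi> c' c'' B'" shows "reaches M \<phi> c c'' (B + B')"
proof -
  obtain n where n: "n \<le> B" "(otm_step M \<phi> ^^ n) c = c'"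
    "\<forall>i<n. fst ((otm_step M \<phi> ^^ i) c) \<noteq> otm_query M \<and> fst ((otm_step M \<phi> ^^ i) c) \<noteq> otm_halt M"
    using assms(1) unfolding reaches_def by blast
  obtain m where m: "m \<le> B'" "(otm_step M \<phi> ^^ m) c' = c''"
    "\<forall>i<m. fst ((otm_step M \<phi> ^^ i) c') \<noteq> otm_query M \<and> fst ((otm_step M \<phi> ^^ i) c') \<noteq> otm_halt M"
    using assms(2) unfolding reaches_def by blast
  have "(otm_step M \<phi> ^^ (m + n)) c = c''" using n m by (simp add: funpow_add)
  moreover have "\<forall>i<n + m. fst ((otm_step M \<phi> ^^ i) c) \<noteq> otm_query M \<and> fst ((otm_step M \<phi> ^^ i) c) \<noteq> otm_halt M"
  proof (intro allI impI)
    fix i assume i: "i < n + m"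
    show "fst ((otm_step M \<phi> ^^ i) c) \<noteq> otm_query M \<and> fst ((otm_step M \<phi> ^^ i) c) \<noteq> otm_halt M"
    proof (cases "i < n")
      case True then show ?thesis using n by blast
    next
      case False
      then obtain j where j: "i = j + n" "j < m" using i by (metis add.commute less_diff_conv2 not_less add_diff_inverse_nat)
      have "(otm_step M \<phi> ^^ i) c = (otm_step M \<phi> ^^ j) c'" using n j by (simp add: funpow_add)
      then show ?thesis using m j by simp
    qed
  qed
  ultimately show ?thesis unfolding reaches_def using n m
    by (intro exI[of _ "n + m"]) (simp add: add.commute)
qed

lemma reaches_step: assumes "fst c \<noteq> otm_query M" "fst c \<noteq> otm_halt M" "otm_step M \<phi> c = c'"
  shows "reaches M \<phi> c c' 1"
  unfolding reaches_def using assms by (intro exI[of _ 1]) auto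

lemma reaches_run: "reaches M \<phi> (otm_run M \<phi> a n) c B \<Longrightarrow> \<exists>m\<le>B. otm_run M \<phi> a (n + m) = c \<and>
   (\<forall>i<m. fst (otm_run M \<phi> a (n + i)) \<noteq> otm_query M \<and> fst (otm_run M \<phi> a (n + i)) \<noteq> otm_halt M)"
  unfolding reaches_def by (simp add: otm_run_add)

lemma apply_act_stay: "apply_act i t (head_sym t, 1) = t"
  by (cases t) (simp add: apply_act_def head_sym_def move_head_def)

lemma move_head_simps[simp]: "move_head h 0 = h - 1" "move_head h 1 = h" "move_head h 2 = Suc h"
  by (simp_all add: move_head_def)

lemma clocked_step:
  assumes b: "in_box (state_bound M e d) s" "s \<noteq> (5,0,0)" "s \<noteq> (7,0,0)"
    and delta_eq: "clocked_delta M e d s (map (\<lambda>i. head_sym (T i)) [0..<otm_ntapes M + 4]) = (s', f)"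
    and b': "in_box (state_bound M e d) s'"
  shows "otm_step (clocked M e d) \<phi> (encode_state s, map T [0..<otm_ntapes M + 4]) =
    (encode_state s', map (\<lambda>i. apply_act i (T i) (f i)) [0..<otm_ntapes M + 4])"
proof -
  have r: "map (\<lambda>(c, h). c h) (map T [0..<otm_ntapes M + 4]) = map (\<lambda>i. head_sym (T i)) [0..<otm_ntapes M + 4]"
    by (simp add: head_sym_def case_prod_unfold)
  have d: "otm_delta (clocked M e d) (encode_state s) (map (\<lambda>(c, h). c h) (map T [0..<otm_ntapes M + 4])) =
     (encode_state s', map f [0..<otm_ntapes M + 4])"
    unfolding r using b delta_eq b' by (simp add: clocked_def)
  have "otm_step (clocked M e d) \<phi> (encode_state s, map T [0..<otm_ntapes M + 4]) =
     (encode_state s', map (\<lambda>i. apply_act i (map T [0..<otm_ntapes M + 4] ! i) (map f [0..<otm_ntapes M + 4] ! i))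
        [0..<length (map T [0..<otm_ntapes M + 4])])"
    by (rule otm_step_transition[OF _ _ d]) (use b in \<open>simp_all add: clocked_simps\<close>)
  also have "\<dots> = (encode_state s', map (\<lambda>i. apply_act i (T i) (f i)) [0..<otm_ntapes M + 4])"
    by (auto intro!: map_cong)
  finally show ?thesis .
qed

lemma clocked_layout_step:
  fixes M e d and In Q X C1 C2 D E :: tape
  defines "k \<equiv> otm_ntapes M"
  defines "ss \<equiv> map (\<lambda>i. head_sym (layout k In Q X C1 C2 D E i)) [0..<k + 4]"
  assumes k4: "4 \<le> k"
    and b: "in_box (state_bound M e d) s" "s \<noteq> (5,0,0)" "s \<noteq> (7,0,0)"
    and s': "fst (clocked_delta M e d s ss) = s'" and b': "in_box (state_bound M e d) s'"
    and a0: "apply_act 0 In (snd (clocked_delta M e d s ss) 0) = In'"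
    and a1: "snd (clocked_delta M e d s ss) 1 = (0, 1)"
    and a2: "apply_act 2 Q (snd (clocked_delta M e d s ss) 2) = Q'"
    and a3: "apply_act 3 X (snd (clocked_delta M e d s ss) 3) = X'"
    and aw: "\<And>i. 4 \<le> i \<Longrightarrow> i < k \<Longrightarrow> snd (clocked_delta M e d s ss) i = (0, 1)"
    and c1: "apply_act k C1 (snd (clocked_delta M e d s ss) k) = C1'"
    and c2: "apply_act (Suc k) C2 (snd (clocked_delta M e d s ss) (Suc k)) = C2'"
    and dd: "apply_act (k + 2) D (snd (clocked_delta M e d s ss) (k + 2)) = D'"
    and ee: "apply_act (k + 3) E (snd (clocked_delta M e d s ss) (k + 3)) = E'"
  shows "otm_step (clocked M e d) \<phi> (encode_state s, map (layout k In Q X C1 C2 D E) [0..<k + 4]) =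
    (encode_state s', map (layout k In' Q' X' C1' C2' D' E') [0..<k + 4])"
proof -
  obtain f where df: "clocked_delta M e d s ss = (s', f)" using s' by (metis prod.collapse)
  have st: "otm_step (clocked M e d) \<phi> (encode_state s, map (layout k In Q X C1 C2 D E) [0..<k + 4]) =
    (encode_state s', map (\<lambda>i. apply_act i (layout k In Q X C1 C2 D E i) (f i)) [0..<k + 4])"
    using clocked_step[OF b _ b', of "layout k In Q X C1 C2 D E" f \<phi>] df unfolding ss_def k_def by simp
  have bl: "apply_act i blank_tape (0, 1) = blank_tape" for i
    using apply_act_stay[of i blank_tape] by (simp add: head_sym_def blank_tape_def)
  have "map (\<lambda>i. apply_act i (layout k In Q X C1 C2 D E i) (f i)) [0..<k + 4] = map (layout k In' Q' X' C1' C2' D' E') [0..<k + 4]"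
  proof (rule map_cong[OF refl])
    fix i assume "i \<in> set [0..<k + 4]"
    then have i: "i < k + 4" by simp
    consider "i = 0" | "i = 1" | "i = 2" | "i = 3" | "4 \<le> i \<and> i < k" | "i = k" | "i = Suc k" | "i = k + 2" | "i = k + 3"
      using i by linarith
    then show "apply_act i (layout k In Q X C1 C2 D E i) (f i) = layout k In' Q' X' C1' C2' D' E' i"
    proof cases
      case 5 then show ?thesis using aw[of i] df bl layout_at(9)[of i k] by auto
    qed (use df a0 a1 a2 a3 c1 c2 dd ee bl k4 in \<open>auto simp: layout_def\<close>)
  qed
  then show ?thesis using st by simp
qed

definition ctape :: "nat \<Rightarrow> nat \<Rightarrow> nat" where
  "ctape u = (\<lambda>i. if i = 0 then 3 else if i \<le> u then 2 else 0)"
definition etape :: "nat \<Rightarrow> nat \<Rightarrow> nat" where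
  "etape x = (\<lambda>i. if i = 0 then x else 0)"
definition utape :: "nat \<Rightarrow> nat \<Rightarrow> nat" where
  "utape L = (\<lambda>i. if i < L then 2 else 0)"

lemma layout_sel:
  "layout k In Q X C1 C2 D E 0 = In"
  "layout k In Q X C1 C2 D E (Suc 0) = (if k = Suc 0 then C1 else if k = 0 then C2 else blank_tape)"
  "layout k In Q X C1 C2 D E 2 = Q"
  "layout k In Q X C1 C2 D E 3 = X"
  "layout k In Q X C1 C2 D E (Suc (Suc 0)) = Q"
  "layout k In Q X C1 C2 D E (Suc (Suc (Suc 0))) = X"
  "4 \<le> k \<Longrightarrow> i = k \<Longrightarrow> layout k In Q X C1 C2 D E i = C1"
  "4 \<le> k \<Longrightarrow> i = Suc k \<Longrightarrow> layout k In Q X C1 C2 D E i = C2"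
  "4 \<le> k \<Longrightarrow> i = k + 2 \<Longrightarrow> layout k In Q X C1 C2 D E i = D"
  "4 \<le> k \<Longrightarrow> i = k + 3 \<Longrightarrow> layout k In Q X C1 C2 D E i = E"
  "4 \<le> i \<Longrightarrow> i < k \<Longrightarrow> layout k In Q X C1 C2 D E i = blank_tape"
  by (auto simp: layout_def)

lemma head_sym_simp: "head_sym (c, h) = c h" by (simp add: head_sym_def)

lemma apply_act_stay': "apply_act i t (head_sym t, Suc 0) = t"
  using apply_act_stay[of i t] by simp

lemmas layout_simps = head_sym_simp layout_sel apply_act_stay' nth_map_upt

lemma init_layout: "otm_init (clocked M e d) a =
  (encode_state (0,0,0), map (layout (otm_ntapes M) (tape_of_string a) blank_tape blank_tape blank_tape blank_tape blank_tape blank_tape) [0..<otm_ntapes M + 4])"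
  by (auto simp: otm_init_def clocked_simps layout_def nth_Cons' intro!: nth_equalityI)

lemma step_init:
  assumes k4: "4 \<le> otm_ntapes M"
  shows "otm_step (clocked M e d) \<phi> (encode_state (0,0,0), map (layout (otm_ntapes M) (tape_of_string a) blank_tape blank_tape blank_tape blank_tape blank_tape blank_tape) [0..<otm_ntapes M + 4])
   = (encode_state (1,0,0), map (layout (otm_ntapes M) (tape_of_string a) blank_tape blank_tape (ctape 0, 1) (ctape 0, 1) (ctape 0, 1) blank_tape) [0..<otm_ntapes M + 4])"
  apply (rule clocked_layout_step[OF k4])
  using k4 state_bound_ge[where M=M and e=e and d=d]
  apply (simp_all add: clocked_delta_def Let_def in_box_def layout_simps)
  apply (auto simp: fun_eq_iff blank_tape_def apply_act_def ctape_def move_head_def head_sym_def)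
  done

definition cfg :: "otm \<Rightarrow> nat \<times> nat \<times> nat \<Rightarrow> tape \<Rightarrow> tape \<Rightarrow> tape \<Rightarrow> tape \<Rightarrow> tape \<Rightarrow> tape \<Rightarrow> tape \<Rightarrow> config" where
  "cfg M s In Q X C1 C2 D E = (encode_state s, map (layout (otm_ntapes M) In Q X C1 C2 D E) [0..<otm_ntapes M + 4])"

lemmas clocked_cfg_step = clocked_layout_step[folded cfg_def]

lemma cfg_fst: "fst (cfg M s In Q X C1 C2 D E) = encode_state s" by (simp add: cfg_def)

definition input_cells :: "bstr \<Rightarrow> nat \<Rightarrow> nat" where "input_cells a = fst (tape_of_string a)"

lemma tape_of_string_input: "tape_of_string a = (input_cells a, 0)" by (simp add: input_cells_def tape_of_string_def)

lemma input_cells_lt: "i < length a \<Longrightarrow> input_cells a i = 1 \<or> input_cells a i = 2"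
  by (simp add: input_cells_def tape_of_string_def sym_of_def)

lemma input_cells_ge: "length a \<le> i \<Longrightarrow> input_cells a i = 0"
  by (simp add: input_cells_def tape_of_string_def)

lemma reaches_cfg_step:
  assumes "s \<noteq> (5,0,0)" "s \<noteq> (7,0,0)"
    "otm_step (clocked M e d) \<phi> (cfg M s In Q X C1 C2 D E) = c'"
  shows "reaches (clocked M e d) \<phi> (cfg M s In Q X C1 C2 D E) c' 1"
  by (rule reaches_step[OF _ _ assms(3)]) (use assms(1,2) in \<open>simp_all add: cfg_fst clocked_simps\<close>)

definition copy_cells :: "nat \<Rightarrow> nat \<Rightarrow> nat \<Rightarrow> nat" where
  "copy_cells m p = (\<lambda>i. if i = 0 then 3 else if p \<le> i \<and> i \<le> m then 2 else 0)"

lemma copy_cells_1: "copy_cells m 1 = ctape m" by (auto simp: copy_cells_def ctape_def fun_eq_iff)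
lemma copy_cells_Suc: "copy_cells m (Suc m) = ctape 0" by (auto simp: copy_cells_def ctape_def fun_eq_iff)

lemma in_box_sim_state: "f \<le> 1 \<Longrightarrow> in_box (state_bound M e d) (sim_state M q f)"
  by (auto simp: sim_state_def in_box_def state_bound_def)

lemma utape_0: "(utape 0, 0) = blank_tape" by (simp add: utape_def blank_tape_def)

lemma power_two_power_mono: "1 \<le> (u::nat) \<Longrightarrow> j \<le> e \<Longrightarrow> u ^ (2 ^ j) \<le> u ^ (2 ^ e)"
  by (rule power_increasing) (simp_all add: power_increasing)

context
  fixes M :: otm and e d :: nat and \<phi> :: sfun
  assumes k4: "4 \<le> otm_ntapes M"
begin

abbreviation "bb \<equiv> blank_tape"
abbreviation "RC \<equiv> reaches (clocked M e d) \<phi>"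

lemmas clock_cell_defs = ctape_def copy_cells_def utape_def etape_def square_start_def square_next_def
  tape_of_string_def sym_of_def
lemmas clock_step_simps = clocked_delta_def Let_def in_box_def layout_simps clock_cell_defs
lemmas clock_tape_simps = fun_eq_iff blank_tape_def apply_act_def move_head_def head_sym_def clock_cell_defs
lemma copy_input_step: "i < length a \<Longrightarrow> otm_step (clocked M e d) \<phi> (cfg M (1,0,0) (input_cells a, i) bb bb (ctape i, Suc i) (ctape i, Suc i) (ctape 0, 1) bb)
  = cfg M (1,0,0) (input_cells a, Suc i) bb bb (ctape (Suc i), Suc (Suc i)) (ctape (Suc i), Suc (Suc i)) (ctape 0, 1) bb"
  by (rule clocked_cfg_step[OF k4])
     (use k4 state_bound_ge[where M=M and e=e and d=d] input_cells_lt[of i a] in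
      \<open>simp_all add: clock_step_simps, auto simp: clock_tape_simps\<close>)

lemma copy_input_loop: "i \<le> length a \<Longrightarrow> reaches (clocked M e d) \<phi> (cfg M (1,0,0) (input_cells a, 0) bb bb (ctape 0, 1) (ctape 0, 1) (ctape 0, 1) bb)
   (cfg M (1,0,0) (input_cells a, i) bb bb (ctape i, Suc i) (ctape i, Suc i) (ctape 0, 1) bb) i"
proof (induction i)
  case 0 show ?case using reaches_refl by simp
next
  case (Suc i)
  have "reaches (clocked M e d) \<phi> (cfg M (1,0,0) (input_cells a, i) bb bb (ctape i, Suc i) (ctape i, Suc i) (ctape 0, 1) bb)
   (cfg M (1,0,0) (input_cells a, Suc i) bb bb (ctape (Suc i), Suc (Suc i)) (ctape (Suc i), Suc (Suc i)) (ctape 0, 1) bb) 1"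
    by (rule reaches_step) (use copy_input_step[of i] Suc.prems in \<open>auto simp: cfg_fst clocked_simps\<close>)
  from reaches_trans[OF Suc.IH this] Suc.prems show ?case by simp
qed

lemma copy_input_exit: "otm_step (clocked M e d) \<phi> (cfg M (1,0,0) (input_cells a, length a) bb bb (ctape (length a), Suc (length a)) (ctape (length a), Suc (length a)) (ctape 0, 1) bb)
  = cfg M (2,0,0) (input_cells a, length a) bb bb (ctape (length a), Suc (length a)) (ctape (length a), Suc (length a)) (ctape 0, 1) bb"
  by (rule clocked_cfg_step[OF k4])
     (use k4 state_bound_ge[where M=M and e=e and d=d] input_cells_ge[of a "length a"] in
      \<open>simp_all add: clock_step_simps, auto simp: clock_tape_simps\<close>)

lemma pad1_step: "otm_step (clocked M e d) \<phi> (cfg M (2,0,0) In bb bb (ctape u, Suc u) (ctape u, Suc u) (ctape 0, 1) bb)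
  = cfg M (3,0,0) In bb bb (ctape (Suc u), Suc (Suc u)) (ctape (Suc u), Suc (Suc u)) (ctape 0, 1) bb"
  by (rule clocked_cfg_step[OF k4])
     (use k4 state_bound_ge[where M=M and e=e and d=d] in
      \<open>simp_all add: clock_step_simps, auto simp: clock_tape_simps\<close>)

lemma pad2_step: "otm_step (clocked M e d) \<phi> (cfg M (3,0,0) In bb bb (ctape u, Suc u) (ctape u, Suc u) (ctape 0, 1) bb)
  = cfg M (4,0,0) In bb bb (ctape (Suc u), Suc (Suc u)) (ctape (Suc u), Suc (Suc u)) (ctape 0, 1) bb"
  by (rule clocked_cfg_step[OF k4])
     (use k4 state_bound_ge[where M=M and e=e and d=d] in
      \<open>simp_all add: clock_step_simps, auto simp: clock_tape_simps\<close>)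

lemma rewind_step: "0 < h \<Longrightarrow> otm_step (clocked M e d) \<phi> (cfg M (4,0,0) (c, hi) bb bb (ctape u, h) (ctape u, h) (ctape 0, 1) bb)
  = cfg M (4,0,0) (c, hi - 1) bb bb (ctape u, h - 1) (ctape u, h - 1) (ctape 0, 1) bb"
  by (rule clocked_cfg_step[OF k4])
     (use k4 state_bound_ge[where M=M and e=e and d=d] in
      \<open>simp_all add: clock_step_simps, auto simp: clock_tape_simps\<close>)

lemma rewind_exit: "otm_step (clocked M e d) \<phi> (cfg M (4,0,0) In bb bb (ctape u, 0) (ctape u, 0) (ctape 0, 1) bb)
  = cfg M (square_start e 0) In bb bb (ctape u, 1) (ctape u, 1) (ctape 0, 1) bb"
  by (rule clocked_cfg_step[OF k4])
     (use k4 state_bound_ge[where M=M and e=e and d=d] in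
      \<open>simp_all add: clock_step_simps, auto simp: clock_tape_simps\<close>)

lemma rewind_loop: "j \<le> h \<Longrightarrow> reaches (clocked M e d) \<phi> (cfg M (4,0,0) (c, hi) bb bb (ctape u, h) (ctape u, h) (ctape 0, 1) bb)
   (cfg M (4,0,0) (c, hi - j) bb bb (ctape u, h - j) (ctape u, h - j) (ctape 0, 1) bb) j"
proof (induction j)
  case 0 show ?case using reaches_refl by simp
next
  case (Suc j)
  have "reaches (clocked M e d) \<phi> (cfg M (4,0,0) (c, hi - j) bb bb (ctape u, h - j) (ctape u, h - j) (ctape 0, 1) bb)
   (cfg M (4,0,0) (c, hi - Suc j) bb bb (ctape u, h - Suc j) (ctape u, h - Suc j) (ctape 0, 1) bb) 1"
  proof (rule reaches_cfg_step)
    show "otm_step (clocked M e d) \<phi> (cfg M (4,0,0) (c, hi - j) bb bb (ctape u, h - j) (ctape u, h - j) (ctape 0, 1) bb) =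
      cfg M (4,0,0) (c, hi - Suc j) bb bb (ctape u, h - Suc j) (ctape u, h - Suc j) (ctape 0, 1) bb"
      using rewind_step[where h = "h - j" and hi = "hi - j" and c = c and u = u] Suc.prems by simp
  qed simp_all
  from reaches_trans[OF Suc.IH this] Suc.prems show ?case by simp
qed

lemma input_phase: "reaches (clocked M e d) \<phi> (otm_init (clocked M e d) a)
   (cfg M (square_start e 0) (input_cells a, 0) bb bb (ctape (length a + 2), 1) (ctape (length a + 2), 1) (ctape 0, 1) bb) (2 * length a + 8)"
proof -
  let ?n = "length a"
  have i: "otm_init (clocked M e d) a = cfg M (0,0,0) (input_cells a, 0) bb bb bb bb bb bb"
    by (simp add: init_layout cfg_def tape_of_string_input)
  have r1: "reaches (clocked M e d) \<phi> (otm_init (clocked M e d) a) (cfg M (1,0,0) (input_cells a, 0) bb bb (ctape 0, 1) (ctape 0, 1) (ctape 0, 1) bb) 1"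
    unfolding i
  proof (rule reaches_cfg_step)
    show "otm_step (clocked M e d) \<phi> (cfg M (0,0,0) (input_cells a, 0) bb bb bb bb bb bb) =
      cfg M (1,0,0) (input_cells a, 0) bb bb (ctape 0, 1) (ctape 0, 1) (ctape 0, 1) bb"
      using step_init[OF k4, of e d \<phi> a] by (simp add: cfg_def tape_of_string_input)
  qed simp_all
  have r2: "reaches (clocked M e d) \<phi> (cfg M (1,0,0) (input_cells a, 0) bb bb (ctape 0, 1) (ctape 0, 1) (ctape 0, 1) bb)
   (cfg M (1,0,0) (input_cells a, ?n) bb bb (ctape ?n, Suc ?n) (ctape ?n, Suc ?n) (ctape 0, 1) bb) ?n"
    by (rule copy_input_loop) simp
  have s3: "reaches (clocked M e d) \<phi> (cfg M (1,0,0) (input_cells a, ?n) bb bb (ctape ?n, Suc ?n) (ctape ?n, Suc ?n) (ctape 0, 1) bb)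
     (cfg M (2,0,0) (input_cells a, ?n) bb bb (ctape ?n, Suc ?n) (ctape ?n, Suc ?n) (ctape 0, 1) bb) 1"
    by (rule reaches_cfg_step[OF _ _ copy_input_exit]) simp_all
  have s4: "reaches (clocked M e d) \<phi> (cfg M (2,0,0) (input_cells a, ?n) bb bb (ctape ?n, Suc ?n) (ctape ?n, Suc ?n) (ctape 0, 1) bb)
     (cfg M (3,0,0) (input_cells a, ?n) bb bb (ctape (Suc ?n), Suc (Suc ?n)) (ctape (Suc ?n), Suc (Suc ?n)) (ctape 0, 1) bb) 1"
    by (rule reaches_cfg_step[OF _ _ pad1_step]) simp_all
  have s5: "reaches (clocked M e d) \<phi> (cfg M (3,0,0) (input_cells a, ?n) bb bb (ctape (Suc ?n), Suc (Suc ?n)) (ctape (Suc ?n), Suc (Suc ?n)) (ctape 0, 1) bb)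
     (cfg M (4,0,0) (input_cells a, ?n) bb bb (ctape (Suc (Suc ?n)), Suc (Suc (Suc ?n))) (ctape (Suc (Suc ?n)), Suc (Suc (Suc ?n))) (ctape 0, 1) bb) 1"
    by (rule reaches_cfg_step[OF _ _ pad2_step]) simp_all
  have r4: "reaches (clocked M e d) \<phi> (cfg M (4,0,0) (input_cells a, ?n) bb bb (ctape (Suc (Suc ?n)), Suc (Suc (Suc ?n))) (ctape (Suc (Suc ?n)), Suc (Suc (Suc ?n))) (ctape 0, 1) bb)
     (cfg M (4,0,0) (input_cells a, ?n - Suc (Suc (Suc ?n))) bb bb (ctape (Suc (Suc ?n)), Suc (Suc (Suc ?n)) - Suc (Suc (Suc ?n))) (ctape (Suc (Suc ?n)), Suc (Suc (Suc ?n)) - Suc (Suc (Suc ?n))) (ctape 0, 1) bb) (Suc (Suc (Suc ?n)))"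
    by (rule rewind_loop) simp
  have r4': "reaches (clocked M e d) \<phi> (cfg M (4,0,0) (input_cells a, ?n) bb bb (ctape (Suc (Suc ?n)), Suc (Suc (Suc ?n))) (ctape (Suc (Suc ?n)), Suc (Suc (Suc ?n))) (ctape 0, 1) bb)
     (cfg M (4,0,0) (input_cells a, 0) bb bb (ctape (Suc (Suc ?n)), 0) (ctape (Suc (Suc ?n)), 0) (ctape 0, 1) bb) (Suc (Suc (Suc ?n)))"
    using r4 by simp
  have r5: "reaches (clocked M e d) \<phi> (cfg M (4,0,0) (input_cells a, 0) bb bb (ctape (Suc (Suc ?n)), 0) (ctape (Suc (Suc ?n)), 0) (ctape 0, 1) bb)
     (cfg M (square_start e 0) (input_cells a, 0) bb bb (ctape (Suc (Suc ?n)), 1) (ctape (Suc (Suc ?n)), 1) (ctape 0, 1) bb) 1"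
    by (rule reaches_cfg_step[OF _ _ rewind_exit]) simp_all
  have "reaches (clocked M e d) \<phi> (otm_init (clocked M e d) a)
   (cfg M (square_start e 0) (input_cells a, 0) bb bb (ctape (Suc (Suc ?n)), 1) (ctape (Suc (Suc ?n)), 1) (ctape 0, 1) bb) (1 + ?n + 1 + 1 + 1 + Suc (Suc (Suc ?n)) + 1)"
    by (rule reaches_trans[OF reaches_trans[OF reaches_trans[OF reaches_trans[OF reaches_trans[OF reaches_trans[OF r1 r2] s3] s4] s5] r4'] r5])
  moreover have e1: "Suc (Suc ?n) = ?n + 2" by simp
  moreover have e2: "(1 + ?n + 1 + 1 + 1 + Suc (Suc (Suc ?n)) + 1) = 2 * ?n + 8" by simp
  ultimately show ?thesis by (simp only: e1 e2)
qed

lemma square_tick_step: "r \<le> d \<Longrightarrow> j < e \<Longrightarrow> otm_step (clocked M e d) \<phi> (cfg M (8,r,j) In bb X (ctape u, p1) (ctape u, p2) (ctape m, Suc m) E)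
  = cfg M (9,r,j) In bb X (ctape u, p1) (ctape u, Suc p2) (ctape (Suc m), Suc (Suc m)) E"
  by (rule clocked_cfg_step[OF k4])
     (use k4 state_bound_ge[where M=M and e=e and d=d] in
      \<open>simp_all add: clock_step_simps, auto simp: clock_tape_simps\<close>)

lemma check2_continue_step: "r \<le> d \<Longrightarrow> j < e \<Longrightarrow> 0 < p2 \<Longrightarrow> p2 \<le> u \<Longrightarrow> otm_step (clocked M e d) \<phi> (cfg M (9,r,j) In bb X C1 (ctape u, p2) D E)
  = cfg M (8,r,j) In bb X C1 (ctape u, p2) D E"
  by (rule clocked_cfg_step[OF k4])
     (use k4 state_bound_ge[where M=M and e=e and d=d] in
      \<open>simp_all add: clock_step_simps, auto simp: clock_tape_simps\<close>)

lemma check2_exit_step: "r \<le> d \<Longrightarrow> j < e \<Longrightarrow> otm_step (clocked M e d) \<phi> (cfg M (9,r,j) In bb X C1 (ctape u, Suc u) D E)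
  = cfg M (10,r,j) In bb X C1 (ctape u, u) D E"
  by (rule clocked_cfg_step[OF k4])
     (use k4 state_bound_ge[where M=M and e=e and d=d] in
      \<open>simp_all add: clock_step_simps, auto simp: clock_tape_simps\<close>)

lemma rewind2_step: "r \<le> d \<Longrightarrow> j < e \<Longrightarrow> 0 < h \<Longrightarrow> otm_step (clocked M e d) \<phi> (cfg M (10,r,j) In bb X C1 (ctape u, h) D E)
  = cfg M (10,r,j) In bb X C1 (ctape u, h - 1) D E"
  by (rule clocked_cfg_step[OF k4])
     (use k4 state_bound_ge[where M=M and e=e and d=d] in
      \<open>simp_all add: clock_step_simps, auto simp: clock_tape_simps\<close>)

lemma rewind2_exit_step: "r \<le> d \<Longrightarrow> j < e \<Longrightarrow> otm_step (clocked M e d) \<phi> (cfg M (10,r,j) In bb X C1 (ctape u, 0) D E)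
  = cfg M (11,r,j) In bb X C1 (ctape u, 1) D E"
  by (rule clocked_cfg_step[OF k4])
     (use k4 state_bound_ge[where M=M and e=e and d=d] in
      \<open>simp_all add: clock_step_simps, auto simp: clock_tape_simps\<close>)

lemma advance1_step: "r \<le> d \<Longrightarrow> j < e \<Longrightarrow> otm_step (clocked M e d) \<phi> (cfg M (11,r,j) In bb X (ctape u, p1) C2 D E)
  = cfg M (12,r,j) In bb X (ctape u, Suc p1) C2 D E"
  by (rule clocked_cfg_step[OF k4])
     (use k4 state_bound_ge[where M=M and e=e and d=d] in
      \<open>simp_all add: clock_step_simps, auto simp: clock_tape_simps\<close>)

lemma check1_continue_step: "r \<le> d \<Longrightarrow> j < e \<Longrightarrow> 0 < p1 \<Longrightarrow> p1 \<le> u \<Longrightarrow> otm_step (clocked M e d) \<phi> (cfg M (12,r,j) In bb X (ctape u, p1) C2 D E)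
  = cfg M (8,r,j) In bb X (ctape u, p1) C2 D E"
  by (rule clocked_cfg_step[OF k4])
     (use k4 state_bound_ge[where M=M and e=e and d=d] in
      \<open>simp_all add: clock_step_simps, auto simp: clock_tape_simps\<close>)

lemma check1_exit_step: "r \<le> d \<Longrightarrow> j < e \<Longrightarrow> otm_step (clocked M e d) \<phi> (cfg M (12,r,j) In bb X (ctape u, Suc u) C2 D E)
  = cfg M (13,r,j) In bb X (ctape u, u) C2 D E"
  by (rule clocked_cfg_step[OF k4])
     (use k4 state_bound_ge[where M=M and e=e and d=d] in
      \<open>simp_all add: clock_step_simps, auto simp: clock_tape_simps\<close>)

lemma rewind1_step: "r \<le> d \<Longrightarrow> j < e \<Longrightarrow> 0 < h \<Longrightarrow> otm_step (clocked M e d) \<phi> (cfg M (13,r,j) In bb X (ctape u, h) C2 D E)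
  = cfg M (13,r,j) In bb X (ctape u, h - 1) C2 D E"
  by (rule clocked_cfg_step[OF k4])
     (use k4 state_bound_ge[where M=M and e=e and d=d] in
      \<open>simp_all add: clock_step_simps, auto simp: clock_tape_simps\<close>)

lemma rewind1_exit_step: "r \<le> d \<Longrightarrow> j < e \<Longrightarrow> otm_step (clocked M e d) \<phi> (cfg M (13,r,j) In bb X (ctape u, 0) C2 D E)
  = cfg M (14,r,j) In bb X (ctape u, 1) C2 D E"
  by (rule clocked_cfg_step[OF k4])
     (use k4 state_bound_ge[where M=M and e=e and d=d] in
      \<open>simp_all add: clock_step_simps, auto simp: clock_tape_simps\<close>)

lemma rewind_scratch_step: "r \<le> d \<Longrightarrow> j < e \<Longrightarrow> 0 < h \<Longrightarrow> otm_step (clocked M e d) \<phi> (cfg M (14,r,j) In bb X C1 C2 (ctape m, h) E)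
  = cfg M (14,r,j) In bb X C1 C2 (ctape m, h - 1) E"
  by (rule clocked_cfg_step[OF k4])
     (use k4 state_bound_ge[where M=M and e=e and d=d] in
      \<open>simp_all add: clock_step_simps, auto simp: clock_tape_simps\<close>)

lemma rewind_scratch_exit_step: "r \<le> d \<Longrightarrow> j < e \<Longrightarrow> otm_step (clocked M e d) \<phi> (cfg M (14,r,j) In bb X C1 C2 (ctape m, 0) E)
  = cfg M (15,r,j) In bb X C1 C2 (ctape m, 1) E"
  by (rule clocked_cfg_step[OF k4])
     (use k4 state_bound_ge[where M=M and e=e and d=d] in
      \<open>simp_all add: clock_step_simps, auto simp: clock_tape_simps\<close>)

lemma copy_back_step: "r \<le> d \<Longrightarrow> j < e \<Longrightarrow> 0 < p \<Longrightarrow> p \<le> m \<Longrightarrow> otm_step (clocked M e d) \<phi> (cfg M (15,r,j) In bb X (ctape (max (p - 1) u), p) (ctape (max (p - 1) u), p) (copy_cells m p, p) E)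
  = cfg M (15,r,j) In bb X (ctape (max p u), Suc p) (ctape (max p u), Suc p) (copy_cells m (Suc p), Suc p) E"
  by (rule clocked_cfg_step[OF k4])
     (use k4 state_bound_ge[where M=M and e=e and d=d] in
      \<open>simp_all add: clock_step_simps, auto simp: clock_tape_simps\<close>)

lemma copy_back_exit_step: "r \<le> d \<Longrightarrow> j < e \<Longrightarrow> otm_step (clocked M e d) \<phi> (cfg M (15,r,j) In bb X C1 C2 (copy_cells m (Suc m), Suc m) E)
  = cfg M (16,r,j) In bb X C1 C2 (copy_cells m (Suc m), Suc m) E"
  by (rule clocked_cfg_step[OF k4])
     (use k4 state_bound_ge[where M=M and e=e and d=d] in
      \<open>simp_all add: clock_step_simps, auto simp: clock_tape_simps\<close>)

lemma rewind_all_step: "r \<le> d \<Longrightarrow> j < e \<Longrightarrow> 0 < h \<Longrightarrow> otm_step (clocked M e d) \<phi> (cfg M (16,r,j) In bb X (ctape w, h) (ctape w, h) (ctape 0, h) E)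
  = cfg M (16,r,j) In bb X (ctape w, h - 1) (ctape w, h - 1) (ctape 0, h - 1) E"
  by (rule clocked_cfg_step[OF k4])
     (use k4 state_bound_ge[where M=M and e=e and d=d] in
      \<open>simp_all add: clock_step_simps, auto simp: clock_tape_simps\<close>)

lemma rewind_all_exit_step: "r \<le> d \<Longrightarrow> j < e \<Longrightarrow> otm_step (clocked M e d) \<phi> (cfg M (16,r,j) In bb X (ctape w, 0) (ctape w, 0) (ctape 0, 0) E)
  = cfg M (square_next e r j) In bb X (ctape w, 1) (ctape w, 1) (ctape 0, 1) E"
  by (rule clocked_cfg_step[OF k4])
     (use k4 state_bound_ge[where M=M and e=e and d=d] in
      \<open>simp_all add: clock_step_simps, auto simp: clock_tape_simps\<close>)

lemma add_counter_partial: "r \<le> d \<Longrightarrow> j < e \<Longrightarrow> i < u \<Longrightarrow>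
  RC (cfg M (8,r,j) In bb X (ctape u, p1) (ctape u, 1) (ctape m, Suc m) E)
      (cfg M (8,r,j) In bb X (ctape u, p1) (ctape u, Suc i) (ctape (m + i), Suc (m + i)) E) (2 * i)"
proof (induction i)
  case 0 then show ?case using reaches_refl by simp
next
  case (Suc i)
  have a: "RC (cfg M (8,r,j) In bb X (ctape u, p1) (ctape u, Suc i) (ctape (m + i), Suc (m + i)) E)
     (cfg M (9,r,j) In bb X (ctape u, p1) (ctape u, Suc (Suc i)) (ctape (Suc (m + i)), Suc (Suc (m + i))) E) 1"
    by (rule reaches_cfg_step[OF _ _ square_tick_step]) (use Suc.prems in simp_all)
  have b: "RC (cfg M (9,r,j) In bb X (ctape u, p1) (ctape u, Suc (Suc i)) (ctape (Suc (m + i)), Suc (Suc (m + i))) E)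
     (cfg M (8,r,j) In bb X (ctape u, p1) (ctape u, Suc (Suc i)) (ctape (Suc (m + i)), Suc (Suc (m + i))) E) 1"
    by (rule reaches_cfg_step[OF _ _ check2_continue_step]) (use Suc.prems in simp_all)
  from reaches_trans[OF reaches_trans[OF Suc.IH a] b] Suc.prems show ?case by simp
qed

lemma rewind2_loop: "r \<le> d \<Longrightarrow> j < e \<Longrightarrow> i \<le> h \<Longrightarrow>
  RC (cfg M (10,r,j) In bb X C1 (ctape u, h) D E) (cfg M (10,r,j) In bb X C1 (ctape u, h - i) D E) i"
proof (induction i)
  case 0 then show ?case using reaches_refl by simp
next
  case (Suc i)
  have a: "RC (cfg M (10,r,j) In bb X C1 (ctape u, h - i) D E) (cfg M (10,r,j) In bb X C1 (ctape u, h - Suc i) D E) 1"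
  proof (rule reaches_cfg_step)
    show "otm_step (clocked M e d) \<phi> (cfg M (10,r,j) In bb X C1 (ctape u, h - i) D E) = cfg M (10,r,j) In bb X C1 (ctape u, h - Suc i) D E"
      using rewind2_step[where h = "h - i"] Suc.prems by simp
  qed simp_all
  from reaches_trans[OF Suc.IH a] Suc.prems show ?case by simp
qed

lemma rewind1_loop: "r \<le> d \<Longrightarrow> j < e \<Longrightarrow> i \<le> h \<Longrightarrow>
  RC (cfg M (13,r,j) In bb X (ctape u, h) C2 D E) (cfg M (13,r,j) In bb X (ctape u, h - i) C2 D E) i"
proof (induction i)
  case 0 then show ?case using reaches_refl by simp
next
  case (Suc i)
  have a: "RC (cfg M (13,r,j) In bb X (ctape u, h - i) C2 D E) (cfg M (13,r,j) In bb X (ctape u, h - Suc i) C2 D E) 1"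
  proof (rule reaches_cfg_step)
    show "otm_step (clocked M e d) \<phi> (cfg M (13,r,j) In bb X (ctape u, h - i) C2 D E) = cfg M (13,r,j) In bb X (ctape u, h - Suc i) C2 D E"
      using rewind1_step[where h = "h - i"] Suc.prems by simp
  qed simp_all
  from reaches_trans[OF Suc.IH a] Suc.prems show ?case by simp
qed

lemma rewind_scratch_loop: "r \<le> d \<Longrightarrow> j < e \<Longrightarrow> i \<le> h \<Longrightarrow>
  RC (cfg M (14,r,j) In bb X C1 C2 (ctape m, h) E) (cfg M (14,r,j) In bb X C1 C2 (ctape m, h - i) E) i"
proof (induction i)
  case 0 then show ?case using reaches_refl by simp
next
  case (Suc i)
  have a: "RC (cfg M (14,r,j) In bb X C1 C2 (ctape m, h - i) E) (cfg M (14,r,j) In bb X C1 C2 (ctape m, h - Suc i) E) 1"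
  proof (rule reaches_cfg_step)
    show "otm_step (clocked M e d) \<phi> (cfg M (14,r,j) In bb X C1 C2 (ctape m, h - i) E) = cfg M (14,r,j) In bb X C1 C2 (ctape m, h - Suc i) E"
      using rewind_scratch_step[where h = "h - i"] Suc.prems by simp
  qed simp_all
  from reaches_trans[OF Suc.IH a] Suc.prems show ?case by simp
qed

lemma rewind_all_loop: "r \<le> d \<Longrightarrow> j < e \<Longrightarrow> i \<le> h \<Longrightarrow>
  RC (cfg M (16,r,j) In bb X (ctape w, h) (ctape w, h) (ctape 0, h) E) (cfg M (16,r,j) In bb X (ctape w, h - i) (ctape w, h - i) (ctape 0, h - i) E) i"
proof (induction i)
  case 0 then show ?case using reaches_refl by simp
next
  case (Suc i)
  have a: "RC (cfg M (16,r,j) In bb X (ctape w, h - i) (ctape w, h - i) (ctape 0, h - i) E) (cfg M (16,r,j) In bb X (ctape w, h - Suc i) (ctape w, h - Suc i) (ctape 0, h - Suc i) E) 1"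
  proof (rule reaches_cfg_step)
    show "otm_step (clocked M e d) \<phi> (cfg M (16,r,j) In bb X (ctape w, h - i) (ctape w, h - i) (ctape 0, h - i) E) = cfg M (16,r,j) In bb X (ctape w, h - Suc i) (ctape w, h - Suc i) (ctape 0, h - Suc i) E"
      using rewind_all_step[where h = "h - i"] Suc.prems by simp
  qed simp_all
  from reaches_trans[OF Suc.IH a] Suc.prems show ?case by simp
qed

lemma copy_back_loop: "r \<le> d \<Longrightarrow> j < e \<Longrightarrow> i \<le> m \<Longrightarrow>
  RC (cfg M (15,r,j) In bb X (ctape u, 1) (ctape u, 1) (ctape m, 1) E)
      (cfg M (15,r,j) In bb X (ctape (max i u), Suc i) (ctape (max i u), Suc i) (copy_cells m (Suc i), Suc i) E) i"
proof (induction i)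
  case 0 then show ?case using reaches_refl by (simp add: copy_cells_1[unfolded One_nat_def])
next
  case (Suc i)
  have a: "RC (cfg M (15,r,j) In bb X (ctape (max i u), Suc i) (ctape (max i u), Suc i) (copy_cells m (Suc i), Suc i) E)
      (cfg M (15,r,j) In bb X (ctape (max (Suc i) u), Suc (Suc i)) (ctape (max (Suc i) u), Suc (Suc i)) (copy_cells m (Suc (Suc i)), Suc (Suc i)) E) 1"
  proof (rule reaches_cfg_step)
    show "otm_step (clocked M e d) \<phi> (cfg M (15,r,j) In bb X (ctape (max i u), Suc i) (ctape (max i u), Suc i) (copy_cells m (Suc i), Suc i) E) =
      cfg M (15,r,j) In bb X (ctape (max (Suc i) u), Suc (Suc i)) (ctape (max (Suc i) u), Suc (Suc i)) (copy_cells m (Suc (Suc i)), Suc (Suc i)) E"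
      using copy_back_step[where p = "Suc i"] Suc.prems by simp
  qed simp_all
  from reaches_trans[OF Suc.IH a] Suc.prems show ?case by simp
qed

lemma add_counter: "r \<le> d \<Longrightarrow> j < e \<Longrightarrow> 1 \<le> u \<Longrightarrow>
  RC (cfg M (8,r,j) In bb X (ctape u, p1) (ctape u, 1) (ctape m, Suc m) E)
      (cfg M (12,r,j) In bb X (ctape u, Suc p1) (ctape u, 1) (ctape (m + u), Suc (m + u)) E) (3 * u + 2)"
proof -
  assume r: "r \<le> d" and j: "j < e" and u1: "1 \<le> u"
  then obtain v where u: "u = Suc v" by (cases u) auto
  have a: "RC (cfg M (8,r,j) In bb X (ctape (Suc v), p1) (ctape (Suc v), 1) (ctape m, Suc m) E)
      (cfg M (8,r,j) In bb X (ctape (Suc v), p1) (ctape (Suc v), Suc v) (ctape (m + v), Suc (m + v)) E) (2 * v)"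
    by (rule add_counter_partial[OF r j]) simp
  have b: "RC (cfg M (8,r,j) In bb X (ctape (Suc v), p1) (ctape (Suc v), Suc v) (ctape (m + v), Suc (m + v)) E)
      (cfg M (9,r,j) In bb X (ctape (Suc v), p1) (ctape (Suc v), Suc (Suc v)) (ctape (Suc (m + v)), Suc (Suc (m + v))) E) 1"
    by (rule reaches_cfg_step[OF _ _ square_tick_step[OF r j]]) simp_all
  have c: "RC (cfg M (9,r,j) In bb X (ctape (Suc v), p1) (ctape (Suc v), Suc (Suc v)) (ctape (Suc (m + v)), Suc (Suc (m + v))) E)
      (cfg M (10,r,j) In bb X (ctape (Suc v), p1) (ctape (Suc v), Suc v) (ctape (Suc (m + v)), Suc (Suc (m + v))) E) 1"
    by (rule reaches_cfg_step[OF _ _ check2_exit_step[OF r j]]) simp_all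
  have f: "RC (cfg M (10,r,j) In bb X (ctape (Suc v), p1) (ctape (Suc v), Suc v) (ctape (Suc (m + v)), Suc (Suc (m + v))) E)
      (cfg M (10,r,j) In bb X (ctape (Suc v), p1) (ctape (Suc v), Suc v - Suc v) (ctape (Suc (m + v)), Suc (Suc (m + v))) E) (Suc v)"
    by (rule rewind2_loop[OF r j]) simp
  then have f: "RC (cfg M (10,r,j) In bb X (ctape (Suc v), p1) (ctape (Suc v), Suc v) (ctape (Suc (m + v)), Suc (Suc (m + v))) E)
      (cfg M (10,r,j) In bb X (ctape (Suc v), p1) (ctape (Suc v), 0) (ctape (Suc (m + v)), Suc (Suc (m + v))) E) (Suc v)"
    by simp
  have g: "RC (cfg M (10,r,j) In bb X (ctape (Suc v), p1) (ctape (Suc v), 0) (ctape (Suc (m + v)), Suc (Suc (m + v))) E)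
      (cfg M (11,r,j) In bb X (ctape (Suc v), p1) (ctape (Suc v), 1) (ctape (Suc (m + v)), Suc (Suc (m + v))) E) 1"
    by (rule reaches_cfg_step[OF _ _ rewind2_exit_step[OF r j]]) simp_all
  have h: "RC (cfg M (11,r,j) In bb X (ctape (Suc v), p1) (ctape (Suc v), 1) (ctape (Suc (m + v)), Suc (Suc (m + v))) E)
      (cfg M (12,r,j) In bb X (ctape (Suc v), Suc p1) (ctape (Suc v), 1) (ctape (Suc (m + v)), Suc (Suc (m + v))) E) 1"
    by (rule reaches_cfg_step[OF _ _ advance1_step[OF r j]]) simp_all
  have Z: "RC (cfg M (8,r,j) In bb X (ctape (Suc v), p1) (ctape (Suc v), 1) (ctape m, Suc m) E)
      (cfg M (12,r,j) In bb X (ctape (Suc v), Suc p1) (ctape (Suc v), 1) (ctape (Suc (m + v)), Suc (Suc (m + v))) E) (2 * v + 1 + 1 + Suc v + 1 + 1)"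
    by (rule reaches_trans[OF reaches_trans[OF reaches_trans[OF reaches_trans[OF reaches_trans[OF a b] c] f] g] h])
  have e1: "m + u = Suc (m + v)" using u by simp
  show ?thesis unfolding e1 unfolding u by (rule reaches_mono[OF Z]) simp
qed

lemma multiply_partial: "r \<le> d \<Longrightarrow> j < e \<Longrightarrow> i < u \<Longrightarrow>
  RC (cfg M (8,r,j) In bb X (ctape u, 1) (ctape u, 1) (ctape 0, 1) E)
      (cfg M (8,r,j) In bb X (ctape u, Suc i) (ctape u, 1) (ctape (i * u), Suc (i * u)) E) (i * (3 * u + 3))"
proof (induction i)
  case 0 then show ?case using reaches_refl by simp
next
  case (Suc i)
  have u: "1 \<le> u" using Suc.prems by simp
  have a: "RC (cfg M (8,r,j) In bb X (ctape u, Suc i) (ctape u, 1) (ctape (i * u), Suc (i * u)) E)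
      (cfg M (12,r,j) In bb X (ctape u, Suc (Suc i)) (ctape u, 1) (ctape (i * u + u), Suc (i * u + u)) E) (3 * u + 2)"
    by (rule add_counter[OF Suc.prems(1,2) u])
  have b: "RC (cfg M (12,r,j) In bb X (ctape u, Suc (Suc i)) (ctape u, 1) (ctape (i * u + u), Suc (i * u + u)) E)
      (cfg M (8,r,j) In bb X (ctape u, Suc (Suc i)) (ctape u, 1) (ctape (i * u + u), Suc (i * u + u)) E) 1"
    by (rule reaches_cfg_step[OF _ _ check1_continue_step]) (use Suc.prems in simp_all)
  have "RC (cfg M (8,r,j) In bb X (ctape u, 1) (ctape u, 1) (ctape 0, 1) E)
      (cfg M (8,r,j) In bb X (ctape u, Suc (Suc i)) (ctape u, 1) (ctape (i * u + u), Suc (i * u + u)) E) (i * (3 * u + 3) + (3 * u + 2) + 1)"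
    by (rule reaches_trans[OF reaches_trans[OF Suc.IH a] b]) (use Suc.prems in simp_all)
  moreover have eq1: "i * u + u = Suc i * u" by simp
  ultimately have X: "RC (cfg M (8,r,j) In bb X (ctape u, 1) (ctape u, 1) (ctape 0, 1) E)
      (cfg M (8,r,j) In bb X (ctape u, Suc (Suc i)) (ctape u, 1) (ctape (Suc i * u), Suc (Suc i * u)) E) (i * (3 * u + 3) + (3 * u + 2) + 1)"
    by (simp only: eq1)
  show ?case by (rule reaches_mono[OF X]) simp
qed

lemma square_counter: "r \<le> d \<Longrightarrow> j < e \<Longrightarrow> 1 \<le> u \<Longrightarrow>
  RC (cfg M (8,r,j) In bb X (ctape u, 1) (ctape u, 1) (ctape 0, 1) E)
      (cfg M (square_next e r j) In bb X (ctape (u * u), 1) (ctape (u * u), 1) (ctape 0, 1) E) (9 * (u + 1) * (u + 1))"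
proof -
  assume r: "r \<le> d" and j: "j < e" and u1: "1 \<le> u"
  then obtain v where u: "u = Suc v" by (cases u) auto
  let ?m = "u * u"
  have a0: "RC (cfg M (8,r,j) In bb X (ctape u, 1) (ctape u, 1) (ctape 0, 1) E)
      (cfg M (8,r,j) In bb X (ctape u, Suc v) (ctape u, 1) (ctape (v * u), Suc (v * u)) E) (v * (3 * u + 3))"
    by (rule multiply_partial[OF r j]) (simp add: u)
  have a: "RC (cfg M (8,r,j) In bb X (ctape u, 1) (ctape u, 1) (ctape 0, 1) E)
      (cfg M (8,r,j) In bb X (ctape u, u) (ctape u, 1) (ctape (v * u), Suc (v * u)) E) (v * (3 * u + 3))"
    using a0[folded u] .
  have b: "RC (cfg M (8,r,j) In bb X (ctape u, Suc v) (ctape u, 1) (ctape (v * u), Suc (v * u)) E)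
      (cfg M (12,r,j) In bb X (ctape u, Suc (Suc v)) (ctape u, 1) (ctape (v * u + u), Suc (v * u + u)) E) (3 * u + 2)"
    by (rule add_counter[OF r j u1])
  have mm: "v * u + u = ?m" using u by simp
  have b': "RC (cfg M (8,r,j) In bb X (ctape u, u) (ctape u, 1) (ctape (v * u), Suc (v * u)) E)
      (cfg M (12,r,j) In bb X (ctape u, Suc u) (ctape u, 1) (ctape ?m, Suc ?m) E) (3 * u + 2)"
    using b[unfolded mm, folded u] .
  have c: "RC (cfg M (12,r,j) In bb X (ctape u, Suc u) (ctape u, 1) (ctape ?m, Suc ?m) E)
      (cfg M (13,r,j) In bb X (ctape u, u) (ctape u, 1) (ctape ?m, Suc ?m) E) 1"
    by (rule reaches_cfg_step[OF _ _ check1_exit_step[OF r j]]) simp_all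
  have f0: "RC (cfg M (13,r,j) In bb X (ctape u, u) (ctape u, 1) (ctape ?m, Suc ?m) E)
      (cfg M (13,r,j) In bb X (ctape u, u - u) (ctape u, 1) (ctape ?m, Suc ?m) E) u"
    by (rule rewind1_loop[OF r j]) simp
  then have f: "RC (cfg M (13,r,j) In bb X (ctape u, u) (ctape u, 1) (ctape ?m, Suc ?m) E)
      (cfg M (13,r,j) In bb X (ctape u, 0) (ctape u, 1) (ctape ?m, Suc ?m) E) u"
    by simp
  have g: "RC (cfg M (13,r,j) In bb X (ctape u, 0) (ctape u, 1) (ctape ?m, Suc ?m) E)
      (cfg M (14,r,j) In bb X (ctape u, 1) (ctape u, 1) (ctape ?m, Suc ?m) E) 1"
    by (rule reaches_cfg_step[OF _ _ rewind1_exit_step[OF r j]]) simp_all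
  have h0: "RC (cfg M (14,r,j) In bb X (ctape u, 1) (ctape u, 1) (ctape ?m, Suc ?m) E)
      (cfg M (14,r,j) In bb X (ctape u, 1) (ctape u, 1) (ctape ?m, Suc ?m - Suc ?m) E) (Suc ?m)"
    by (rule rewind_scratch_loop[OF r j]) simp
  then have h: "RC (cfg M (14,r,j) In bb X (ctape u, 1) (ctape u, 1) (ctape ?m, Suc ?m) E)
      (cfg M (14,r,j) In bb X (ctape u, 1) (ctape u, 1) (ctape ?m, 0) E) (Suc ?m)"
    by simp
  have i: "RC (cfg M (14,r,j) In bb X (ctape u, 1) (ctape u, 1) (ctape ?m, 0) E)
      (cfg M (15,r,j) In bb X (ctape u, 1) (ctape u, 1) (ctape ?m, 1) E) 1"
    by (rule reaches_cfg_step[OF _ _ rewind_scratch_exit_step[OF r j]]) simp_all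
  have mx: "max ?m u = ?m" using u by (simp add: max_def)
  have l0: "RC (cfg M (15,r,j) In bb X (ctape u, 1) (ctape u, 1) (ctape ?m, 1) E)
      (cfg M (15,r,j) In bb X (ctape (max ?m u), Suc ?m) (ctape (max ?m u), Suc ?m) (copy_cells ?m (Suc ?m), Suc ?m) E) ?m"
    by (rule copy_back_loop[OF r j]) simp
  have l: "RC (cfg M (15,r,j) In bb X (ctape u, 1) (ctape u, 1) (ctape ?m, 1) E)
      (cfg M (15,r,j) In bb X (ctape ?m, Suc ?m) (ctape ?m, Suc ?m) (copy_cells ?m (Suc ?m), Suc ?m) E) ?m"
    using l0 unfolding mx .
  have n0: "RC (cfg M (15,r,j) In bb X (ctape ?m, Suc ?m) (ctape ?m, Suc ?m) (copy_cells ?m (Suc ?m), Suc ?m) E)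
      (cfg M (16,r,j) In bb X (ctape ?m, Suc ?m) (ctape ?m, Suc ?m) (copy_cells ?m (Suc ?m), Suc ?m) E) 1"
    by (rule reaches_cfg_step[OF _ _ copy_back_exit_step[OF r j]]) simp_all
  have n: "RC (cfg M (15,r,j) In bb X (ctape ?m, Suc ?m) (ctape ?m, Suc ?m) (copy_cells ?m (Suc ?m), Suc ?m) E)
      (cfg M (16,r,j) In bb X (ctape ?m, Suc ?m) (ctape ?m, Suc ?m) (ctape 0, Suc ?m) E) 1"
    using n0 unfolding copy_cells_Suc .
  have o0: "RC (cfg M (16,r,j) In bb X (ctape ?m, Suc ?m) (ctape ?m, Suc ?m) (ctape 0, Suc ?m) E)
      (cfg M (16,r,j) In bb X (ctape ?m, Suc ?m - Suc ?m) (ctape ?m, Suc ?m - Suc ?m) (ctape 0, Suc ?m - Suc ?m) E) (Suc ?m)"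
    by (rule rewind_all_loop[OF r j]) simp
  then have o: "RC (cfg M (16,r,j) In bb X (ctape ?m, Suc ?m) (ctape ?m, Suc ?m) (ctape 0, Suc ?m) E)
      (cfg M (16,r,j) In bb X (ctape ?m, 0) (ctape ?m, 0) (ctape 0, 0) E) (Suc ?m)"
    by simp
  have p: "RC (cfg M (16,r,j) In bb X (ctape ?m, 0) (ctape ?m, 0) (ctape 0, 0) E)
      (cfg M (square_next e r j) In bb X (ctape ?m, 1) (ctape ?m, 1) (ctape 0, 1) E) 1"
    by (rule reaches_cfg_step[OF _ _ rewind_all_exit_step[OF r j]]) simp_all
  have tot: "RC (cfg M (8,r,j) In bb X (ctape u, 1) (ctape u, 1) (ctape 0, 1) E)
      (cfg M (square_next e r j) In bb X (ctape ?m, 1) (ctape ?m, 1) (ctape 0, 1) E)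
      (v * (3 * u + 3) + (3 * u + 2) + 1 + u + 1 + Suc ?m + 1 + ?m + 1 + Suc ?m + 1)"
    by (rule reaches_trans[OF reaches_trans[OF reaches_trans[OF reaches_trans[OF reaches_trans[OF reaches_trans[OF
      reaches_trans[OF reaches_trans[OF reaches_trans[OF reaches_trans[OF a b'] c] f] g] h] i] l] n] o] p])
  have "v * (3 * u + 3) \<le> u * (3 * u + 3)" using u by simp
  then have "v * (3 * u + 3) + (3 * u + 2) + 1 + u + 1 + Suc ?m + 1 + ?m + 1 + Suc ?m + 1 \<le> 9 * (u + 1) * (u + 1)"
    by (simp add: algebra_simps)
  from reaches_mono[OF tot this] show ?thesis .
qed

lemma query_step: "otm_step (clocked M e d) \<phi> (cfg M (5,0,0) In Q X C1 C2 D E) =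
   cfg M (6,0,0) In bb (tape_of_string (\<phi> (string_of_cells (fst Q)))) C1 C2 D E"
proof -
  have q: "otm_step (clocked M e d) \<phi> (encode_state (5,0,0), ts) = (encode_state (6,0,0), ts[2 := blank_tape, 3 := tape_of_string (\<phi> (string_of_cells (fst (ts ! 2))))])" for ts
  proof -
    have "otm_step (clocked M e d) \<phi> (encode_state (5,0,0), ts) = (otm_after_query (clocked M e d), ts[2 := blank_tape, 3 := tape_of_string (\<phi> (string_of_cells (fst (ts ! 2))))])"
      by (rule otm_step_query) (simp_all add: clocked_simps)
    then show ?thesis by (simp only: clocked_simps)
  qed
  have n2: "map (layout (otm_ntapes M) In Q X C1 C2 D E) [0..<otm_ntapes M + 4] ! 2 = Q"
    using k4 by (simp add: layout_def del: upt_Suc)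
  have mu: "(map T [0..<n])[i := x] = map (T(i := x)) [0..<n]" if "i < n" for T :: "nat \<Rightarrow> tape" and n i x
    using that by (auto intro!: nth_equalityI simp: nth_list_update)
  have fu: "(layout (otm_ntapes M) In Q X C1 C2 D E)(2 := Q', 3 := X') = layout (otm_ntapes M) In Q' X' C1 C2 D E" for Q' X'
    by (auto simp: layout_def fun_eq_iff)
  have "(map (layout (otm_ntapes M) In Q X C1 C2 D E) [0..<otm_ntapes M + 4])[2 := blank_tape, 3 := tape_of_string (\<phi> (string_of_cells (fst Q)))]
     = map (layout (otm_ntapes M) In blank_tape (tape_of_string (\<phi> (string_of_cells (fst Q)))) C1 C2 D E) [0..<otm_ntapes M + 4]"
    using k4 by (simp add: mu fu del: upt_Suc)
  then show ?thesis unfolding cfg_def q n2 by simp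
qed

lemma write_query_step: "r \<le> d \<Longrightarrow> i < K \<Longrightarrow> otm_step (clocked M e d) \<phi> (cfg M (17,r,0) In (utape i, i) X (ctape K, Suc i) (ctape K, Suc i) D E)
  = cfg M (17,r,0) In (utape (Suc i), Suc i) X (ctape K, Suc (Suc i)) (ctape K, Suc (Suc i)) D E"
  by (rule clocked_cfg_step[OF k4])
     (use k4 state_bound_ge[where M=M and e=e and d=d] in
      \<open>simp_all add: clock_step_simps, auto simp: clock_tape_simps\<close>)

lemma write_query_exit_step: "r \<le> d \<Longrightarrow> otm_step (clocked M e d) \<phi> (cfg M (17,r,0) In Q X (ctape K, Suc K) (ctape K, Suc K) D (etape x, 0))
  = cfg M (5,0,0) In Q X (ctape K, Suc K) (ctape K, Suc K) D (etape (4 + r), 0)"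
  by (rule clocked_cfg_step[OF k4])
     (use k4 state_bound_ge[where M=M and e=e and d=d] in
      \<open>simp_all add: clock_step_simps, auto simp: clock_tape_simps\<close>)

lemma after_query_round_step: "r < d \<Longrightarrow> otm_step (clocked M e d) \<phi> (cfg M (6,0,0) In Q X C1 C2 D (etape (4 + r), 0))
  = cfg M (18,r,0) In Q X C1 C2 D (etape (4 + r), 0)"
  by (rule clocked_cfg_step[OF k4])
     (use k4 state_bound_ge[where M=M and e=e and d=d] in
      \<open>simp_all add: clock_step_simps, auto simp: clock_tape_simps\<close>)

lemma read_answer_step: "r \<le> d \<Longrightarrow> i < length w \<Longrightarrow> otm_step (clocked M e d) \<phi> (cfg M (18,r,0) In Q (fst (tape_of_string w), i) (ctape m, Suc m) (ctape m, Suc m) D E)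
  = cfg M (18,r,0) In Q (fst (tape_of_string w), Suc i) (ctape (Suc m), Suc (Suc m)) (ctape (Suc m), Suc (Suc m)) D E"
  by (rule clocked_cfg_step[OF k4])
     (use k4 state_bound_ge[where M=M and e=e and d=d] in
      \<open>simp_all add: clock_step_simps, auto simp: clock_tape_simps\<close>)

lemma read_answer_exit_step: "r \<le> d \<Longrightarrow> otm_step (clocked M e d) \<phi> (cfg M (18,r,0) In Q (fst (tape_of_string w), length w) C1 C2 D E)
  = cfg M (19,r,0) In Q (fst (tape_of_string w), length w) C1 C2 D E"
  by (rule clocked_cfg_step[OF k4])
     (use k4 state_bound_ge[where M=M and e=e and d=d] in
      \<open>simp_all add: clock_step_simps, auto simp: clock_tape_simps\<close>)

lemma pad_answer1_step: "r \<le> d \<Longrightarrow> otm_step (clocked M e d) \<phi> (cfg M (19,r,0) In Q X (ctape m, Suc m) (ctape m, Suc m) D E)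
  = cfg M (20,r,0) In Q X (ctape (Suc m), Suc (Suc m)) (ctape (Suc m), Suc (Suc m)) D E"
  by (rule clocked_cfg_step[OF k4])
     (use k4 state_bound_ge[where M=M and e=e and d=d] in
      \<open>simp_all add: clock_step_simps, auto simp: clock_tape_simps\<close>)

lemma pad_answer2_step: "r \<le> d \<Longrightarrow> otm_step (clocked M e d) \<phi> (cfg M (20,r,0) In Q X (ctape m, Suc m) (ctape m, Suc m) D E)
  = cfg M (21,r,0) In Q X (ctape (Suc m), Suc (Suc m)) (ctape (Suc m), Suc (Suc m)) D E"
  by (rule clocked_cfg_step[OF k4])
     (use k4 state_bound_ge[where M=M and e=e and d=d] in
      \<open>simp_all add: clock_step_simps, auto simp: clock_tape_simps\<close>)

lemma rewind_counter_step: "r \<le> d \<Longrightarrow> 0 < h \<Longrightarrow> otm_step (clocked M e d) \<phi> (cfg M (21,r,0) In Q X (ctape m, h) (ctape m, h) D E)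
  = cfg M (21,r,0) In Q X (ctape m, h - 1) (ctape m, h - 1) D E"
  by (rule clocked_cfg_step[OF k4])
     (use k4 state_bound_ge[where M=M and e=e and d=d] in
      \<open>simp_all add: clock_step_simps, auto simp: clock_tape_simps\<close>)

lemma rewind_counter_exit_step: "r < d \<Longrightarrow> otm_step (clocked M e d) \<phi> (cfg M (21,r,0) In Q X (ctape m, 0) (ctape m, 0) D E)
  = cfg M (square_start e (Suc r)) In Q X (ctape m, 1) (ctape m, 1) D E"
  by (rule clocked_cfg_step[OF k4])
     (use k4 state_bound_ge[where M=M and e=e and d=d] in
      \<open>simp_all add: clock_step_simps, auto simp: clock_tape_simps\<close>)

lemma after_query_final_step: "otm_step (clocked M e d) \<phi> (cfg M (6,0,0) In Q X C1 C2 D (etape (4 + d), 0))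
  = cfg M (sim_state M (otm_start M) 1) In Q X C1 C2 D (etape 3, 0)"
  apply (rule clocked_cfg_step[OF k4]) using k4 state_bound_ge[where M=M and e=e and d=d] in_box_sim_state[of 1 M e d "otm_start M"]
  apply (simp_all add: clocked_delta_def Let_def layout_simps etape_def)
  apply (auto simp: fun_eq_iff blank_tape_def apply_act_def move_head_def head_sym_def etape_def in_box_def)
  done

lemma square_counter_iter: "r \<le> d \<Longrightarrow> 1 \<le> u \<Longrightarrow> j \<le> e \<Longrightarrow>
  RC (cfg M (square_start e r) In bb X (ctape u, 1) (ctape u, 1) (ctape 0, 1) E)
     (cfg M (if j < e then (8,r,j) else (17,r,0)) In bb X (ctape (u ^ (2 ^ j)), 1) (ctape (u ^ (2 ^ j)), 1) (ctape 0, 1) E)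
     (j * (9 * (u ^ (2 ^ e) + 1) * (u ^ (2 ^ e) + 1)))"
proof (induction j)
  case 0 then show ?case using reaches_refl by (simp add: square_start_def)
next
  case (Suc j)
  let ?w = "u ^ (2 ^ j)"
  have j: "j < e" using Suc.prems by simp
  have w1: "1 \<le> ?w" using Suc.prems by simp
  have sq: "RC (cfg M (8,r,j) In bb X (ctape ?w, 1) (ctape ?w, 1) (ctape 0, 1) E)
      (cfg M (square_next e r j) In bb X (ctape (?w * ?w), 1) (ctape (?w * ?w), 1) (ctape 0, 1) E) (9 * (?w + 1) * (?w + 1))"
    by (rule square_counter[OF Suc.prems(1) j w1])
  have ww: "?w * ?w = u ^ (2 ^ Suc j)"
  proof -
    have "u ^ (2 ^ Suc j) = u ^ (2 ^ j * 2)" by (simp add: mult.commute)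
    also have "\<dots> = (u ^ (2 ^ j)) ^ 2" by (rule power_mult)
    finally show ?thesis by (simp add: power2_eq_square)
  qed
  have nx: "square_next e r j = (if Suc j < e then (8,r,Suc j) else (17,r,0))" by (simp add: square_next_def)
  have le: "?w \<le> u ^ (2 ^ e)" using power_two_power_mono[of u j e] Suc.prems by simp
  have b: "9 * (?w + 1) * (?w + 1) \<le> 9 * (u ^ (2 ^ e) + 1) * (u ^ (2 ^ e) + 1)"
    using le by (intro mult_mono) simp_all
  have "RC (cfg M (square_start e r) In bb X (ctape u, 1) (ctape u, 1) (ctape 0, 1) E)
     (cfg M (if Suc j < e then (8,r,Suc j) else (17,r,0)) In bb X (ctape (u ^ (2 ^ Suc j)), 1) (ctape (u ^ (2 ^ Suc j)), 1) (ctape 0, 1) E)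
     (j * (9 * (u ^ (2 ^ e) + 1) * (u ^ (2 ^ e) + 1)) + 9 * (?w + 1) * (?w + 1))"
  proof -
    have IH: "RC (cfg M (square_start e r) In bb X (ctape u, 1) (ctape u, 1) (ctape 0, 1) E)
     (cfg M (8,r,j) In bb X (ctape ?w, 1) (ctape ?w, 1) (ctape 0, 1) E)
     (j * (9 * (u ^ (2 ^ e) + 1) * (u ^ (2 ^ e) + 1)))"
      using Suc.IH[OF Suc.prems(1,2)] j by simp
    show ?thesis by (rule reaches_trans[OF IH sq[unfolded ww nx]])
  qed
  then show ?case by (rule reaches_mono) (use b in simp)
qed

lemma write_query_loop: "r \<le> d \<Longrightarrow> i \<le> K \<Longrightarrow>
  RC (cfg M (17,r,0) In bb X (ctape K, 1) (ctape K, 1) D E) (cfg M (17,r,0) In (utape i, i) X (ctape K, Suc i) (ctape K, Suc i) D E) i"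
proof (induction i)
  case 0 then show ?case using reaches_refl by (simp add: utape_0)
next
  case (Suc i)
  have a: "RC (cfg M (17,r,0) In (utape i, i) X (ctape K, Suc i) (ctape K, Suc i) D E)
     (cfg M (17,r,0) In (utape (Suc i), Suc i) X (ctape K, Suc (Suc i)) (ctape K, Suc (Suc i)) D E) 1"
    by (rule reaches_cfg_step[OF _ _ write_query_step]) (use Suc.prems in simp_all)
  from reaches_trans[OF Suc.IH a] Suc.prems show ?case by simp
qed

lemma round_to_query: "r \<le> d \<Longrightarrow> 1 \<le> u \<Longrightarrow>
  RC (cfg M (square_start e r) In bb X (ctape u, 1) (ctape u, 1) (ctape 0, 1) (etape x, 0))
     (cfg M (5,0,0) In (utape (u ^ 2 ^ e), u ^ 2 ^ e) X (ctape (u ^ 2 ^ e), Suc (u ^ 2 ^ e)) (ctape (u ^ 2 ^ e), Suc (u ^ 2 ^ e)) (ctape 0, 1) (etape (4 + r), 0))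
     (e * (9 * (u ^ (2 ^ e) + 1) * (u ^ (2 ^ e) + 1)) + u ^ 2 ^ e + 1)"
proof -
  assume r: "r \<le> d" and u: "1 \<le> u"
  let ?K = "u ^ 2 ^ e"
  have a: "RC (cfg M (square_start e r) In bb X (ctape u, 1) (ctape u, 1) (ctape 0, 1) (etape x, 0))
     (cfg M (17,r,0) In bb X (ctape ?K, 1) (ctape ?K, 1) (ctape 0, 1) (etape x, 0)) (e * (9 * (?K + 1) * (?K + 1)))"
    using square_counter_iter[OF r u order_refl] by simp
  have b: "RC (cfg M (17,r,0) In bb X (ctape ?K, 1) (ctape ?K, 1) (ctape 0, 1) (etape x, 0))
     (cfg M (17,r,0) In (utape ?K, ?K) X (ctape ?K, Suc ?K) (ctape ?K, Suc ?K) (ctape 0, 1) (etape x, 0)) ?K"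
    by (rule write_query_loop[OF r order_refl])
  have c: "RC (cfg M (17,r,0) In (utape ?K, ?K) X (ctape ?K, Suc ?K) (ctape ?K, Suc ?K) (ctape 0, 1) (etape x, 0))
     (cfg M (5,0,0) In (utape ?K, ?K) X (ctape ?K, Suc ?K) (ctape ?K, Suc ?K) (ctape 0, 1) (etape (4 + r), 0)) 1"
    by (rule reaches_cfg_step[OF _ _ write_query_exit_step[OF r]]) simp_all
  show ?thesis by (rule reaches_trans[OF reaches_trans[OF a b] c])
qed

lemma read_answer_loop: "r \<le> d \<Longrightarrow> i \<le> length w \<Longrightarrow>
  RC (cfg M (18,r,0) In Q (fst (tape_of_string w), 0) (ctape m, Suc m) (ctape m, Suc m) D E)
     (cfg M (18,r,0) In Q (fst (tape_of_string w), i) (ctape (m + i), Suc (m + i)) (ctape (m + i), Suc (m + i)) D E) i"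
proof (induction i)
  case 0 then show ?case using reaches_refl by simp
next
  case (Suc i)
  have a: "RC (cfg M (18,r,0) In Q (fst (tape_of_string w), i) (ctape (m + i), Suc (m + i)) (ctape (m + i), Suc (m + i)) D E)
     (cfg M (18,r,0) In Q (fst (tape_of_string w), Suc i) (ctape (Suc (m + i)), Suc (Suc (m + i))) (ctape (Suc (m + i)), Suc (Suc (m + i))) D E) 1"
    by (rule reaches_cfg_step[OF _ _ read_answer_step]) (use Suc.prems in simp_all)
  from reaches_trans[OF Suc.IH a] Suc.prems show ?case by simp
qed

lemma rewind_counter_loop: "r \<le> d \<Longrightarrow> i \<le> h \<Longrightarrow>
  RC (cfg M (21,r,0) In Q X (ctape m, h) (ctape m, h) D E) (cfg M (21,r,0) In Q X (ctape m, h - i) (ctape m, h - i) D E) i"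
proof (induction i)
  case 0 then show ?case using reaches_refl by simp
next
  case (Suc i)
  have a: "RC (cfg M (21,r,0) In Q X (ctape m, h - i) (ctape m, h - i) D E) (cfg M (21,r,0) In Q X (ctape m, h - Suc i) (ctape m, h - Suc i) D E) 1"
  proof (rule reaches_cfg_step)
    show "otm_step (clocked M e d) \<phi> (cfg M (21,r,0) In Q X (ctape m, h - i) (ctape m, h - i) D E) = cfg M (21,r,0) In Q X (ctape m, h - Suc i) (ctape m, h - Suc i) D E"
      using rewind_counter_step[where h = "h - i"] Suc.prems by simp
  qed simp_all
  from reaches_trans[OF Suc.IH a] Suc.prems show ?case by simp
qed

lemma after_query_round: "r < d \<Longrightarrow>
  RC (cfg M (6,0,0) In bb (tape_of_string w) (ctape K, Suc K) (ctape K, Suc K) (ctape 0, 1) (etape (4 + r), 0))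
     (cfg M (square_start e (Suc r)) In bb (fst (tape_of_string w), length w) (ctape (K + length w + 2), 1) (ctape (K + length w + 2), 1) (ctape 0, 1) (etape (4 + r), 0))
     (K + 2 * length w + 8)"
proof -
  assume r: "r < d"
  have r': "r \<le> d" using r by simp
  let ?n = "length w"
  let ?E = "(etape (4 + r), 0)"
  have tw: "tape_of_string w = (fst (tape_of_string w), 0)" by (simp add: tape_of_string_def)
  have a: "RC (cfg M (6,0,0) In bb (tape_of_string w) (ctape K, Suc K) (ctape K, Suc K) (ctape 0, 1) ?E)
     (cfg M (18,r,0) In bb (fst (tape_of_string w), 0) (ctape K, Suc K) (ctape K, Suc K) (ctape 0, 1) ?E) 1"
    by (subst tw, rule reaches_cfg_step[OF _ _ after_query_round_step[OF r]]) simp_all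
  have b: "RC (cfg M (18,r,0) In bb (fst (tape_of_string w), 0) (ctape K, Suc K) (ctape K, Suc K) (ctape 0, 1) ?E)
     (cfg M (18,r,0) In bb (fst (tape_of_string w), ?n) (ctape (K + ?n), Suc (K + ?n)) (ctape (K + ?n), Suc (K + ?n)) (ctape 0, 1) ?E) ?n"
    by (rule read_answer_loop[OF r' order_refl])
  have c: "RC (cfg M (18,r,0) In bb (fst (tape_of_string w), ?n) (ctape (K + ?n), Suc (K + ?n)) (ctape (K + ?n), Suc (K + ?n)) (ctape 0, 1) ?E)
     (cfg M (19,r,0) In bb (fst (tape_of_string w), ?n) (ctape (K + ?n), Suc (K + ?n)) (ctape (K + ?n), Suc (K + ?n)) (ctape 0, 1) ?E) 1"
    by (rule reaches_cfg_step[OF _ _ read_answer_exit_step[OF r']]) simp_all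
  have f: "RC (cfg M (19,r,0) In bb (fst (tape_of_string w), ?n) (ctape (K + ?n), Suc (K + ?n)) (ctape (K + ?n), Suc (K + ?n)) (ctape 0, 1) ?E)
     (cfg M (20,r,0) In bb (fst (tape_of_string w), ?n) (ctape (Suc (K + ?n)), Suc (Suc (K + ?n))) (ctape (Suc (K + ?n)), Suc (Suc (K + ?n))) (ctape 0, 1) ?E) 1"
    by (rule reaches_cfg_step[OF _ _ pad_answer1_step[OF r']]) simp_all
  have g: "RC (cfg M (20,r,0) In bb (fst (tape_of_string w), ?n) (ctape (Suc (K + ?n)), Suc (Suc (K + ?n))) (ctape (Suc (K + ?n)), Suc (Suc (K + ?n))) (ctape 0, 1) ?E)
     (cfg M (21,r,0) In bb (fst (tape_of_string w), ?n) (ctape (Suc (Suc (K + ?n))), Suc (Suc (Suc (K + ?n)))) (ctape (Suc (Suc (K + ?n))), Suc (Suc (Suc (K + ?n)))) (ctape 0, 1) ?E) 1"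
    by (rule reaches_cfg_step[OF _ _ pad_answer2_step[OF r']]) simp_all
  have h0: "RC (cfg M (21,r,0) In bb (fst (tape_of_string w), ?n) (ctape (Suc (Suc (K + ?n))), Suc (Suc (Suc (K + ?n)))) (ctape (Suc (Suc (K + ?n))), Suc (Suc (Suc (K + ?n)))) (ctape 0, 1) ?E)
     (cfg M (21,r,0) In bb (fst (tape_of_string w), ?n) (ctape (Suc (Suc (K + ?n))), Suc (Suc (Suc (K + ?n))) - Suc (Suc (Suc (K + ?n)))) (ctape (Suc (Suc (K + ?n))), Suc (Suc (Suc (K + ?n))) - Suc (Suc (Suc (K + ?n)))) (ctape 0, 1) ?E) (Suc (Suc (Suc (K + ?n))))"
    by (rule rewind_counter_loop[OF r' order_refl])
  have h: "RC (cfg M (21,r,0) In bb (fst (tape_of_string w), ?n) (ctape (Suc (Suc (K + ?n))), Suc (Suc (Suc (K + ?n)))) (ctape (Suc (Suc (K + ?n))), Suc (Suc (Suc (K + ?n)))) (ctape 0, 1) ?E)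
     (cfg M (21,r,0) In bb (fst (tape_of_string w), ?n) (ctape (Suc (Suc (K + ?n))), 0) (ctape (Suc (Suc (K + ?n))), 0) (ctape 0, 1) ?E) (Suc (Suc (Suc (K + ?n))))"
    using h0 by simp
  have i: "RC (cfg M (21,r,0) In bb (fst (tape_of_string w), ?n) (ctape (Suc (Suc (K + ?n))), 0) (ctape (Suc (Suc (K + ?n))), 0) (ctape 0, 1) ?E)
     (cfg M (square_start e (Suc r)) In bb (fst (tape_of_string w), ?n) (ctape (Suc (Suc (K + ?n))), 1) (ctape (Suc (Suc (K + ?n))), 1) (ctape 0, 1) ?E) 1"
    by (rule reaches_cfg_step[OF _ _ rewind_counter_exit_step[OF r]]) simp_all
  have tot: "RC (cfg M (6,0,0) In bb (tape_of_string w) (ctape K, Suc K) (ctape K, Suc K) (ctape 0, 1) ?E)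
     (cfg M (square_start e (Suc r)) In bb (fst (tape_of_string w), ?n) (ctape (Suc (Suc (K + ?n))), 1) (ctape (Suc (Suc (K + ?n))), 1) (ctape 0, 1) ?E)
     (1 + ?n + 1 + 1 + 1 + Suc (Suc (Suc (K + ?n))) + 1)"
    by (rule reaches_trans[OF reaches_trans[OF reaches_trans[OF reaches_trans[OF reaches_trans[OF reaches_trans[OF a b] c] f] g] h] i])
  have e1: "Suc (Suc (K + ?n)) = K + ?n + 2" by simp
  show ?thesis by (rule reaches_mono[OF tot[unfolded e1]]) simp
qed

end


definition sim_tape :: "nat \<Rightarrow> tape list \<Rightarrow> (nat \<Rightarrow> nat) \<Rightarrow> nat \<Rightarrow> (nat \<Rightarrow> tape) \<Rightarrow> nat \<Rightarrow> tape" where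
  "sim_tape k ts X3 f ext i = (if i < k then (if i = 3 \<and> f \<noteq> 0 then (X3, snd (ts ! 3)) else ts ! i) else ext i)"

definition sim_cfg :: "otm \<Rightarrow> nat \<times> nat \<times> nat \<Rightarrow> tape list \<Rightarrow> (nat \<Rightarrow> nat) \<Rightarrow> nat \<Rightarrow> (nat \<Rightarrow> tape) \<Rightarrow> config" where
  "sim_cfg M s ts X3 f ext = (encode_state s, map (sim_tape (otm_ntapes M) ts X3 f ext) [0..<otm_ntapes M + 4])"

lemma sim_transition_step:
  assumes wf: "wf_otm M" and I: "run_inv M \<phi> j (q, ts)" and nh: "q \<noteq> otm_halt M" and nq: "q \<noteq> otm_query M"
    and f: "f \<le> 1" and f3: "f \<noteq> 0 \<longrightarrow> fst (ts ! 3) = (\<lambda>_. 0)"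
    and st: "otm_step M \<phi> (q, ts) = (q2, ts2)"
  shows "otm_step (clocked M e d) \<phi> (sim_cfg M (22, q, f) ts X3 f ext) = sim_cfg M (sim_state M q2 f) ts2 X3 f ext"
proof -
  let ?k = "otm_ntapes M"
  let ?T = "sim_tape ?k ts X3 f ext"
  have k4: "4 \<le> ?k" using wf_otm_basic[OF wf] by simp
  have q: "q < otm_nstates M" and len: "length ts = ?k" and syms: "\<forall>t\<in>set ts. \<forall>i. fst t i < otm_nsyms M"
    using I by (auto simp: run_inv_def)
  let ?ssM = "map (\<lambda>(c, h). c h) ts"
  obtain q2' aM where dM: "otm_delta M q ?ssM = (q2', aM)" by fastforce
  have ssl: "length ?ssM = ?k" using len by simp
  have sss: "\<forall>s\<in>set ?ssM. s < otm_nsyms M" using syms by auto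
  note W = wf_otm_delta[OF wf q ssl sss dM]
  have st2: "otm_step M \<phi> (q, ts) = (q2', map (\<lambda>i. apply_act i (ts ! i) (aM ! i)) [0..<length ts])"
    using otm_step_transition[OF nh nq dM] W len by simp
  then have q2: "q2 = q2'" and ts2: "ts2 = map (\<lambda>i. apply_act i (ts ! i) (aM ! i)) [0..<?k]"
    using st len by auto
  let ?ss = "map (\<lambda>i. head_sym (?T i)) [0..<?k + 4]"
  have tk: "take ?k ?ss = map (\<lambda>i. head_sym (?T i)) [0..<?k]"
    by (simp add: take_map)
  have rd3: "head_sym (ts ! 3) = 0" if "f \<noteq> 0" using f3 that by (simp add: head_sym_def)
  have mask: "(if f \<noteq> 0 then (take ?k ?ss)[3 := 0] else take ?k ?ss) = ?ssM"
    unfolding tk using len k4 rd3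
    by (auto intro!: nth_equalityI simp: sim_tape_def head_sym_def nth_list_update case_prod_unfold)
  have san: "sanitize_act M (aM ! i) = aM ! i" if "i < ?k" for i
    using W(3)[of i] W(2) that by (cases "aM ! i") (auto simp: sanitize_act_def)
  define g where "g = (\<lambda>i. if i < ?k then sanitize_act M (aM ! i) else (?ss ! i, 1::nat))"
  have delta_eq: "clocked_delta M e d (22, q, f) ?ss = (sim_state M q2 f, g)"
    unfolding g_def q2 using mask dM by (simp add: clocked_delta_def sim_delta_def Let_def)
  have b: "in_box (state_bound M e d) (22, q, f)" using q f state_bound_ge[where M=M and e=e and d=d] by (auto simp: in_box_def)
  have "otm_step (clocked M e d) \<phi> (sim_cfg M (22, q, f) ts X3 f ext) =
    (encode_state (sim_state M q2 f), map (\<lambda>i. apply_act i (?T i) (g i)) [0..<?k + 4])"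
    unfolding sim_cfg_def by (rule clocked_step[OF b _ _ delta_eq in_box_sim_state[OF f]]) simp_all
  also have "map (\<lambda>i. apply_act i (?T i) (g i)) [0..<?k + 4] = map (sim_tape ?k ts2 X3 f ext) [0..<?k + 4]"
  proof (rule map_cong[OF refl])
    fix i assume "i \<in> set [0..<?k + 4]"
    then have i: "i < ?k + 4" by simp
    show "apply_act i (?T i) (g i) = sim_tape ?k ts2 X3 f ext i"
    proof (cases "i < ?k")
      case True
      obtain w m where a: "aM ! i = (w, m)" by fastforce
      have t2: "ts2 ! i = apply_act i (ts ! i) (aM ! i)" using ts2 True by simp
      show ?thesis
      proof (cases "i = 3 \<and> f \<noteq> 0")
        case True
        then show ?thesis using `i < ?k` t2 a san[OF `i < ?k`]
          by (cases "ts ! 3") (auto simp: sim_tape_def g_def apply_act_def)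
      next
        case False
        then show ?thesis using `i < ?k` t2 a san[OF `i < ?k`] by (auto simp: sim_tape_def g_def)
      qed
    next
      case False
      have "?ss ! i = head_sym (?T i)" using i by simp
      then show ?thesis using False apply_act_stay[of i "?T i"] by (simp add: g_def sim_tape_def)
    qed
  qed
  finally show ?thesis by (simp add: sim_cfg_def)
qed

lemma sim_query_step:
  assumes wf: "wf_otm M" and len: "length ts = otm_ntapes M" and nh: "q \<noteq> otm_halt M" and qq: "q = otm_query M"
    and st: "otm_step M \<phi> (q, ts) = (q2, ts2)"
  shows "otm_step (clocked M e d) \<phi> (sim_cfg M (5,0,0) ts X3 f ext) = (encode_state (6,0,0), map (sim_tape (otm_ntapes M) ts2 X3 0 ext) [0..<otm_ntapes M + 4])"
proof -
  let ?k = "otm_ntapes M"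
  have k4: "4 \<le> ?k" using wf_otm_basic[OF wf] by simp
  have q: "otm_step (clocked M e d) \<phi> (encode_state (5,0,0), tl) = (encode_state (6,0,0), tl[2 := blank_tape, 3 := tape_of_string (\<phi> (string_of_cells (fst (tl ! 2))))])" for tl
  proof -
    have "otm_step (clocked M e d) \<phi> (encode_state (5,0,0), tl) = (otm_after_query (clocked M e d), tl[2 := blank_tape, 3 := tape_of_string (\<phi> (string_of_cells (fst (tl ! 2))))])"
      by (rule otm_step_query) (simp_all add: clocked_simps)
    then show ?thesis by (simp only: clocked_simps)
  qed
  have ts2: "ts2 = ts[2 := blank_tape, 3 := tape_of_string (\<phi> (string_of_cells (fst (ts ! 2))))]"
    using st otm_step_query[OF nh qq, of \<phi> ts] by simp
  have n2g: "map (sim_tape ?k ts X3 f ext) [0..<?k + 4] ! i = ts ! i" if "i < ?k" "i \<noteq> 3" for i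
    using that by (simp add: sim_tape_def del: upt_Suc)
  have n2: "map (sim_tape ?k ts X3 f ext) [0..<?k + 4] ! 2 = ts ! 2" by (rule n2g) (use k4 in auto)
  have "(map (sim_tape ?k ts X3 f ext) [0..<?k + 4])[2 := blank_tape, 3 := tape_of_string (\<phi> (string_of_cells (fst (ts ! 2))))]
    = map (sim_tape ?k ts2 X3 0 ext) [0..<?k + 4]"
    using k4 len unfolding ts2 by (auto intro!: nth_equalityI simp: nth_list_update sim_tape_def)
  then show ?thesis unfolding sim_cfg_def q n2 by simp
qed

lemma sim_after_query_step:
  assumes wf: "wf_otm M" and ext: "ext (otm_ntapes M + 3) = (etape 3, 0)"
  shows "otm_step (clocked M e d) \<phi> (encode_state (6,0,0), map (sim_tape (otm_ntapes M) ts2 X3 0 ext) [0..<otm_ntapes M + 4])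
    = sim_cfg M (sim_state M (otm_after_query M) 0) ts2 X3 0 ext"
proof -
  let ?k = "otm_ntapes M"
  let ?T = "sim_tape ?k ts2 X3 0 ext"
  let ?ss = "map (\<lambda>i. head_sym (?T i)) [0..<?k + 4]"
  have k4: "4 \<le> ?k" using wf_otm_basic[OF wf] by simp
  have e3: "?ss ! (?k + 3) = 3" using ext by (simp add: sim_tape_def head_sym_def etape_def del: upt_Suc)
  have delta_eq: "clocked_delta M e d (6,0,0) ?ss = (sim_state M (otm_after_query M) 0, \<lambda>i. (?ss ! i, 1))"
    using e3 by (simp add: clocked_delta_def Let_def)
  have b: "in_box (state_bound M e d) (6,0,0)" by (rule in_box_small) simp
  have "otm_step (clocked M e d) \<phi> (encode_state (6,0,0), map ?T [0..<?k + 4]) =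
    (encode_state (sim_state M (otm_after_query M) 0), map (\<lambda>i. apply_act i (?T i) (?ss ! i, 1)) [0..<?k + 4])"
    by (rule clocked_step[OF b _ _ delta_eq in_box_sim_state]) simp_all
  also have "map (\<lambda>i. apply_act i (?T i) (?ss ! i, 1)) [0..<?k + 4] = map ?T [0..<?k + 4]"
    by (rule map_cong[OF refl]) (auto simp: apply_act_stay' simp del: upt_Suc)
  finally show ?thesis by (simp add: sim_cfg_def)
qed

definition sim_extra :: "nat \<Rightarrow> nat \<Rightarrow> nat \<Rightarrow> tape" where
  "sim_extra k K i = (if i = k then (ctape K, Suc K) else if i = Suc k then (ctape K, Suc K) else if i = k + 2 then (ctape 0, 1) else (etape 3, 0))"

lemma start_simulation:
  assumes wf: "wf_otm M"
  shows "otm_step (clocked M e d) \<phi> (cfg M (6,0,0) (input_cells a, 0) bb (tape_of_string w) (ctape K, Suc K) (ctape K, Suc K) (ctape 0, 1) (etape (4 + d), 0))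
    = sim_cfg M (sim_state M (otm_start M) 1) (snd (otm_init M a)) (fst (tape_of_string w)) 1 (sim_extra (otm_ntapes M) K)"
proof -
  let ?k = "otm_ntapes M"
  have k4: "4 \<le> ?k" using wf_otm_basic[OF wf] by simp
  have "otm_step (clocked M e d) \<phi> (cfg M (6,0,0) (input_cells a, 0) bb (tape_of_string w) (ctape K, Suc K) (ctape K, Suc K) (ctape 0, 1) (etape (4 + d), 0))
    = cfg M (sim_state M (otm_start M) 1) (input_cells a, 0) bb (tape_of_string w) (ctape K, Suc K) (ctape K, Suc K) (ctape 0, 1) (etape 3, 0)"
    by (rule after_query_final_step[OF k4])
  also have "\<dots> = sim_cfg M (sim_state M (otm_start M) 1) (snd (otm_init M a)) (fst (tape_of_string w)) 1 (sim_extra ?k K)"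
    unfolding cfg_def sim_cfg_def prod.inject
  proof (intro conjI refl map_cong[OF refl])
    fix i assume "i \<in> set [0..<?k + 4]"
    then have i: "i < ?k + 4" by simp
    show "layout ?k (input_cells a, 0) bb (tape_of_string w) (ctape K, Suc K) (ctape K, Suc K) (ctape 0, 1) (etape 3, 0) i =
      sim_tape ?k (snd (otm_init M a)) (fst (tape_of_string w)) 1 (sim_extra ?k K) i"
      using k4 i by (auto simp: layout_def sim_tape_def sim_extra_def otm_init_def nth_Cons' tape_of_string_input tape_of_string_def blank_tape_def)
  qed
  finally show ?thesis .
qed

lemma answer_tape_nonquery:
  assumes wf: "wf_otm M" and nq: "fst (otm_run M \<phi> a n) \<noteq> otm_query M"
  shows "fst (snd (otm_run M \<phi> a (Suc n)) ! 3) = fst (snd (otm_run M \<phi> a n) ! 3)"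
proof -
  obtain q ts where c: "otm_run M \<phi> a n = (q, ts)" by fastforce
  have I: "run_inv M \<phi> n (q, ts)" using run_inv_run[OF wf, of \<phi> n a] c by simp
  have q: "q < otm_nstates M" and len: "length ts = otm_ntapes M" and syms: "\<forall>t\<in>set ts. \<forall>i. fst t i < otm_nsyms M"
    using I by (auto simp: run_inv_def)
  have k4: "4 \<le> otm_ntapes M" using wf_otm_basic[OF wf] by simp
  show ?thesis
  proof (cases "q = otm_halt M")
    case True then show ?thesis using c by (simp add: otm_run_Suc otm_step_halted)
  next
    case nh: False
    have nq': "q \<noteq> otm_query M" using nq c by simp
    obtain q' acts where dd: "otm_delta M q (map (\<lambda>(c, h). c h) ts) = (q', acts)" by fastforce
    have ssl: "length (map (\<lambda>(c, h). c h) ts) = otm_ntapes M" using len by simp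
    have sss: "\<forall>s\<in>set (map (\<lambda>(c, h). c h) ts). s < otm_nsyms M" using syms by auto
    note W = wf_otm_delta[OF wf q ssl sss dd]
    have "otm_run M \<phi> a (Suc n) = (q', map (\<lambda>i. apply_act i (ts ! i) (acts ! i)) [0..<length ts])"
      using otm_step_transition[OF nh nq' dd] W len c by (simp add: otm_run_Suc)
    moreover have "3 < length ts" using len k4 by simp
    ultimately show ?thesis using c by (cases "ts ! 3"; cases "acts ! 3") (simp add: apply_act_def)
  qed
qed

lemma answer_len_0: "4 \<le> otm_ntapes M \<Longrightarrow> answer_len M \<phi> a 0 = 0"
  by (simp add: answer_len_def otm_run_0 otm_init_def nth_Cons' blank_tape_def string_of_cells_blank)

lemma answer_len_le_length_revision: "4 \<le> otm_ntapes M \<Longrightarrow> answer_len M \<phi> a n \<le> length_revision M \<phi> a n"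
  by (cases n) (simp_all add: answer_len_0)

lemma length_revision_nonquery:
  assumes wf: "wf_otm M" and nq: "fst (otm_run M \<phi> a n) \<noteq> otm_query M"
  shows "length_revision M \<phi> a (Suc n) = length_revision M \<phi> a n"
proof -
  have "answer_len M \<phi> a (Suc n) = answer_len M \<phi> a n"
    using answer_tape_nonquery[OF wf nq] by (simp add: answer_len_def)
  then show ?thesis using answer_len_le_length_revision[of M \<phi> a n] wf_otm_basic[OF wf] by simp
qed

lemma length_revision_const:
  assumes wf: "wf_otm M" and nq: "\<forall>i<m. fst (otm_run M \<phi> a (n0 + i)) \<noteq> otm_query M"
  shows "i \<le> m \<Longrightarrow> length_revision M \<phi> a (n0 + i) = length_revision M \<phi> a n0"
proof (induction i)
  case (Suc i)
  then have "length_revision M \<phi> a (Suc (n0 + i)) = length_revision M \<phi> a (n0 + i)"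
    using length_revision_nonquery[OF wf, of \<phi> a "n0 + i"] nq by simp
  then show ?case using Suc by simp
qed simp

lemma reaches_run_length_revision:
  assumes wf: "wf_otm M" and r: "otm_run M \<phi> a n0 = c" and rc: "reaches M \<phi> c c' B"
  shows "\<exists>m\<le>B. otm_run M \<phi> a (n0 + m) = c' \<and> (\<forall>i\<le>m. length_revision M \<phi> a (n0 + i) = length_revision M \<phi> a n0)
     \<and> (\<forall>i<m. fst (otm_run M \<phi> a (n0 + i)) \<noteq> otm_halt M)"
proof -
  obtain m where m: "m \<le> B" "otm_run M \<phi> a (n0 + m) = c'"
    "\<forall>i<m. fst (otm_run M \<phi> a (n0 + i)) \<noteq> otm_query M \<and> fst (otm_run M \<phi> a (n0 + i)) \<noteq> otm_halt M"
    using reaches_run[of M \<phi> a n0 c' B] rc r by auto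
  show ?thesis using m length_revision_const[OF wf, of m \<phi> a n0] by (intro exI[of _ m]) auto
qed

lemma sim_tape_3: "4 \<le> k \<Longrightarrow> sim_tape k ts X3 f ext 3 = (if f \<noteq> 0 then (X3, snd (ts ! 3)) else ts ! 3)"
  by (simp add: sim_tape_def)

lemma answer_len_of_layout: "4 \<le> k \<Longrightarrow> snd (otm_run Mp \<phi> a n) = map T [0..<k + 4] \<Longrightarrow>
   answer_len Mp \<phi> a n = length (string_of_cells (fst (T 3)))"
  by (simp add: answer_len_def del: upt_Suc)

lemma answer_len_le_size_fn_mono: "wf_otm M \<Longrightarrow> j \<le> T \<Longrightarrow> length (string_of_cells (fst (snd (otm_run M \<phi> a j) ! 3))) \<le> size_fn \<phi> T"
  using answer_len_le_size_fn[of M \<phi> a j] size_fn_mono[of j T \<phi>] by (simp add: answer_len_def)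

lemma simulation:
  fixes M :: otm and e d :: nat
  defines "Mp \<equiv> clocked M e d" and "k \<equiv> otm_ntapes M"
  assumes wf: "wf_otm M"
    and start: "otm_run Mp \<phi> a \<tau> = sim_cfg M (sim_state M (fst (otm_run M \<phi> a 0)) 1) (snd (otm_run M \<phi> a 0)) Xf 1 ext"
    and ext: "ext (k + 3) = (etape 3, 0)"
    and nh: "\<forall>j<T. \<not> otm_halted M \<phi> a j"
    and XfL: "length (string_of_cells Xf) \<le> \<Lambda>"
    and LT: "size_fn \<phi> T \<le> \<Lambda>"
  shows "j \<le> T \<Longrightarrow> \<exists>m\<le>2 * j. \<exists>f X3. otm_run Mp \<phi> a (\<tau> + m) = sim_cfg M (sim_state M (fst (otm_run M \<phi> a j)) f) (snd (otm_run M \<phi> a j)) X3 f ext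
     \<and> f \<le> 1 \<and> (f \<noteq> 0 \<longrightarrow> fst (snd (otm_run M \<phi> a j) ! 3) = (\<lambda>_. 0) \<and> X3 = Xf)
     \<and> (0 < j \<longrightarrow> fst (otm_run Mp \<phi> a (\<tau> + m - 1)) \<noteq> encode_state (7,0,0))
     \<and> (\<forall>n. \<tau> \<le> n \<and> n \<le> \<tau> + m \<longrightarrow> answer_len Mp \<phi> a n \<le> \<Lambda>)"
proof (induction j)
  have k4: "4 \<le> k" using wf_otm_basic[OF wf] by (simp add: k_def)
  case 0
  have b3: "fst (snd (otm_run M \<phi> a 0) ! 3) = (\<lambda>_. 0)"
    using k4 by (simp add: otm_run_0 otm_init_def nth_Cons' blank_tape_def k_def)
  have "answer_len Mp \<phi> a \<tau> = length (string_of_cells Xf)"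
    using answer_len_of_layout[OF k4 start[unfolded sim_cfg_def, THEN arg_cong[where f=snd], simplified, folded k_def]] k4
    by (simp add: sim_tape_3)
  then have A0: "\<forall>n. \<tau> \<le> n \<and> n \<le> \<tau> + 0 \<longrightarrow> answer_len Mp \<phi> a n \<le> \<Lambda>" using XfL by auto
  show ?case
    apply (rule exI[of _ 0])
    apply (rule conjI)
     apply simp
    apply (rule exI[of _ 1], rule exI[of _ Xf])
    using start b3 A0 by simp
next
  have k4: "4 \<le> k" using wf_otm_basic[OF wf] by (simp add: k_def)
  case (Suc j)
  then obtain m f X3 where m: "m \<le> 2 * j" and R: "otm_run Mp \<phi> a (\<tau> + m) = sim_cfg M (sim_state M (fst (otm_run M \<phi> a j)) f) (snd (otm_run M \<phi> a j)) X3 f ext"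
    and f1: "f \<le> 1" and fX: "f \<noteq> 0 \<longrightarrow> fst (snd (otm_run M \<phi> a j) ! 3) = (\<lambda>_. 0) \<and> X3 = Xf"
    and A: "\<forall>n. \<tau> \<le> n \<and> n \<le> \<tau> + m \<longrightarrow> answer_len Mp \<phi> a n \<le> \<Lambda>"
    by auto
  obtain q ts where c: "otm_run M \<phi> a j = (q, ts)" by fastforce
  obtain q2 ts2 where c2: "otm_run M \<phi> a (Suc j) = (q2, ts2)" by fastforce
  have stM: "otm_step M \<phi> (q, ts) = (q2, ts2)" using c c2 by (simp add: otm_run_Suc)
  have I: "run_inv M \<phi> j (q, ts)" using run_inv_run[OF wf, of \<phi> j a] c by simp
  have qn: "q < otm_nstates M" and len: "length ts = k" using I by (auto simp: run_inv_def k_def)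
  have "\<not> otm_halted M \<phi> a j" using nh Suc.prems by simp
  then have nhq: "q \<noteq> otm_halt M" using c by (simp add: otm_halted_def)
  have ansM2: "length (string_of_cells (fst (ts2 ! 3))) \<le> \<Lambda>"
    using answer_len_le_size_fn_mono[OF wf Suc.prems, of \<phi> a] c2 LT by simp
  show ?case
  proof (cases "q = otm_query M")
    case False
    have s22: "sim_state M q f = (22, q, f)" using False nhq qn by (simp add: sim_state_def)
    have f3: "f \<noteq> 0 \<longrightarrow> fst (ts ! 3) = (\<lambda>_. 0)" using fX c by simp
    have R1: "otm_run Mp \<phi> a (\<tau> + Suc m) = sim_cfg M (sim_state M q2 f) ts2 X3 f ext"
      using sim_transition_step[OF wf I nhq False f1 f3 stM, of e d X3 ext] R c
      by (simp add: otm_run_Suc Mp_def s22)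
    have nq: "fst (otm_run M \<phi> a j) \<noteq> otm_query M" using False c by simp
    have f3': "f \<noteq> 0 \<longrightarrow> fst (ts2 ! 3) = (\<lambda>_. 0)" using answer_tape_nonquery[OF wf nq] c c2 f3 by simp
    have a1: "answer_len Mp \<phi> a (\<tau> + Suc m) \<le> \<Lambda>"
      using answer_len_of_layout[OF k4 R1[unfolded sim_cfg_def, THEN arg_cong[where f=snd], simplified, folded k_def]] k4 fX ansM2 XfL
      by (auto simp: sim_tape_3)
    have nh1: "fst (otm_run Mp \<phi> a (\<tau> + Suc m - 1)) \<noteq> encode_state (7,0,0)"
      using R c s22 by (simp add: sim_cfg_def)
    show ?thesis
      apply (rule exI[of _ "Suc m"])
      using m R1 f1 fX f3' c c2 nh1 A a1 by (auto simp: le_Suc_eq)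
  next
    case True
    have s5: "sim_state M q f = (5, 0, 0)" using True nhq by (simp add: sim_state_def)
    have q2: "q2 = otm_after_query M" using stM otm_step_query[OF nhq True, of \<phi> ts] by simp
    have R1: "otm_run Mp \<phi> a (\<tau> + Suc m) = (encode_state (6,0,0), map (sim_tape k ts2 X3 0 ext) [0..<k + 4])"
      using sim_query_step[OF wf len[unfolded k_def] nhq True stM, of e d X3 f ext] R c
      by (simp add: otm_run_Suc Mp_def s5 k_def)
    have R2: "otm_run Mp \<phi> a (\<tau> + Suc (Suc m)) = sim_cfg M (sim_state M q2 0) ts2 X3 0 ext"
    proof -
      have Q2: "otm_step (clocked M e d) \<phi> (encode_state (6,0,0), map (sim_tape k ts2 X3 0 ext) [0..<k + 4]) = sim_cfg M (sim_state M (otm_after_query M) 0) ts2 X3 0 ext"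
        unfolding k_def by (rule sim_after_query_step[OF wf]) (rule ext[unfolded k_def])
      show ?thesis using Q2 R1 q2 by (simp add: otm_run_Suc Mp_def)
    qed
    have a1: "answer_len Mp \<phi> a (\<tau> + Suc m) \<le> \<Lambda>"
      using answer_len_of_layout[OF k4 R1[THEN arg_cong[where f=snd], simplified]] k4 ansM2 by (simp add: sim_tape_3)
    have a2: "answer_len Mp \<phi> a (\<tau> + Suc (Suc m)) \<le> \<Lambda>"
      using answer_len_of_layout[OF k4 R2[unfolded sim_cfg_def, THEN arg_cong[where f=snd], simplified, folded k_def]] k4 ansM2
      by (simp add: sim_tape_3)
    have nh1: "fst (otm_run Mp \<phi> a (\<tau> + Suc (Suc m) - 1)) \<noteq> encode_state (7,0,0)"
      using R1 by simp
    have A2: "\<forall>n. \<tau> \<le> n \<and> n \<le> \<tau> + Suc (Suc m) \<longrightarrow> answer_len Mp \<phi> a n \<le> \<Lambda>"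
    proof (intro allI impI)
      fix n assume n: "\<tau> \<le> n \<and> n \<le> \<tau> + Suc (Suc m)"
      then consider "n \<le> \<tau> + m" | "n = \<tau> + Suc m" | "n = \<tau> + Suc (Suc m)" by linarith
      then show "answer_len Mp \<phi> a n \<le> \<Lambda>" using A a1 a2 n by cases auto
    qed
    show ?thesis
      apply (rule exI[of _ "Suc (Suc m)"])
      using m R2 c2 nh1 A2 by auto
  qed
qed


fun budget_base :: "nat \<Rightarrow> (nat \<Rightarrow> nat) \<Rightarrow> nat \<Rightarrow> nat \<Rightarrow> nat" where
  "budget_base e l n 0 = n + 2"
| "budget_base e l n (Suc r) = budget e r l n + l (budget e r l n) + 2"

lemma budget_eq_base_power: "budget e r l n = budget_base e l n r ^ (2 ^ e)"
  by (cases r) simp_all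

lemma budget_base_ge: "1 \<le> budget_base e l n r"
  by (cases r) simp_all

fun revision_value :: "nat \<Rightarrow> (nat \<Rightarrow> nat) \<Rightarrow> nat \<Rightarrow> nat \<Rightarrow> nat" where
  "revision_value e l n 0 = n"
| "revision_value e l n (Suc r) = max (revision_value e l n r) (l (budget e r l n))"

definition round_cost :: "nat \<Rightarrow> (nat \<Rightarrow> nat) \<Rightarrow> nat \<Rightarrow> nat \<Rightarrow> nat" where
  "round_cost e l n r = e * (9 * (budget e r l n + 1) * (budget e r l n + 1)) + budget e r l n + 1"

fun clock_cost :: "nat \<Rightarrow> (nat \<Rightarrow> nat) \<Rightarrow> nat \<Rightarrow> nat \<Rightarrow> nat" where
  "clock_cost e l n 0 = 2 * n + 8 + round_cost e l n 0"
| "clock_cost e l n (Suc r) = clock_cost e l n r + 1 + (budget e r l n + 2 * l (budget e r l n) + 8) + round_cost e l n (Suc r)"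

lemma etape_0: "(etape 0, 0) = blank_tape" by (simp add: etape_def blank_tape_def)

lemma string_of_utape: "string_of_cells (utape L) = replicate L True"
  using string_of_cells_unary[of L] by (simp add: utape_def)

lemma pow_bound_add: assumes "2 \<le> (V::nat)" "x \<le> V ^ p" "y \<le> V ^ q" shows "x + y \<le> V ^ (p + q + 1)"
proof -
  have "V ^ p \<le> V ^ (p + q)" "V ^ q \<le> V ^ (p + q)" using assms(1) by (simp_all add: power_increasing)
  then have "x + y \<le> 2 * V ^ (p + q)" using assms(2,3) by simp
  also have "\<dots> \<le> V * V ^ (p + q)" using assms(1) by simp
  finally show ?thesis by simp
qed

lemma pow_bound_mult: assumes "x \<le> (V::nat) ^ p" "y \<le> V ^ q" shows "x * y \<le> V ^ (p + q)"
  using mult_le_mono[OF assms] by (simp add: power_add)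

lemma pow_bound_power: assumes "x \<le> (V::nat) ^ p" shows "x ^ c \<le> V ^ (p * c)"
  using power_mono[OF assms, of c] by (simp add: power_mult)

lemma pow_bound_const: assumes "2 \<le> (V::nat)" shows "k \<le> V ^ k"
proof -
  have "k < 2 ^ k" by (rule less_exp)
  also have "\<dots> \<le> V ^ k" using assms by (rule power_mono) simp
  finally show ?thesis by simp
qed

lemma pow_bound_mono: assumes "2 \<le> (V::nat)" "p \<le> q" "x \<le> V ^ p" shows "x \<le> V ^ q"
proof -
  have "V ^ p \<le> V ^ q" by (rule power_increasing) (use assms in auto)
  then show ?thesis using assms(3) by linarith
qed

lemma pow_bound_mono_base: assumes "V \<le> (V'::nat)" "x \<le> V ^ p" shows "x \<le> V' ^ p"
  using assms power_mono[OF assms(1), of p] by simp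

fun deg_base :: "nat \<Rightarrow> nat \<Rightarrow> nat" where
  "deg_base e 0 = 1"
| "deg_base e (Suc r) = 2 ^ e * deg_base e r + 2"

definition deg_round :: "nat \<Rightarrow> nat \<Rightarrow> nat" where
  "deg_round e r = e + 3 * (2 ^ e * deg_base e r) + 13"

fun deg_clock :: "nat \<Rightarrow> nat \<Rightarrow> nat" where
  "deg_clock e 0 = 13 + deg_round e 0"
| "deg_clock e (Suc r) = deg_clock e r + 2 ^ e * deg_base e r + 16 + deg_round e (Suc r)"

definition deg_total :: "nat \<Rightarrow> nat \<Rightarrow> nat" where
  "deg_total e d = deg_clock e d + 2 ^ e * deg_base e d + 6"

lemma revision_value_mono: "r \<le> r' \<Longrightarrow> revision_value e l n r \<le> revision_value e l n r'"
  by (induction r') (auto simp: le_Suc_eq intro: le_trans)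

lemma revision_value_ge_app: "i < r \<Longrightarrow> l (budget e i l n) \<le> revision_value e l n r"
  using revision_value_mono[of "Suc i" r e l n] by simp

lemma budget_base_pow_bound: "budget_base e l n r \<le> (revision_value e l n r + 2) ^ deg_base e r"
proof (induction r)
  case 0 then show ?case by simp
next
  case (Suc r)
  let ?V = "revision_value e l n r + 2" and ?V' = "revision_value e l n (Suc r) + 2"
  have V2: "2 \<le> ?V'" by simp
  have VV: "?V \<le> ?V'" by simp
  have K: "budget e r l n \<le> ?V' ^ (deg_base e r * 2 ^ e)"
    using pow_bound_mono_base[OF VV pow_bound_power[OF Suc.IH, of "2 ^ e"]] by (simp add: budget_eq_base_power)
  have L: "l (budget e r l n) + 2 \<le> ?V' ^ 1" using revision_value_ge_app[of r "Suc r" l e n] by simp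
  have "budget e r l n + (l (budget e r l n) + 2) \<le> ?V' ^ (deg_base e r * 2 ^ e + 1 + 1)" by (rule pow_bound_add[OF V2 K L])
  then show ?case by (simp add: mult.commute add.assoc)
qed

lemma budget_pow_bound: "budget e r l n \<le> (revision_value e l n r + 2) ^ (2 ^ e * deg_base e r)"
  using pow_bound_power[OF budget_base_pow_bound[of e l n r], of "2 ^ e"] by (simp add: budget_eq_base_power mult.commute)

lemma round_cost_pow_bound: "round_cost e l n r \<le> (revision_value e l n r + 2) ^ deg_round e r"
proof -
  let ?V = "revision_value e l n r + 2" and ?k = "2 ^ e * deg_base e r"
  have V2: "2 \<le> ?V" by simp
  note K = budget_pow_bound[of e r l n]
  have one: "1 \<le> ?V ^ 0" by simp
  have K1: "budget e r l n + 1 \<le> ?V ^ (?k + 0 + 1)" by (rule pow_bound_add[OF V2 K one])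
  have a: "9 * (budget e r l n + 1) \<le> ?V ^ (9 + (?k + 0 + 1))" by (rule pow_bound_mult[OF pow_bound_const[OF V2] K1])
  have b: "9 * (budget e r l n + 1) * (budget e r l n + 1) \<le> ?V ^ ((9 + (?k + 0 + 1)) + (?k + 0 + 1))" by (rule pow_bound_mult[OF a K1])
  have c: "e * (9 * (budget e r l n + 1) * (budget e r l n + 1)) \<le> ?V ^ (e + ((9 + (?k + 0 + 1)) + (?k + 0 + 1)))" by (rule pow_bound_mult[OF pow_bound_const[OF V2] b])
  have f: "e * (9 * (budget e r l n + 1) * (budget e r l n + 1)) + budget e r l n \<le> ?V ^ ((e + ((9 + (?k + 0 + 1)) + (?k + 0 + 1))) + ?k + 1)"
    by (rule pow_bound_add[OF V2 c K])
  have g: "e * (9 * (budget e r l n + 1) * (budget e r l n + 1)) + budget e r l n + 1 \<le> ?V ^ (((e + ((9 + (?k + 0 + 1)) + (?k + 0 + 1))) + ?k + 1) + 0 + 1)"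
    by (rule pow_bound_add[OF V2 f one])
  have "((e + ((9 + (?k + 0 + 1)) + (?k + 0 + 1))) + ?k + 1) + 0 + 1 = deg_round e r" by (simp add: deg_round_def)
  then show ?thesis using g by (simp add: round_cost_def)
qed

lemma clock_cost_pow_bound: "clock_cost e l n r \<le> (revision_value e l n r + 2) ^ deg_clock e r"
proof (induction r)
  case 0
  let ?V = "revision_value e l n 0 + 2"
  have V2: "2 \<le> ?V" by simp
  have nn: "n \<le> ?V ^ 1" by simp
  have a: "2 * n \<le> ?V ^ (2 + 1)" by (rule pow_bound_mult[OF pow_bound_const[OF V2] nn])
  have b: "2 * n + 8 \<le> ?V ^ ((2 + 1) + 8 + 1)" by (rule pow_bound_add[OF V2 a pow_bound_const[OF V2]])
  have c: "2 * n + 8 + round_cost e l n 0 \<le> ?V ^ (((2 + 1) + 8 + 1) + deg_round e 0 + 1)" by (rule pow_bound_add[OF V2 b round_cost_pow_bound])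
  have eq: "((2 + 1) + 8 + 1) + deg_round e 0 + 1 = deg_clock e 0" by simp
  show ?case unfolding clock_cost.simps(1) using c unfolding eq .
next
  case (Suc r)
  let ?V = "revision_value e l n r + 2" and ?V' = "revision_value e l n (Suc r) + 2" and ?K = "budget e r l n" and ?k = "2 ^ e * deg_base e r"
  have V2: "2 \<le> ?V'" by simp
  have VV: "?V \<le> ?V'" by simp
  have T: "clock_cost e l n r \<le> ?V' ^ deg_clock e r" by (rule pow_bound_mono_base[OF VV Suc.IH])
  have K: "?K \<le> ?V' ^ ?k" by (rule pow_bound_mono_base[OF VV budget_pow_bound])
  have one: "1 \<le> ?V' ^ 0" by simp
  have L: "l ?K \<le> ?V' ^ 1" using revision_value_ge_app[of r "Suc r" l e n] by simp
  have a: "clock_cost e l n r + 1 \<le> ?V' ^ (deg_clock e r + 0 + 1)" by (rule pow_bound_add[OF V2 T one])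
  have b: "2 * l ?K \<le> ?V' ^ (2 + 1)" by (rule pow_bound_mult[OF pow_bound_const[OF V2] L])
  have c: "?K + 2 * l ?K \<le> ?V' ^ (?k + (2 + 1) + 1)" by (rule pow_bound_add[OF V2 K b])
  have f: "?K + 2 * l ?K + 8 \<le> ?V' ^ ((?k + (2 + 1) + 1) + 8 + 1)" by (rule pow_bound_add[OF V2 c pow_bound_const[OF V2]])
  have g: "clock_cost e l n r + 1 + (?K + 2 * l ?K + 8) \<le> ?V' ^ ((deg_clock e r + 0 + 1) + ((?k + (2 + 1) + 1) + 8 + 1) + 1)"
    by (rule pow_bound_add[OF V2 a f])
  have h: "clock_cost e l n r + 1 + (?K + 2 * l ?K + 8) + round_cost e l n (Suc r) \<le> ?V' ^ (((deg_clock e r + 0 + 1) + ((?k + (2 + 1) + 1) + 8 + 1) + 1) + deg_round e (Suc r) + 1)"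
    by (rule pow_bound_add[OF V2 g round_cost_pow_bound])
  have eq: "((deg_clock e r + 0 + 1) + ((?k + (2 + 1) + 1) + 8 + 1) + 1) + deg_round e (Suc r) + 1 = deg_clock e (Suc r)" by simp
  show ?case unfolding clock_cost.simps(2) using h unfolding eq .
qed

lemma deg_clock_mono: "r \<le> r' \<Longrightarrow> deg_clock e r \<le> deg_clock e r'"
  by (induction r') (auto simp: le_Suc_eq intro: le_trans)

lemma total_cost_pow_bound: "clock_cost e l n d + 2 + 2 * budget e d l n \<le> (revision_value e l n (Suc d) + 2) ^ deg_total e d"
proof -
  let ?V = "revision_value e l n d + 2" and ?V' = "revision_value e l n (Suc d) + 2" and ?k = "2 ^ e * deg_base e d"
  have V2: "2 \<le> ?V'" by simp
  have VV: "?V \<le> ?V'" by simp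
  have T: "clock_cost e l n d \<le> ?V' ^ deg_clock e d" by (rule pow_bound_mono_base[OF VV clock_cost_pow_bound])
  have K: "budget e d l n \<le> ?V' ^ ?k" by (rule pow_bound_mono_base[OF VV budget_pow_bound])
  have a: "clock_cost e l n d + 2 \<le> ?V' ^ (deg_clock e d + 2 + 1)" by (rule pow_bound_add[OF V2 T pow_bound_const[OF V2]])
  have b: "2 * budget e d l n \<le> ?V' ^ (2 + ?k)" by (rule pow_bound_mult[OF pow_bound_const[OF V2] K])
  have c: "clock_cost e l n d + 2 + 2 * budget e d l n \<le> ?V' ^ ((deg_clock e d + 2 + 1) + (2 + ?k) + 1)" by (rule pow_bound_add[OF V2 a b])
  have eq: "(deg_clock e d + 2 + 1) + (2 + ?k) + 1 = deg_total e d" by (simp add: deg_total_def)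
  show ?thesis using c unfolding eq .
qed

lemma clock_cost_pow_bound_total: "r \<le> d \<Longrightarrow> clock_cost e l n r \<le> (revision_value e l n r + 2) ^ deg_total e d"
proof -
  assume r: "r \<le> d"
  have "deg_clock e r \<le> deg_total e d" using deg_clock_mono[OF r, of e] by (simp add: deg_total_def)
  then show ?thesis using pow_bound_mono[OF _ _ clock_cost_pow_bound] by simp
qed


context
  fixes M :: otm and e d :: nat and \<phi> :: sfun and a :: bstr
  assumes wf: "wf_otm M" and lm: "\<phi> \<in> length_monotone"
begin

abbreviation "Mp \<equiv> clocked M e d"
abbreviation "sz \<equiv> size_fn \<phi>"
abbreviation "len_a \<equiv> length a"
abbreviation "lrev \<equiv> length_revision Mp \<phi> a"
abbreviation "at_query r X \<equiv> cfg M (5,0,0) (input_cells a, 0) (utape (budget e r sz len_a), budget e r sz len_a) X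
   (ctape (budget e r sz len_a), Suc (budget e r sz len_a)) (ctape (budget e r sz len_a), Suc (budget e r sz len_a)) (ctape 0, 1) (etape (4 + r), 0)"
abbreviation "after_query r \<equiv> cfg M (6,0,0) (input_cells a, 0) bb (tape_of_string (\<phi> (replicate (budget e r sz len_a) True)))
   (ctape (budget e r sz len_a), Suc (budget e r sz len_a)) (ctape (budget e r sz len_a), Suc (budget e r sz len_a)) (ctape 0, 1) (etape (4 + r), 0)"

lemma k4: "4 \<le> otm_ntapes M" using wf_otm_basic[OF wf] by simp
lemma wf_Mp: "wf_otm Mp" by (rule wf_clocked)

lemma clock_round_0: "\<exists>\<tau> X. \<tau> \<le> clock_cost e sz len_a 0 \<and> otm_run Mp \<phi> a \<tau> = at_query 0 X \<and> (\<forall>i\<le>\<tau>. lrev i = len_a)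
  \<and> (\<forall>i<\<tau>. fst (otm_run Mp \<phi> a i) \<noteq> otm_halt Mp)"
proof -
  have r1: "reaches Mp \<phi> (otm_init Mp a)
   (cfg M (square_start e 0) (input_cells a, 0) bb bb (ctape (len_a + 2), 1) (ctape (len_a + 2), 1) (ctape 0, 1) bb) (2 * len_a + 8)"
    by (rule input_phase[OF k4])
  have r2: "reaches Mp \<phi> (cfg M (square_start e 0) (input_cells a, 0) bb bb (ctape (len_a + 2), 1) (ctape (len_a + 2), 1) (ctape 0, 1) (etape 0, 0))
     (at_query 0 bb) (round_cost e sz len_a 0)"
    using round_to_query[OF k4, of 0 d "len_a + 2" e \<phi> "(input_cells a, 0)" bb 0] by (simp add: round_cost_def)
  have r: "reaches Mp \<phi> (otm_run Mp \<phi> a 0) (at_query 0 bb) (2 * len_a + 8 + round_cost e sz len_a 0)"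
    using reaches_trans[OF r1 r2[unfolded etape_0]] by (simp add: otm_run_0)
  obtain m where m: "m \<le> 2 * len_a + 8 + round_cost e sz len_a 0" "otm_run Mp \<phi> a (0 + m) = at_query 0 bb"
    "\<forall>i\<le>m. lrev (0 + i) = lrev 0" "\<forall>i<m. fst (otm_run Mp \<phi> a (0 + i)) \<noteq> otm_halt Mp"
    using reaches_run_length_revision[OF wf_Mp refl r] by blast
  show ?thesis using m by (intro exI[of _ m] exI[of _ bb]) auto
qed

lemma cfg_nth3: "snd (cfg M s In Q X C1 C2 D E) ! 3 = X"
  using k4 by (simp add: cfg_def layout_def del: upt_Suc)

lemma answer_len_cfg: "otm_run Mp \<phi> a t = cfg M s In Q X C1 C2 D E \<Longrightarrow> answer_len Mp \<phi> a t = length (string_of_cells (fst X))"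
  by (simp add: answer_len_def cfg_nth3)

lemma after_query_cfg: "otm_run Mp \<phi> a t = at_query r X \<Longrightarrow> otm_run Mp \<phi> a (Suc t) = after_query r"
  using query_step[OF k4, of e d \<phi> "(input_cells a, 0)" "(utape (budget e r sz len_a), budget e r sz len_a)"] by (simp add: otm_run_Suc string_of_utape)

lemma clock_round_step:
  assumes r: "r < d" and R: "otm_run Mp \<phi> a \<tau> = at_query r X" and o: "lrev \<tau> = revision_value e sz len_a r"
  shows "\<exists>\<tau>' X'. \<tau> < \<tau>' \<and> \<tau>' \<le> \<tau> + 1 + (budget e r sz len_a + 2 * sz (budget e r sz len_a) + 8) + round_cost e sz len_a (Suc r)
    \<and> otm_run Mp \<phi> a \<tau>' = at_query (Suc r) X' \<and> (\<forall>i. \<tau> < i \<and> i \<le> \<tau>' \<longrightarrow> lrev i = revision_value e sz len_a (Suc r))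
    \<and> (\<forall>i. \<tau> \<le> i \<and> i < \<tau>' \<longrightarrow> fst (otm_run Mp \<phi> a i) \<noteq> otm_halt Mp)"
proof -
  let ?K = "budget e r sz len_a"
  let ?w = "\<phi> (replicate ?K True)"
  have lw: "length ?w = sz ?K" using size_fn_length_monotone[OF lm, of ?K] by simp
  have s1: "otm_run Mp \<phi> a (Suc \<tau>) = after_query r" by (rule after_query_cfg[OF R])
  have a1: "answer_len Mp \<phi> a (Suc \<tau>) = sz ?K" using answer_len_cfg[OF s1] lw by (simp add: string_of_tape_of_string)
  have o1: "lrev (Suc \<tau>) = revision_value e sz len_a (Suc r)" using o a1 by simp
  have ra: "reaches Mp \<phi> (after_query r)
     (cfg M (square_start e (Suc r)) (input_cells a, 0) bb (fst (tape_of_string ?w), length ?w) (ctape (?K + length ?w + 2), 1) (ctape (?K + length ?w + 2), 1) (ctape 0, 1) (etape (4 + r), 0))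
     (?K + 2 * length ?w + 8)"
    by (rule after_query_round[OF k4 r])
  have ub: "?K + length ?w + 2 = budget_base e sz len_a (Suc r)" using lw by simp
  have rb: "reaches Mp \<phi> (cfg M (square_start e (Suc r)) (input_cells a, 0) bb (fst (tape_of_string ?w), length ?w) (ctape (budget_base e sz len_a (Suc r)), 1) (ctape (budget_base e sz len_a (Suc r)), 1) (ctape 0, 1) (etape (4 + r), 0))
     (at_query (Suc r) (fst (tape_of_string ?w), length ?w)) (round_cost e sz len_a (Suc r))"
    using round_to_query[OF k4, of "Suc r" d "budget_base e sz len_a (Suc r)" e \<phi> "(input_cells a, 0)" "(fst (tape_of_string ?w), length ?w)" "4 + r"] r budget_base_ge
    by (simp add: round_cost_def budget_eq_base_power[symmetric] del: budget_base.simps budget.simps)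
  have rr: "reaches Mp \<phi> (otm_run Mp \<phi> a (Suc \<tau>)) (at_query (Suc r) (fst (tape_of_string ?w), length ?w)) ((?K + 2 * sz ?K + 8) + round_cost e sz len_a (Suc r))"
    using reaches_trans[OF ra[unfolded ub] rb] s1 lw by simp
  obtain m where m: "m \<le> (?K + 2 * sz ?K + 8) + round_cost e sz len_a (Suc r)" "otm_run Mp \<phi> a (Suc \<tau> + m) = at_query (Suc r) (fst (tape_of_string ?w), length ?w)"
    "\<forall>i\<le>m. lrev (Suc \<tau> + i) = lrev (Suc \<tau>)" "\<forall>i<m. fst (otm_run Mp \<phi> a (Suc \<tau> + i)) \<noteq> otm_halt Mp"
    using reaches_run_length_revision[OF wf_Mp refl rr] by blast
  have A: "\<forall>i. \<tau> < i \<and> i \<le> Suc \<tau> + m \<longrightarrow> lrev i = revision_value e sz len_a (Suc r)"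
  proof (intro allI impI)
    fix i assume i: "\<tau> < i \<and> i \<le> Suc \<tau> + m"
    define j where "j = i - Suc \<tau>"
    have j: "i = Suc \<tau> + j" "j \<le> m" using i unfolding j_def by linarith+
    then show "lrev i = revision_value e sz len_a (Suc r)" using m(3) o1 by simp
  qed
  have B: "\<forall>i. \<tau> \<le> i \<and> i < Suc \<tau> + m \<longrightarrow> fst (otm_run Mp \<phi> a i) \<noteq> otm_halt Mp"
  proof (intro allI impI)
    fix i assume i: "\<tau> \<le> i \<and> i < Suc \<tau> + m"
    show "fst (otm_run Mp \<phi> a i) \<noteq> otm_halt Mp"
    proof (cases "i = \<tau>")
      case True then show ?thesis using R by (simp add: cfg_def clocked_simps)
    next
      case False
      define j where "j = i - Suc \<tau>"
      have j: "i = Suc \<tau> + j" "j < m" using i False unfolding j_def by linarith+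
      then show ?thesis using m(4) by simp
    qed
  qed
  show ?thesis
    apply (rule exI[of _ "Suc \<tau> + m"], rule exI[of _ "(fst (tape_of_string ?w), length ?w)"])
    using m A B by simp
qed

lemma clock_rounds: "r \<le> d \<Longrightarrow> \<exists>\<tau> X. \<tau> \<le> clock_cost e sz len_a r \<and> otm_run Mp \<phi> a \<tau> = at_query r X \<and> lrev \<tau> = revision_value e sz len_a r
   \<and> (\<forall>i\<le>\<tau>. \<exists>j\<le>r. lrev i = revision_value e sz len_a j \<and> i \<le> clock_cost e sz len_a j)
   \<and> (\<forall>i<\<tau>. fst (otm_run Mp \<phi> a i) \<noteq> otm_halt Mp)"
proof (induction r)
  case 0
  obtain \<tau> X where t: "\<tau> \<le> clock_cost e sz len_a 0" "otm_run Mp \<phi> a \<tau> = at_query 0 X" "\<forall>i\<le>\<tau>. lrev i = len_a"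
    "\<forall>i<\<tau>. fst (otm_run Mp \<phi> a i) \<noteq> otm_halt Mp" using clock_round_0 by blast
  have "\<forall>i\<le>\<tau>. \<exists>j\<le>0. lrev i = revision_value e sz len_a j \<and> i \<le> clock_cost e sz len_a j" using t by auto
  then show ?case using t by (intro exI[of _ \<tau>] exI[of _ X]) auto
next
  case (Suc r)
  then obtain \<tau> X where t: "\<tau> \<le> clock_cost e sz len_a r" "otm_run Mp \<phi> a \<tau> = at_query r X" "lrev \<tau> = revision_value e sz len_a r"
    "\<forall>i\<le>\<tau>. \<exists>j\<le>r. lrev i = revision_value e sz len_a j \<and> i \<le> clock_cost e sz len_a j"
    "\<forall>i<\<tau>. fst (otm_run Mp \<phi> a i) \<noteq> otm_halt Mp" by auto
  have r: "r < d" using Suc.prems by simp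
  obtain \<tau>' X' where t': "\<tau> < \<tau>'" "\<tau>' \<le> \<tau> + 1 + (budget e r sz len_a + 2 * sz (budget e r sz len_a) + 8) + round_cost e sz len_a (Suc r)"
    "otm_run Mp \<phi> a \<tau>' = at_query (Suc r) X'" "\<forall>i. \<tau> < i \<and> i \<le> \<tau>' \<longrightarrow> lrev i = revision_value e sz len_a (Suc r)"
    "\<forall>i. \<tau> \<le> i \<and> i < \<tau>' \<longrightarrow> fst (otm_run Mp \<phi> a i) \<noteq> otm_halt Mp"
    using clock_round_step[OF r t(2) t(3)] by blast
  have b: "\<tau>' \<le> clock_cost e sz len_a (Suc r)" using t(1) t'(2) by simp
  have A: "\<forall>i\<le>\<tau>'. \<exists>j\<le>Suc r. lrev i = revision_value e sz len_a j \<and> i \<le> clock_cost e sz len_a j"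
  proof (intro allI impI)
    fix i assume i: "i \<le> \<tau>'"
    show "\<exists>j\<le>Suc r. lrev i = revision_value e sz len_a j \<and> i \<le> clock_cost e sz len_a j"
    proof (cases "i \<le> \<tau>")
      case True
      then obtain j where "j \<le> r" "lrev i = revision_value e sz len_a j" "i \<le> clock_cost e sz len_a j" using t(4) by blast
      then show ?thesis by (intro exI[of _ j]) auto
    next
      case False
      then show ?thesis using t'(4) i b by (intro exI[of _ "Suc r"]) auto
    qed
  qed
  have B: "\<forall>i<\<tau>'. fst (otm_run Mp \<phi> a i) \<noteq> otm_halt Mp"
    using t(5) t'(5) by (metis not_le)
  show ?case using b t'(3) t'(4) t'(1) A B by (intro exI[of _ \<tau>'] exI[of _ X']) auto
qed

lemma clock_phase:
  obtains \<tau> where "\<tau> \<le> clock_cost e sz len_a d"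
    "\<forall>i\<le>\<tau>. \<exists>j\<le>d. lrev i = revision_value e sz len_a j \<and> i \<le> clock_cost e sz len_a j"
    "lrev (Suc \<tau>) = revision_value e sz len_a (Suc d)" "\<not> otm_halted Mp \<phi> a (Suc \<tau>)"
    "otm_run Mp \<phi> a (Suc (Suc \<tau>)) = sim_cfg M (sim_state M (fst (otm_run M \<phi> a 0)) 1) (snd (otm_run M \<phi> a 0))
       (fst (tape_of_string (\<phi> (replicate (budget e d sz len_a) True)))) 1 (sim_extra (otm_ntapes M) (budget e d sz len_a))"
proof -
  let ?Kd = "budget e d sz len_a"
  let ?w = "\<phi> (replicate ?Kd True)"
  have lw: "length ?w = sz ?Kd" using size_fn_length_monotone[OF lm, of ?Kd] by simp
  obtain \<tau> X where t: "\<tau> \<le> clock_cost e sz len_a d"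
    "otm_run Mp \<phi> a \<tau> = at_query d X" "lrev \<tau> = revision_value e sz len_a d"
    "\<forall>i\<le>\<tau>. \<exists>j\<le>d. lrev i = revision_value e sz len_a j \<and> i \<le> clock_cost e sz len_a j"
    using clock_rounds[OF order_refl] by blast
  have s1: "otm_run Mp \<phi> a (Suc \<tau>) = after_query d" by (rule after_query_cfg[OF t(2)])
  have "answer_len Mp \<phi> a (Suc \<tau>) = sz ?Kd" using answer_len_cfg[OF s1] lw by (simp add: string_of_tape_of_string)
  then have o1: "lrev (Suc \<tau>) = revision_value e sz len_a (Suc d)" using t(3) by simp
  have nh1: "\<not> otm_halted Mp \<phi> a (Suc \<tau>)" using s1 by (simp add: otm_halted_def cfg_def clocked_simps)
  have "otm_run Mp \<phi> a (Suc (Suc \<tau>)) = sim_cfg M (sim_state M (otm_start M) 1) (snd (otm_init M a))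
      (fst (tape_of_string ?w)) 1 (sim_extra (otm_ntapes M) ?Kd)"
    using start_simulation[OF wf, of e d \<phi> a ?w ?Kd] s1 by (simp add: otm_run_Suc)
  then show ?thesis using that[OF t(1,4) o1 nh1] by (simp add: otm_run_0 otm_init_def)
qed

lemma simulation_phase:
  assumes Th: "otm_time M \<phi> a = enat T" and TK: "T \<le> budget e d sz len_a"
  obtains \<tau> N where "\<tau> \<le> clock_cost e sz len_a d"
    "\<forall>i\<le>\<tau>. \<exists>j\<le>d. lrev i = revision_value e sz len_a j \<and> i \<le> clock_cost e sz len_a j"
    "N \<le> Suc (Suc \<tau>) + 2 * T" "otm_time Mp \<phi> a = enat N" "otm_output Mp \<phi> a = otm_output M \<phi> a"
    "\<And>i. Suc \<tau> \<le> i \<Longrightarrow> lrev i = revision_value e sz len_a (Suc d)"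
proof -
  let ?Kd = "budget e d sz len_a"
  let ?w = "\<phi> (replicate ?Kd True)"
  let ?k = "otm_ntapes M"
  obtain \<tau> where t: "\<tau> \<le> clock_cost e sz len_a d"
    "\<forall>i\<le>\<tau>. \<exists>j\<le>d. lrev i = revision_value e sz len_a j \<and> i \<le> clock_cost e sz len_a j"
    and o1: "lrev (Suc \<tau>) = revision_value e sz len_a (Suc d)" and nh1: "\<not> otm_halted Mp \<phi> a (Suc \<tau>)"
    and start: "otm_run Mp \<phi> a (Suc (Suc \<tau>)) = sim_cfg M (sim_state M (fst (otm_run M \<phi> a 0)) 1)
      (snd (otm_run M \<phi> a 0)) (fst (tape_of_string ?w)) 1 (sim_extra ?k ?Kd)"
    by (rule clock_phase)
  note TT = otm_time_enatD[OF Th]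
  have ext: "sim_extra ?k ?Kd (?k + 3) = (etape 3, 0)" by (simp add: sim_extra_def)
  have XfL: "length (string_of_cells (fst (tape_of_string ?w))) \<le> sz ?Kd"
    using size_fn_length_monotone[OF lm, of ?Kd] by (simp add: string_of_tape_of_string)
  have LT: "size_fn \<phi> T \<le> sz ?Kd" using size_fn_mono[OF TK] .
  obtain m f X3 where sm: "m \<le> 2 * T" "otm_run Mp \<phi> a (Suc (Suc \<tau>) + m) = sim_cfg M (sim_state M (fst (otm_run M \<phi> a T)) f) (snd (otm_run M \<phi> a T)) X3 f (sim_extra ?k ?Kd)"
    "0 < T \<longrightarrow> fst (otm_run Mp \<phi> a (Suc (Suc \<tau>) + m - 1)) \<noteq> encode_state (7,0,0)"
    "\<forall>n. Suc (Suc \<tau>) \<le> n \<and> n \<le> Suc (Suc \<tau>) + m \<longrightarrow> answer_len Mp \<phi> a n \<le> sz ?Kd"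
    using simulation[OF wf start ext TT(2) XfL LT order_refl] by blast
  let ?N = "Suc (Suc \<tau>) + m"
  have hM: "fst (otm_run M \<phi> a T) = otm_halt M" using TT(1) by (simp add: otm_halted_def)
  have hN: "otm_halted Mp \<phi> a ?N" using sm(2) hM by (simp add: otm_halted_def sim_cfg_def sim_state_def clocked_simps)
  have nhN: "?N = 0 \<or> \<not> otm_halted Mp \<phi> a (?N - 1)"
  proof (cases "T = 0")
    case True
    then show ?thesis using sm(1) nh1 by simp
  next
    case False
    then show ?thesis using sm(3) by (simp add: otm_halted_def clocked_simps)
  qed
  note NT = otm_time_first_halt[OF hN nhN]
  have out: "otm_output Mp \<phi> a = otm_output M \<phi> a"
  proof -
    have "otm_output Mp \<phi> a = string_of_cells (fst (snd (otm_run Mp \<phi> a ?N) ! 1))"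
      by (simp add: otm_output_def NT(2))
    also have "snd (otm_run Mp \<phi> a ?N) ! 1 = snd (otm_run M \<phi> a T) ! 1"
      using sm(2) k4 by (simp add: sim_cfg_def sim_tape_def del: upt_Suc)
    finally show ?thesis by (simp add: otm_output_def TT(3))
  qed
  have ansb: "answer_len Mp \<phi> a n \<le> sz ?Kd" if "Suc (Suc \<tau>) \<le> n" for n
  proof (cases "n \<le> ?N")
    case True then show ?thesis using sm(4) that by blast
  next
    case False
    then have "otm_run Mp \<phi> a n = otm_run Mp \<phi> a ?N" by (intro otm_run_halted_const[OF hN]) simp
    then show ?thesis using sm(4) by (simp add: answer_len_def)
  qed
  have oc: "lrev (Suc \<tau> + i) = revision_value e sz len_a (Suc d)" for i
  proof (induction i)
    case 0 then show ?case using o1 by simp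
  next
    case (Suc i)
    have "answer_len Mp \<phi> a (Suc (Suc \<tau> + i)) \<le> sz ?Kd" by (rule ansb) simp
    then show ?case using Suc by simp
  qed
  have "lrev i = revision_value e sz len_a (Suc d)" if "Suc \<tau> \<le> i" for i
    using oc[of "i - Suc \<tau>"] that by simp
  then show ?thesis using that[OF t _ NT(1) out] sm(1) by simp
qed

lemma clocked_correct:
  assumes Th: "otm_time M \<phi> a = enat T" and TK: "T \<le> budget e d sz len_a"
  shows "\<exists>N. otm_time Mp \<phi> a = enat N \<and> otm_output Mp \<phi> a = otm_output M \<phi> a
    \<and> (\<forall>i\<le>N. i \<le> (lrev i + 2) ^ deg_total e d) \<and> (\<forall>i. lrev i \<in> revision_value e sz len_a ` {0..Suc d})"
proof -
  obtain \<tau> N where t: "\<tau> \<le> clock_cost e sz len_a d"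
    "\<forall>i\<le>\<tau>. \<exists>j\<le>d. lrev i = revision_value e sz len_a j \<and> i \<le> clock_cost e sz len_a j"
    and N: "N \<le> Suc (Suc \<tau>) + 2 * T" "otm_time Mp \<phi> a = enat N" "otm_output Mp \<phi> a = otm_output M \<phi> a"
    and late: "\<And>i. Suc \<tau> \<le> i \<Longrightarrow> lrev i = revision_value e sz len_a (Suc d)"
    using simulation_phase[OF Th TK] by blast
  have range: "lrev i \<in> revision_value e sz len_a ` {0..Suc d}" for i
  proof (cases "i \<le> \<tau>")
    case True
    then obtain j where "j \<le> d" "lrev i = revision_value e sz len_a j" using t(2) by blast
    then show ?thesis by simp
  next
    case False
    then have "lrev i = revision_value e sz len_a (Suc d)" using late[of i] by simp
    then show ?thesis by (metis atLeastAtMost_iff image_eqI le_refl zero_le)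
  qed
  have tb: "i \<le> (lrev i + 2) ^ deg_total e d" if i: "i \<le> N" for i
  proof (cases "i \<le> \<tau>")
    case True
    then obtain j where j: "j \<le> d" "lrev i = revision_value e sz len_a j" "i \<le> clock_cost e sz len_a j"
      using t(2) by blast
    then show ?thesis using le_trans[OF j(3) clock_cost_pow_bound_total[OF j(1)]] by simp
  next
    case False
    then have "lrev i = revision_value e sz len_a (Suc d)" using late[of i] by simp
    moreover have "i \<le> clock_cost e sz len_a d + 2 + 2 * budget e d sz len_a" using i N(1) t(1) TK by linarith
    ultimately show ?thesis using total_cost_pow_bound[of e sz len_a d] by (metis le_trans)
  qed
  show ?thesis using N(2,3) tb range by blast
qed
end


section \<open>Polynomial time implies strongly polynomial time\<close>

lemma poly_shifted_power: "poly ([:2, 1:] ^ m) (x::nat) = (x + 2) ^ m"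
  by (simp add: poly_power add.commute)

theorem poly_time_imp_strongly_poly_time:
  assumes A: "A \<subseteq> length_monotone" and P: "poly_time_computable A F"
  shows "strongly_poly_time_computable A F"
proof -
  obtain M P where comp: "otm_computes M F A" and Ps: "P \<in> sopoly"
    and tb: "\<forall>\<phi>\<in>A. \<forall>a. otm_time M \<phi> a \<le> enat (P (size_fn \<phi>) (length a))"
    using P unfolding poly_time_computable_def by blast
  have wf: "wf_otm M" using comp by (simp add: otm_computes_def)
  obtain e d where K: "\<forall>l. mono l \<longrightarrow> (\<forall>n. P l n \<le> budget e d l n)" using sopoly_le_budget[OF Ps] by blast
  let ?Mp = "clocked M e d"
  let ?t = "[:2, 1:] ^ deg_total e d :: nat poly"
  have main: "otm_time ?Mp \<phi> a \<noteq> \<infinity> \<and> otm_output ?Mp \<phi> a = F \<phi> a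
     \<and> (\<forall>n. enat n \<le> otm_time ?Mp \<phi> a \<longrightarrow> n \<le> poly ?t (length_revision ?Mp \<phi> a n))
     \<and> finite (range (length_revision ?Mp \<phi> a)) \<and> card (range (length_revision ?Mp \<phi> a)) \<le> Suc (Suc d)"
    if \<phi>: "\<phi> \<in> A" for \<phi> a
  proof -
    have lm: "\<phi> \<in> length_monotone" using A \<phi> by auto
    have fin: "otm_time M \<phi> a \<noteq> \<infinity>" and outM: "otm_output M \<phi> a = F \<phi> a"
      using comp \<phi> unfolding otm_computes_def by auto
    obtain T where T: "otm_time M \<phi> a = enat T" using fin by auto
    have "otm_time M \<phi> a \<le> enat (P (size_fn \<phi>) (length a))" using tb \<phi> by blast
    then have "T \<le> P (size_fn \<phi>) (length a)" using T by simp
    also have "\<dots> \<le> budget e d (size_fn \<phi>) (length a)" using K mono_size_fn by blast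
    finally have TK: "T \<le> budget e d (size_fn \<phi>) (length a)" .
    obtain N where N: "otm_time ?Mp \<phi> a = enat N" "otm_output ?Mp \<phi> a = otm_output M \<phi> a"
      "\<forall>i\<le>N. i \<le> (length_revision ?Mp \<phi> a i + 2) ^ deg_total e d"
      "\<forall>i. length_revision ?Mp \<phi> a i \<in> revision_value e (size_fn \<phi>) (length a) ` {0..Suc d}"
      using clocked_correct[OF wf lm T TK] by blast
    have r: "range (length_revision ?Mp \<phi> a) \<subseteq> revision_value e (size_fn \<phi>) (length a) ` {0..Suc d}" using N(4) by auto
    have f: "finite (range (length_revision ?Mp \<phi> a))" by (rule finite_subset[OF r]) simp
    have "card (range (length_revision ?Mp \<phi> a)) \<le> card (revision_value e (size_fn \<phi>) (length a) ` {0..Suc d})"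
      by (rule card_mono[OF _ r]) simp
    also have "\<dots> \<le> card {0..Suc d}" by (rule card_image_le) simp
    finally have c: "card (range (length_revision ?Mp \<phi> a)) \<le> Suc (Suc d)" by simp
    have "\<forall>n. enat n \<le> otm_time ?Mp \<phi> a \<longrightarrow> n \<le> poly ?t (length_revision ?Mp \<phi> a n)"
      using N(1,3) by (simp add: poly_shifted_power)
    then show ?thesis using N(1,2) outM f c by simp
  qed
  have "otm_computes ?Mp F A" using main wf_clocked unfolding otm_computes_def by blast
  then show ?thesis unfolding strongly_poly_time_computable_def
    using main by blast
qed

theorem mainTheorem13:
  fixes A :: "sfun set" and F :: "sfun \<Rightarrow> sfun"
  assumes "A \<subseteq> length_monotone"
  shows "poly_time_computable A F \<longleftrightarrow> strongly_poly_time_computable A F"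
  using poly_time_imp_strongly_poly_time[OF assms] strongly_poly_time_imp_poly_time by blast

end
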